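(* The operators $\tau,\bar\tau\in\operatorname{End}(\check H^{\otimes 2})$ satisfy: (i) the pentagon identity in $\operatorname{End}(\check H^{\otimes3})$: $\tau_{23}\tau_{13}\tau_{12}=\tau_{12}\tau_{23}\,({}^\bullet\pi)_{21}$; (ii) the inversion relations in $\operatorname{End}(\check H^{\otimes2})$: $\tau_{21}\bar\tau=\pi^\bullet$ and $\bar\tau\,\tau_{21}={}^\bullet\pi$.
   Context: Let $\mathcal C$ be a strict monoidal category with tensor product $\boxtimes$ and unit object $\mathbb I$ which is an Ab-category (all Hom-sets are abelian groups, composition and $\boxtimes$ are biadditive) whose ground ring $\mathsf k=\operatorname{End}(\mathbb I)$ is a field; each $\operatorname{Hom}(V,W)$ is a $\mathsf k$-vector space via $kf=k\boxtimes f$, and $\boxtimes$ is $\mathsf k$-bilinear on morphisms. An object $V$ is simple if $\operatorname{End}(V)=\mathsf k\,\mathrm{Id}_V$; for such $V$ and $f\in\operatorname{End}(V)$, $\langle f\rangle\in\mathsf k$ denotes the scalar with $f=\langle f\rangle\mathrm{Id}_V$. For objects $V_i$ write $H^{ij}_k=\operatorname{Hom}(V_k,V_i\boxtimes V_j)$ and $H^k_{ij}=\operatorname{Hom}(V_i\boxtimes V_j,V_k)$. A $\Psi$-system in $\mathcal C$ consists of (1) a family of simple objects $\{V_i\}_{i\in I}$ with $\operatorname{Hom}(V_i,V_j)=0$ for $i\neq j$; (2) an involution $i\mapsto i^*$ of $I$; (3) morphisms $b_i:\mathbb I\to V_i\boxtimes V_{i^*}$, $d_i:V_i\boxtimes V_{i^*}\to\mathbb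 I$ ($i\in I$) with $(\mathrm{Id}_{V_i}\boxtimes d_{i^*})(b_i\boxtimes\mathrm{Id}_{V_i})=\mathrm{Id}_{V_i}$ and $(d_i\boxtimes\mathrm{Id}_{V_i})(\mathrm{Id}_{V_i}\boxtimes b_{i^*})=\mathrm{Id}_{V_i}$; (4) for all $i,j\in I$ such that $H^{ij}_k\neq0$ for some $k\in I$, the morphism $\mathrm{Id}_{V_i\boxtimes V_j}$ lies in the image of the linear map $\bigoplus_{k\in I}H^{ij}_k\otimes_{\mathsf k}H^k_{ij}\to\operatorname{End}(V_i\boxtimes V_j)$, $x\otimes y\mapsto x\circ y$. Fix a $\Psi$-system in $\mathcal C$. (The spaces $H^{ij}_k,H^k_{ij}$ are finite-dimensional and the pairing $H^k_{ij}\otimes H^{ij}_k\to\mathsf k$, $x\otimes y\mapsto\langle x\circ y\rangle$, is non-degenerate.) Let $\check H=\bigoplus_{i,j,k\in I}H^{ij}_k$ with projections $\pi^{ij}_k:\check H\to H^{ij}_k$. For all $i,j,k$ choose a basis $(e^{ij}_{k\alpha})_\alpha$ of $H^{ij}_k$ and the dual basis $(e^{k\alpha}_{ij})_\alpha$ of $H^k_{ij}$, i.e. $\langle e^{k\alpha}_{ij}\circ e^{ij}_{k\beta}\rangle=\delta_{\alpha\beta}$. Define $\tau,\bar\tau\in\operatorname{End}(\check H\otimes\check H)$ by $\tau(x\otimes y)=\sum_{i,j,k,l,m,n\in I}\sum_\alpha\big((e^{k\alpha}_{ij}\boxtimes\mathrm{Id}_{V_l})\circ(\mathrm{Id}_{V_i}\boxtimes\pi^{jl}_nx)\circ\pi^{in}_my\big)\otimes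 e^{ij}_{k\alpha}$, $\bar\tau(x\otimes y)=\sum_{i,j,k,l,m,n\in I}\sum_\alpha\big((\mathrm{Id}_{V_i}\boxtimes e^{n\alpha}_{jl})\circ(\pi^{ij}_kx\boxtimes\mathrm{Id}_{V_l})\circ\pi^{kl}_my\big)\otimes e^{jl}_{n\alpha}$ (independent of the bases). For $i,j\in I$ let $g_{i,j}=1$ if $H^{ij}_k\neq0$ for some $k\in I$ and $g_{i,j}=0$ otherwise. Let ${}^\bullet\pi=\sum_{i,j,k,l,m\in I}g_{i,j}\,\pi^{il}_m\otimes\pi^{jk}_l$ and $\pi^\bullet=\sum_{i,j,k,l,m\in I}g_{j,l}\,\pi^{ij}_k\otimes\pi^{kl}_m$ in $\operatorname{End}(\check H^{\otimes2})$. For $F\in\operatorname{End}(\check H^{\otimes 2})$ and $1\le r<s\le n$, $F_{rs}\in\operatorname{End}(\check H^{\otimes n})$ acts as $F$ on the $r$-th and $s$-th tensor factors and as the identity on the others; $F_{sr}=P_{(rs)}F_{rs}P_{(rs)}$ where $P_{(rs)}$ swaps the $r$-th and $s$-th tensor factors. In particular $\tau_{21}=P_{(12)}\tau P_{(12)}$ on $\check H^{\otimes 2}$. *)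

theory Defs
  imports Main
begin

text \<open>A category is given by its type of objects 'o and type of morphisms 'm
(every element of 'm is a morphism with a domain and a codomain).  cCmp g f is g \<circ> f.
The ground ring End(I) is identified with a field 'k via c \<mapsto> c \<cdot> Id_I (a bijection
onto End(I)), and the k-vector-space structure on Hom-sets is k f = k \<boxtimes> f.\<close>

record ('o,'m,'k) mcat =
  cDom :: "'m \<Rightarrow> 'o"
  cCod :: "'m \<Rightarrow> 'o"
  cCmp :: "'m \<Rightarrow> 'm \<Rightarrow> 'm"
  cId  :: "'o \<Rightarrow> 'm"
  cTob :: "'o \<Rightarrow> 'o \<Rightarrow> 'o"
  cTmo :: "'m \<Rightarrow> 'm \<Rightarrow> 'm"
  cUn  :: "'o"
  cAdd :: "'m \<Rightarrow> 'm \<Rightarrow> 'm"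
  cZer :: "'o \<Rightarrow> 'o \<Rightarrow> 'm"
  cSml :: "'k \<Rightarrow> 'm \<Rightarrow> 'm"

definition hom :: "('o,'m,'k) mcat \<Rightarrow> 'o \<Rightarrow> 'o \<Rightarrow> 'm set" where
  "hom C A B = {f. cDom C f = A \<and> cCod C f = B}"

definition strict_monoidal_abcat :: "('o,'m,'k::field) mcat \<Rightarrow> bool" where
  "strict_monoidal_abcat C \<longleftrightarrow>
    \<comment> \<open>category\<close>
    (\<forall>A. cId C A \<in> hom C A A) \<and>
    (\<forall>f g. cDom C g = cCod C f \<longrightarrow> cCmp C g f \<in> hom C (cDom C f) (cCod C g)) \<and>
    (\<forall>f. cCmp C f (cId C (cDom C f)) = f \<and> cCmp C (cId C (cCod C f)) f = f) \<and>
    (\<forall>f g h. cDom C g = cCod C f \<and> cDom C h = cCod C g \<longrightarrow>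
        cCmp C h (cCmp C g f) = cCmp C (cCmp C h g) f) \<and>
    \<comment> \<open>strict monoidal structure\<close>
    (\<forall>f g. cTmo C f g \<in> hom C (cTob C (cDom C f) (cDom C g)) (cTob C (cCod C f) (cCod C g))) \<and>
    (\<forall>A B. cTmo C (cId C A) (cId C B) = cId C (cTob C A B)) \<and>
    (\<forall>f g f' g'. cDom C g = cCod C f \<and> cDom C g' = cCod C f' \<longrightarrow>
        cTmo C (cCmp C g f) (cCmp C g' f') = cCmp C (cTmo C g g') (cTmo C f f')) \<and>
    (\<forall>A B D. cTob C (cTob C A B) D = cTob C A (cTob C B D)) \<and>
    (\<forall>f g h. cTmo C (cTmo C f g) h = cTmo C f (cTmo C g h)) \<and>
    (\<forall>A. cTob C (cUn C) A = A \<and> cTob C A (cUn C) = A) \<and>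
    (\<forall>f. cTmo C (cId C (cUn C)) f = f \<and> cTmo C f (cId C (cUn C)) = f) \<and>
    \<comment> \<open>Hom-sets are 'k-vector spaces\<close>
    (\<forall>A B. cZer C A B \<in> hom C A B) \<and>
    (\<forall>A B f g. f \<in> hom C A B \<and> g \<in> hom C A B \<longrightarrow> cAdd C f g \<in> hom C A B) \<and>
    (\<forall>A B c f. f \<in> hom C A B \<longrightarrow> cSml C c f \<in> hom C A B) \<and>
    (\<forall>A B f g h. f \<in> hom C A B \<and> g \<in> hom C A B \<and> h \<in> hom C A B \<longrightarrow>
        cAdd C (cAdd C f g) h = cAdd C f (cAdd C g h)) \<and>
    (\<forall>A B f g. f \<in> hom C A B \<and> g \<in> hom C A B \<longrightarrow> cAdd C f g = cAdd C g f) \<and>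
    (\<forall>A B f. f \<in> hom C A B \<longrightarrow> cAdd C f (cZer C A B) = f) \<and>
    (\<forall>A B f. f \<in> hom C A B \<longrightarrow> cAdd C f (cSml C (-1) f) = cZer C A B) \<and>
    (\<forall>A B c f g. f \<in> hom C A B \<and> g \<in> hom C A B \<longrightarrow>
        cSml C c (cAdd C f g) = cAdd C (cSml C c f) (cSml C c g)) \<and>
    (\<forall>A B c d f. f \<in> hom C A B \<longrightarrow> cSml C (c + d) f = cAdd C (cSml C c f) (cSml C d f)) \<and>
    (\<forall>A B c d f. f \<in> hom C A B \<longrightarrow> cSml C (c * d) f = cSml C c (cSml C d f)) \<and>
    (\<forall>A B f. f \<in> hom C A B \<longrightarrow> cSml C 1 f = f) \<and>
    \<comment> \<open>composition is biadditive and k-bilinear\<close>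
    (\<forall>A B D f g g'. f \<in> hom C A B \<and> g \<in> hom C B D \<and> g' \<in> hom C B D \<longrightarrow>
        cCmp C (cAdd C g g') f = cAdd C (cCmp C g f) (cCmp C g' f)) \<and>
    (\<forall>A B D f f' g. f \<in> hom C A B \<and> f' \<in> hom C A B \<and> g \<in> hom C B D \<longrightarrow>
        cCmp C g (cAdd C f f') = cAdd C (cCmp C g f) (cCmp C g f')) \<and>
    (\<forall>c f g. cDom C g = cCod C f \<longrightarrow>
        cCmp C (cSml C c g) f = cSml C c (cCmp C g f) \<and> cCmp C g (cSml C c f) = cSml C c (cCmp C g f)) \<and>
    \<comment> \<open>tensor product is biadditive and k-bilinear\<close>
    (\<forall>A B f f' g. f \<in> hom C A B \<and> f' \<in> hom C A B \<longrightarrow>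
        cTmo C (cAdd C f f') g = cAdd C (cTmo C f g) (cTmo C f' g)) \<and>
    (\<forall>A B f g g'. g \<in> hom C A B \<and> g' \<in> hom C A B \<longrightarrow>
        cTmo C f (cAdd C g g') = cAdd C (cTmo C f g) (cTmo C f g')) \<and>
    (\<forall>c f g. cTmo C (cSml C c f) g = cSml C c (cTmo C f g) \<and> cTmo C f (cSml C c g) = cSml C c (cTmo C f g)) \<and>
    \<comment> \<open>ground field: k f = k \<boxtimes> f, and k \<mapsto> k Id_I is a bijection onto End(I)\<close>
    (\<forall>c f. cSml C c f = cTmo C (cSml C c (cId C (cUn C))) f) \<and>
    bij_betw (\<lambda>c. cSml C c (cId C (cUn C))) UNIV (hom C (cUn C) (cUn C))"

definition msum :: "('o,'m,'k) mcat \<Rightarrow> 'o \<Rightarrow> 'o \<Rightarrow> 'm list \<Rightarrow> 'm" where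
  "msum C A B fs = foldr (cAdd C) fs (cZer C A B)"

definition lcomb :: "('o,'m,'k) mcat \<Rightarrow> 'o \<Rightarrow> 'o \<Rightarrow> nat \<Rightarrow> (nat \<Rightarrow> 'k) \<Rightarrow> (nat \<Rightarrow> 'm) \<Rightarrow> 'm" where
  "lcomb C A B n c e = msum C A B (map (\<lambda>a. cSml C (c a) (e a)) [0..<n])"

definition is_basis :: "('o,'m,'k::field) mcat \<Rightarrow> 'o \<Rightarrow> 'o \<Rightarrow> nat \<Rightarrow> (nat \<Rightarrow> 'm) \<Rightarrow> bool" where
  "is_basis C A B n e \<longleftrightarrow>
     (\<forall>a<n. e a \<in> hom C A B) \<and>
     (\<forall>f\<in>hom C A B. \<exists>c. f = lcomb C A B n c e) \<and>
     (\<forall>c. lcomb C A B n c e = cZer C A B \<longrightarrow> (\<forall>a<n. c a = 0))"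

definition simple_obj :: "('o,'m,'k::field) mcat \<Rightarrow> 'o \<Rightarrow> bool" where
  "simple_obj C V \<longleftrightarrow> cId C V \<noteq> cZer C V V \<and> hom C V V = {cSml C c (cId C V) | c. True}"

definition scal :: "('o,'m,'k::field) mcat \<Rightarrow> 'o \<Rightarrow> 'm \<Rightarrow> 'k" where
  "scal C V f = (THE c. f = cSml C c (cId C V))"

text \<open>H^{ij}_k = Hom(V_k, V_i \<boxtimes> V_j) and H^k_{ij} = Hom(V_i \<boxtimes> V_j, V_k).\<close>
definition Hup :: "('o,'m,'k) mcat \<Rightarrow> ('i \<Rightarrow> 'o) \<Rightarrow> 'i \<Rightarrow> 'i \<Rightarrow> 'i \<Rightarrow> 'm set" where
  "Hup C V i j k = hom C (V k) (cTob C (V i) (V j))"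

definition Hdn :: "('o,'m,'k) mcat \<Rightarrow> ('i \<Rightarrow> 'o) \<Rightarrow> 'i \<Rightarrow> 'i \<Rightarrow> 'i \<Rightarrow> 'm set" where
  "Hdn C V i j k = hom C (cTob C (V i) (V j)) (V k)"

definition psi_system :: "('o,'m,'k::field) mcat \<Rightarrow> 'i set \<Rightarrow> ('i \<Rightarrow> 'o) \<Rightarrow> ('i \<Rightarrow> 'i)
    \<Rightarrow> ('i \<Rightarrow> 'm) \<Rightarrow> ('i \<Rightarrow> 'm) \<Rightarrow> bool" where
  "psi_system C I V st b d \<longleftrightarrow>
     strict_monoidal_abcat C \<and>
     (\<forall>i\<in>I. simple_obj C (V i)) \<and>
     (\<forall>i\<in>I. \<forall>j\<in>I. i \<noteq> j \<longrightarrow> hom C (V i) (V j) = {cZer C (V i) (V j)}) \<and>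
     (\<forall>i\<in>I. st i \<in> I \<and> st (st i) = i) \<and>
     (\<forall>i\<in>I. b i \<in> hom C (cUn C) (cTob C (V i) (V (st i))) \<and>
             d i \<in> hom C (cTob C (V i) (V (st i))) (cUn C)) \<and>
     (\<forall>i\<in>I. cCmp C (cTmo C (cId C (V i)) (d (st i))) (cTmo C (b i) (cId C (V i))) = cId C (V i) \<and>
             cCmp C (cTmo C (d i) (cId C (V i))) (cTmo C (cId C (V i)) (b (st i))) = cId C (V i)) \<and>
     (\<forall>i\<in>I. \<forall>j\<in>I. (\<exists>k\<in>I. Hup C V i j k \<noteq> {cZer C (V k) (cTob C (V i) (V j))}) \<longrightarrow>
        (\<exists>xs. set xs \<subseteq> {(x, y). \<exists>k\<in>I. x \<in> Hup C V i j k \<and> y \<in> Hdn C V i j k} \<and>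
              cId C (cTob C (V i) (V j)) =
                msum C (cTob C (V i) (V j)) (cTob C (V i) (V j)) (map (\<lambda>(x, y). cCmp C x y) xs)))"

text \<open>Chosen bases (e^{ij}_{k\<alpha>})_{\<alpha> < N i j k} of H^{ij}_k and dual bases (e^{k\<alpha>}_{ij}) of H^k_{ij}.\<close>
definition dual_bases :: "('o,'m,'k::field) mcat \<Rightarrow> 'i set \<Rightarrow> ('i \<Rightarrow> 'o) \<Rightarrow> ('i \<Rightarrow> 'i \<Rightarrow> 'i \<Rightarrow> nat)
    \<Rightarrow> ('i \<Rightarrow> 'i \<Rightarrow> 'i \<Rightarrow> nat \<Rightarrow> 'm) \<Rightarrow> ('i \<Rightarrow> 'i \<Rightarrow> 'i \<Rightarrow> nat \<Rightarrow> 'm) \<Rightarrow> bool" where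
  "dual_bases C I V N eb ed \<longleftrightarrow>
     (\<forall>i\<in>I. \<forall>j\<in>I. \<forall>k\<in>I.
        is_basis C (V k) (cTob C (V i) (V j)) (N i j k) (eb i j k) \<and>
        is_basis C (cTob C (V i) (V j)) (V k) (N i j k) (ed i j k) \<and>
        (\<forall>a<N i j k. \<forall>b<N i j k. scal C (V k) (cCmp C (ed i j k a) (eb i j k b)) = (if a = b then 1 else 0)))"

text \<open>\<check>H has the basis e^{ij}_{k\<alpha>}, indexed by (i,j,k,\<alpha>) \<in> bidx I N.  An element of
\<check>H^{\<otimes>n} is represented by its (finitely supported) coefficient function on n-tuples of
basis indices.\<close>

definition bidx :: "'i set \<Rightarrow> ('i \<Rightarrow> 'i \<Rightarrow> 'i \<Rightarrow> nat) \<Rightarrow> ('i \<times> 'i \<times> 'i \<times> nat) set" where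
  "bidx I N = {(i, j, k, a). i \<in> I \<and> j \<in> I \<and> k \<in> I \<and> a < N i j k}"

definition inT2 :: "'i set \<Rightarrow> ('i \<Rightarrow> 'i \<Rightarrow> 'i \<Rightarrow> nat) \<Rightarrow> (('i\<times>'i\<times>'i\<times>nat) \<Rightarrow> ('i\<times>'i\<times>'i\<times>nat) \<Rightarrow> 'k::zero) \<Rightarrow> bool" where
  "inT2 I N v \<longleftrightarrow> finite {(p, q). v p q \<noteq> 0} \<and>
     (\<forall>p q. v p q \<noteq> 0 \<longrightarrow> p \<in> bidx I N \<and> q \<in> bidx I N)"

definition inT3 :: "'i set \<Rightarrow> ('i \<Rightarrow> 'i \<Rightarrow> 'i \<Rightarrow> nat)
    \<Rightarrow> (('i\<times>'i\<times>'i\<times>nat) \<Rightarrow> ('i\<times>'i\<times>'i\<times>nat) \<Rightarrow> ('i\<times>'i\<times>'i\<times>nat) \<Rightarrow> 'k::zero) \<Rightarrow> bool" where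
  "inT3 I N v \<longleftrightarrow> finite {(p, q, r). v p q r \<noteq> 0} \<and>
     (\<forall>p q r. v p q r \<noteq> 0 \<longrightarrow> p \<in> bidx I N \<and> q \<in> bidx I N \<and> r \<in> bidx I N)"

definition fsum :: "('s \<Rightarrow> 'k::comm_monoid_add) \<Rightarrow> 's set \<Rightarrow> 'k" where
  "fsum f S = sum f {s \<in> S. f s \<noteq> 0}"

text \<open>Inclusion H^{ab}_c \<rightarrow> \<check>H in coordinates: the coefficient of e^{ab}_{c\<delta>} in f is
\<langle>e^{c\<delta>}_{ab} \<circ> f\<rangle>.\<close>
definition hc :: "('o,'m,'k::field) mcat \<Rightarrow> ('i \<Rightarrow> 'o) \<Rightarrow> ('i \<Rightarrow> 'i \<Rightarrow> 'i \<Rightarrow> nat)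
    \<Rightarrow> ('i \<Rightarrow> 'i \<Rightarrow> 'i \<Rightarrow> nat \<Rightarrow> 'm) \<Rightarrow> 'i \<Rightarrow> 'i \<Rightarrow> 'i \<Rightarrow> 'm \<Rightarrow> ('i\<times>'i\<times>'i\<times>nat) \<Rightarrow> 'k" where
  "hc C V N ed a b c f = (\<lambda>(a', b', c', d).
     if a' = a \<and> b' = b \<and> c' = c \<and> d < N a b c
     then scal C (V c) (cCmp C (ed a b c d) f) else 0)"

definition proj :: "('o,'m,'k::field) mcat \<Rightarrow> ('i \<Rightarrow> 'o) \<Rightarrow> ('i \<Rightarrow> 'i \<Rightarrow> 'i \<Rightarrow> nat)
    \<Rightarrow> ('i \<Rightarrow> 'i \<Rightarrow> 'i \<Rightarrow> nat \<Rightarrow> 'm) \<Rightarrow> (('i\<times>'i\<times>'i\<times>nat) \<Rightarrow> 'k) \<Rightarrow> 'i \<Rightarrow> 'i \<Rightarrow> 'i \<Rightarrow> 'm" where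
  "proj C V N eb x i j k = lcomb C (V k) (cTob C (V i) (V j)) (N i j k) (\<lambda>a. x (i, j, k, a)) (eb i j k)"

definition tens :: "('b \<Rightarrow> 'k::times) \<Rightarrow> ('b \<Rightarrow> 'k) \<Rightarrow> 'b \<Rightarrow> 'b \<Rightarrow> 'k" where
  "tens u w = (\<lambda>p q. u p * w q)"

definition ev :: "'b \<Rightarrow> 'b \<Rightarrow> 'k::{zero,one}" where
  "ev b = (\<lambda>b'. if b' = b then 1 else 0)"

text \<open>Linear extension to \<check>H^{\<otimes>2} of an operator given on pure tensors of basis vectors.\<close>
definition linext :: "(('b \<Rightarrow> 'k) \<Rightarrow> ('b \<Rightarrow> 'k) \<Rightarrow> 'b \<Rightarrow> 'b \<Rightarrow> 'k::field) \<Rightarrow> ('b \<Rightarrow> 'b \<Rightarrow> 'k) \<Rightarrow> 'b \<Rightarrow> 'b \<Rightarrow> 'k" where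
  "linext F v = (\<lambda>p q. fsum (\<lambda>(b, c). v b c * F (ev b) (ev c) p q) UNIV)"

definition idx7 :: "'i set \<Rightarrow> ('i \<Rightarrow> 'i \<Rightarrow> 'i \<Rightarrow> 'i \<Rightarrow> 'i \<Rightarrow> 'i \<Rightarrow> nat) \<Rightarrow> ('i\<times>'i\<times>'i\<times>'i\<times>'i\<times>'i\<times>nat) set" where
  "idx7 I M = {(i, j, k, l, m, n, a). i \<in> I \<and> j \<in> I \<and> k \<in> I \<and> l \<in> I \<and> m \<in> I \<and> n \<in> I \<and> a < M i j k l m n}"

text \<open>\<tau>(x \<otimes> y) = \<Sum> ((e^{k\<alpha>}_{ij} \<boxtimes> Id_{V_l}) \<circ> (Id_{V_i} \<boxtimes> \<pi>^{jl}_n x) \<circ> \<pi>^{in}_m y) \<otimes> e^{ij}_{k\<alpha>}\<close>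
definition tau_pure :: "('o,'m,'k::field) mcat \<Rightarrow> 'i set \<Rightarrow> ('i \<Rightarrow> 'o) \<Rightarrow> ('i \<Rightarrow> 'i \<Rightarrow> 'i \<Rightarrow> nat)
    \<Rightarrow> ('i \<Rightarrow> 'i \<Rightarrow> 'i \<Rightarrow> nat \<Rightarrow> 'm) \<Rightarrow> ('i \<Rightarrow> 'i \<Rightarrow> 'i \<Rightarrow> nat \<Rightarrow> 'm)
    \<Rightarrow> (('i\<times>'i\<times>'i\<times>nat) \<Rightarrow> 'k) \<Rightarrow> (('i\<times>'i\<times>'i\<times>nat) \<Rightarrow> 'k) \<Rightarrow> ('i\<times>'i\<times>'i\<times>nat) \<Rightarrow> ('i\<times>'i\<times>'i\<times>nat) \<Rightarrow> 'k" where
  "tau_pure C I V N eb ed x y = (\<lambda>p q. fsum (\<lambda>(i, j, k, l, m, n, a).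
      tens (hc C V N ed k l m
              (cCmp C (cCmp C (cTmo C (ed i j k a) (cId C (V l)))
                               (cTmo C (cId C (V i)) (proj C V N eb x j l n)))
                      (proj C V N eb y i n m)))
           (hc C V N ed i j k (eb i j k a)) p q)
      (idx7 I (\<lambda>i j k l m n. N i j k)))"

text \<open>\<bar>\<tau>(x \<otimes> y) = \<Sum> ((Id_{V_i} \<boxtimes> e^{n\<alpha>}_{jl}) \<circ> (\<pi>^{ij}_k x \<boxtimes> Id_{V_l}) \<circ> \<pi>^{kl}_m y) \<otimes> e^{jl}_{n\<alpha>}\<close>
definition taubar_pure :: "('o,'m,'k::field) mcat \<Rightarrow> 'i set \<Rightarrow> ('i \<Rightarrow> 'o) \<Rightarrow> ('i \<Rightarrow> 'i \<Rightarrow> 'i \<Rightarrow> nat)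
    \<Rightarrow> ('i \<Rightarrow> 'i \<Rightarrow> 'i \<Rightarrow> nat \<Rightarrow> 'm) \<Rightarrow> ('i \<Rightarrow> 'i \<Rightarrow> 'i \<Rightarrow> nat \<Rightarrow> 'm)
    \<Rightarrow> (('i\<times>'i\<times>'i\<times>nat) \<Rightarrow> 'k) \<Rightarrow> (('i\<times>'i\<times>'i\<times>nat) \<Rightarrow> 'k) \<Rightarrow> ('i\<times>'i\<times>'i\<times>nat) \<Rightarrow> ('i\<times>'i\<times>'i\<times>nat) \<Rightarrow> 'k" where
  "taubar_pure C I V N eb ed x y = (\<lambda>p q. fsum (\<lambda>(i, j, k, l, m, n, a).
      tens (hc C V N ed i n m
              (cCmp C (cCmp C (cTmo C (cId C (V i)) (ed j l n a))
                               (cTmo C (proj C V N eb x i j k) (cId C (V l))))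
                      (proj C V N eb y k l m)))
           (hc C V N ed j l n (eb j l n a)) p q)
      (idx7 I (\<lambda>i j k l m n. N j l n)))"

definition tau where
  "tau C I V N eb ed = linext (tau_pure C I V N eb ed)"

definition taubar where
  "taubar C I V N eb ed = linext (taubar_pure C I V N eb ed)"

definition gg :: "('o,'m,'k) mcat \<Rightarrow> 'i set \<Rightarrow> ('i \<Rightarrow> 'o) \<Rightarrow> 'i \<Rightarrow> 'i \<Rightarrow> bool" where
  "gg C I V i j \<longleftrightarrow> (\<exists>k\<in>I. Hup C V i j k \<noteq> {cZer C (V k) (cTob C (V i) (V j))})"

text \<open>^\<bullet>\<pi> = \<Sum> g_{i,j} \<pi>^{il}_m \<otimes> \<pi>^{jk}_l  and  \<pi>^\<bullet> = \<Sum> g_{j,l} \<pi>^{ij}_k \<otimes> \<pi>^{kl}_m, in coordinates.\<close>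
definition lpi :: "('o,'m,'k::zero) mcat \<Rightarrow> 'i set \<Rightarrow> ('i \<Rightarrow> 'o) \<Rightarrow> ('i \<Rightarrow> 'i \<Rightarrow> 'i \<Rightarrow> nat)
    \<Rightarrow> ('i\<times>'i\<times>'i\<times>nat \<Rightarrow> 'i\<times>'i\<times>'i\<times>nat \<Rightarrow> 'k) \<Rightarrow> 'i\<times>'i\<times>'i\<times>nat \<Rightarrow> 'i\<times>'i\<times>'i\<times>nat \<Rightarrow> 'k" where
  "lpi C I V N v = (\<lambda>p q. case p of (i, l, m, a) \<Rightarrow> case q of (j, k, l', b) \<Rightarrow>
      if p \<in> bidx I N \<and> q \<in> bidx I N \<and> l' = l \<and> gg C I V i j then v p q else 0)"

definition rpi :: "('o,'m,'k::zero) mcat \<Rightarrow> 'i set \<Rightarrow> ('i \<Rightarrow> 'o) \<Rightarrow> ('i \<Rightarrow> 'i \<Rightarrow> 'i \<Rightarrow> nat)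
    \<Rightarrow> ('i\<times>'i\<times>'i\<times>nat \<Rightarrow> 'i\<times>'i\<times>'i\<times>nat \<Rightarrow> 'k) \<Rightarrow> 'i\<times>'i\<times>'i\<times>nat \<Rightarrow> 'i\<times>'i\<times>'i\<times>nat \<Rightarrow> 'k" where
  "rpi C I V N v = (\<lambda>p q. case p of (i, j, k, a) \<Rightarrow> case q of (k', l, m, b) \<Rightarrow>
      if p \<in> bidx I N \<and> q \<in> bidx I N \<and> k' = k \<and> gg C I V j l then v p q else 0)"

definition op12 :: "(('b \<Rightarrow> 'b \<Rightarrow> 'k) \<Rightarrow> 'b \<Rightarrow> 'b \<Rightarrow> 'k) \<Rightarrow> ('b \<Rightarrow> 'b \<Rightarrow> 'b \<Rightarrow> 'k) \<Rightarrow> 'b \<Rightarrow> 'b \<Rightarrow> 'b \<Rightarrow> 'k" where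
  "op12 F v = (\<lambda>p q r. F (\<lambda>b c. v b c r) p q)"
definition op23 :: "(('b \<Rightarrow> 'b \<Rightarrow> 'k) \<Rightarrow> 'b \<Rightarrow> 'b \<Rightarrow> 'k) \<Rightarrow> ('b \<Rightarrow> 'b \<Rightarrow> 'b \<Rightarrow> 'k) \<Rightarrow> 'b \<Rightarrow> 'b \<Rightarrow> 'b \<Rightarrow> 'k" where
  "op23 F v = (\<lambda>p q r. F (\<lambda>b c. v p b c) q r)"
definition op13 :: "(('b \<Rightarrow> 'b \<Rightarrow> 'k) \<Rightarrow> 'b \<Rightarrow> 'b \<Rightarrow> 'k) \<Rightarrow> ('b \<Rightarrow> 'b \<Rightarrow> 'b \<Rightarrow> 'k) \<Rightarrow> 'b \<Rightarrow> 'b \<Rightarrow> 'b \<Rightarrow> 'k" where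
  "op13 F v = (\<lambda>p q r. F (\<lambda>b c. v b q c) p r)"
text \<open>F_{21} = P_{(12)} F_{12} P_{(12)} on \<check>H^{\<otimes>3} and on \<check>H^{\<otimes>2}.\<close>
definition op21_3 :: "(('b \<Rightarrow> 'b \<Rightarrow> 'k) \<Rightarrow> 'b \<Rightarrow> 'b \<Rightarrow> 'k) \<Rightarrow> ('b \<Rightarrow> 'b \<Rightarrow> 'b \<Rightarrow> 'k) \<Rightarrow> 'b \<Rightarrow> 'b \<Rightarrow> 'b \<Rightarrow> 'k" where
  "op21_3 F v = (\<lambda>p q r. F (\<lambda>b c. v c b r) q p)"
definition op21 :: "(('b \<Rightarrow> 'b \<Rightarrow> 'k) \<Rightarrow> 'b \<Rightarrow> 'b \<Rightarrow> 'k) \<Rightarrow> ('b \<Rightarrow> 'b \<Rightarrow> 'k) \<Rightarrow> 'b \<Rightarrow> 'b \<Rightarrow> 'k" where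
  "op21 F v = (\<lambda>p q. F (\<lambda>b c. v c b) q p)"

end

theory Submission
  imports Defs
begin

(* Everything is computed in coordinates with respect to the chosen dual bases
   e^{ij}_{k alpha} of H^{ij}_k and e^{k alpha}_{ij} of H^k_{ij}.  Two facts about these
   bases drive the whole argument:

   (a) expansion: for every linear functional G on H^{ij}_k (resp. H^k_{ij}) one has
       sum_alpha <e^{k alpha}_{ij} Y> G(e^{ij}_{k alpha}) = G(Y), and dually;
   (b) completeness: for every linear functional G on End(V_i x V_j)
       sum_{k,alpha} G(e^{ij}_{k alpha} e^{k alpha}_{ij}) = g_{i,j} G(Id),
       which follows from axiom (4) of a Psi-system and Schur's lemma
       (Hom(V_k, V_k') = 0 for k <> k').

   The inversion relations follow by collapsing the inner sum with (a), then with (b),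
   and reading off Kronecker deltas from duality.  For the pentagon both sides are
   reduced, by two expansions and one completeness on the left and one expansion on
   the right, to the same scalar.  The identities hold for all coefficient functions. *)

section \<open>Finite sums\<close>

lemma sum_move_inside2:
  "(\<Sum>x\<in>A. \<Sum>y\<in>B. \<Sum>z\<in>Z y. f x y z) = (\<Sum>y\<in>B. \<Sum>z\<in>Z y. \<Sum>x\<in>A. f x y z)"
  by (simp add: sum.swap[of _ A] sum.swap[of _ A "Z _"])

lemma sum_move_inside3:
  "(\<Sum>x\<in>A. \<Sum>y\<in>B. \<Sum>z\<in>Z y. \<Sum>w\<in>W y z. f x y z w) =
   (\<Sum>y\<in>B. \<Sum>z\<in>Z y. \<Sum>w\<in>W y z. \<Sum>x\<in>A. f x y z w)"
  by (subst sum.swap) (simp add: sum_move_inside2)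

lemma sum_move_inside4:
  "(\<Sum>x\<in>A. \<Sum>y\<in>B. \<Sum>z\<in>Z y. \<Sum>w\<in>W y z. \<Sum>u\<in>U y z w. f x y z w u) =
   (\<Sum>y\<in>B. \<Sum>z\<in>Z y. \<Sum>w\<in>W y z. \<Sum>u\<in>U y z w. \<Sum>x\<in>A. f x y z w u)"
  by (subst sum.swap) (simp add: sum_move_inside3)

lemma sum_move_inside5:
  "(\<Sum>x\<in>A. \<Sum>y\<in>B. \<Sum>z\<in>Z y. \<Sum>w\<in>W y z. \<Sum>u\<in>U y z w. \<Sum>t\<in>T y z w u. f x y z w u t) =
   (\<Sum>y\<in>B. \<Sum>z\<in>Z y. \<Sum>w\<in>W y z. \<Sum>u\<in>U y z w. \<Sum>t\<in>T y z w u. \<Sum>x\<in>A. f x y z w u t)"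
  by (subst sum.swap) (simp add: sum_move_inside4)

lemma sum_extend:
  "finite U \<Longrightarrow> A \<subseteq> U \<Longrightarrow> (\<And>x. x \<in> U \<Longrightarrow> x \<notin> A \<Longrightarrow> f x = 0) \<Longrightarrow> sum f A = sum f U"
  by (rule sum.mono_neutral_left) auto

lemma sum3_Sigma:
  assumes "finite K" and "\<And>n. finite (B n)" and "\<And>n. finite (D n)"
  shows "(\<Sum>n\<in>K. \<Sum>\<beta>\<in>B n. \<Sum>\<gamma>\<in>D n. f n \<beta> \<gamma>) = (\<Sum>(n, \<beta>, \<gamma>)\<in>(SIGMA n:K. B n \<times> D n). f n \<beta> \<gamma>)"
proof -
  have "(\<Sum>n\<in>K. \<Sum>\<beta>\<in>B n. \<Sum>\<gamma>\<in>D n. f n \<beta> \<gamma>) = (\<Sum>n\<in>K. \<Sum>(\<beta>, \<gamma>)\<in>B n \<times> D n. f n \<beta> \<gamma>)"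
    by (rule sum.cong) (auto simp: sum.cartesian_product assms)
  also have "\<dots> = (\<Sum>(n, \<beta>, \<gamma>)\<in>(SIGMA n:K. B n \<times> D n). f n \<beta> \<gamma>)"
    by (subst sum.Sigma) (auto simp: assms split_def)
  finally show ?thesis .
qed

lemma sum3_swap:
  assumes f1: "finite K1" "\<And>n. finite (B1 n)" "\<And>n. finite (C1 n)"
    and f2: "finite K2" "\<And>n. finite (B2 n)" "\<And>n. finite (C2 n)"
  shows "(\<Sum>n\<in>K1. \<Sum>\<beta>\<in>B1 n. \<Sum>\<gamma>\<in>C1 n. \<Sum>k\<in>K2. \<Sum>\<alpha>\<in>B2 k. \<Sum>a\<in>C2 k. f n \<beta> \<gamma> k \<alpha> a)
       = (\<Sum>k\<in>K2. \<Sum>\<alpha>\<in>B2 k. \<Sum>a\<in>C2 k. \<Sum>n\<in>K1. \<Sum>\<beta>\<in>B1 n. \<Sum>\<gamma>\<in>C1 n. f n \<beta> \<gamma> k \<alpha> a)"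
proof -
  let ?D1 = "SIGMA n:K1. B1 n \<times> C1 n" and ?D2 = "SIGMA k:K2. B2 k \<times> C2 k"
  have "(\<Sum>n\<in>K1. \<Sum>\<beta>\<in>B1 n. \<Sum>\<gamma>\<in>C1 n. \<Sum>k\<in>K2. \<Sum>\<alpha>\<in>B2 k. \<Sum>a\<in>C2 k. f n \<beta> \<gamma> k \<alpha> a)
      = (\<Sum>(n, \<beta>, \<gamma>)\<in>?D1. \<Sum>(k, \<alpha>, a)\<in>?D2. f n \<beta> \<gamma> k \<alpha> a)"
    by (simp add: sum3_Sigma[OF f1] sum3_Sigma[OF f2])
  also have "\<dots> = (\<Sum>(k, \<alpha>, a)\<in>?D2. \<Sum>(n, \<beta>, \<gamma>)\<in>?D1. f n \<beta> \<gamma> k \<alpha> a)"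
    unfolding split_def by (rule sum.swap)
  also have "\<dots> = (\<Sum>k\<in>K2. \<Sum>\<alpha>\<in>B2 k. \<Sum>a\<in>C2 k. \<Sum>n\<in>K1. \<Sum>\<beta>\<in>B1 n. \<Sum>\<gamma>\<in>C1 n. f n \<beta> \<gamma> k \<alpha> a)"
    by (simp add: sum3_Sigma[OF f1] sum3_Sigma[OF f2])
  finally show ?thesis .
qed

lemma sum3_delta:
  assumes "finite K" "\<And>n. finite (B n)" "\<And>n. finite (D n)"
  shows "(\<Sum>k'\<in>K. \<Sum>\<alpha>'\<in>B k'. \<Sum>a''\<in>D k'. if k' = k \<and> \<alpha>' = a \<and> a'' = b then f k' \<alpha>' a'' else 0)
       = (if k \<in> K \<and> a \<in> B k \<and> b \<in> D k then f k a b else (0::'a::comm_monoid_add))"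
proof -
  have "(\<Sum>k'\<in>K. \<Sum>\<alpha>'\<in>B k'. \<Sum>a''\<in>D k'. if k' = k \<and> \<alpha>' = a \<and> a'' = b then f k' \<alpha>' a'' else 0)
      = (\<Sum>k'\<in>K. if k' = k then (\<Sum>\<alpha>'\<in>B k'. if \<alpha>' = a then
           (\<Sum>a''\<in>D k'. if a'' = b then f k' \<alpha>' a'' else 0) else 0) else 0)"
    by (rule sum.cong[OF refl]) (auto intro!: sum.neutral sum.cong)
  also have "\<dots> = (if k \<in> K \<and> a \<in> B k \<and> b \<in> D k then f k a b else 0)"
    using assms by (simp add: sum.delta)
  finally show ?thesis .
qed

lemma fsum_single:
  assumes "\<And>s. s \<in> S \<Longrightarrow> s \<noteq> t0 \<Longrightarrow> f s = 0"
  shows "fsum f S = (if t0 \<in> S then f t0 else (0::'a::comm_monoid_add))"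
proof -
  have "{s \<in> S. f s \<noteq> 0} = (if t0 \<in> S \<and> f t0 \<noteq> 0 then {t0} else {})"
    using assms by auto
  then show ?thesis by (auto simp: fsum_def)
qed

lemma fsum_sub:
  "finite A \<Longrightarrow> {s \<in> S. f s \<noteq> 0} \<subseteq> A \<Longrightarrow> A \<subseteq> S \<Longrightarrow> fsum f S = sum f A"
  unfolding fsum_def by (rule sum.mono_neutral_left) auto

lemma fsum_cong: "(\<And>s. s \<in> S \<Longrightarrow> f s = g s) \<Longrightarrow> fsum f S = fsum g S"
  unfolding fsum_def by (rule sum.cong) auto

lemma linext_entry:
  assumes D: "finite D" and g: "inj_on g D"
    and supp: "\<And>b c. F (ev b) (ev c) p q \<noteq> 0 \<Longrightarrow> (b, c) \<in> g ` D"
  shows "linext F v p q = (\<Sum>x\<in>D. case g x of (b, c) \<Rightarrow> v b c * F (ev b) (ev c) p q)"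
proof -
  let ?h = "\<lambda>(b, c). v b c * F (ev b) (ev c) p q"
  have "linext F v p q = fsum ?h UNIV" by (simp add: linext_def)
  also have "\<dots> = sum ?h (g ` D)"
    by (rule fsum_sub) (use D supp in auto)
  also have "\<dots> = (\<Sum>x\<in>D. ?h (g x))" by (rule sum.reindex_cong[OF g refl refl])
  finally show ?thesis by simp
qed

section \<open>Strict monoidal Ab-categories with ground field\<close>

text \<open>The axioms of Defs.strict_monoidal_abcat, stated as named locale assumptions
  in the same order, so that the locale predicate coincides with that definition.\<close>

locale smab_cat =
  fixes C :: "('o,'m,'k::field) mcat"
  assumes id_closed: "\<forall>A. cId C A \<in> hom C A A"
    and comp_closed: "\<forall>f g. cDom C g = cCod C f \<longrightarrow> cCmp C g f \<in> hom C (cDom C f) (cCod C g)"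
    and id_neutral: "\<forall>f. cCmp C f (cId C (cDom C f)) = f \<and> cCmp C (cId C (cCod C f)) f = f"
    and comp_assoc: "\<forall>f g h. cDom C g = cCod C f \<and> cDom C h = cCod C g \<longrightarrow>
        cCmp C h (cCmp C g f) = cCmp C (cCmp C h g) f"
    and tm_closed: "\<forall>f g. cTmo C f g \<in> hom C (cTob C (cDom C f) (cDom C g)) (cTob C (cCod C f) (cCod C g))"
    and tm_id_id: "\<forall>A B. cTmo C (cId C A) (cId C B) = cId C (cTob C A B)"
    and tm_comp: "\<forall>f g f' g'. cDom C g = cCod C f \<and> cDom C g' = cCod C f' \<longrightarrow>
        cTmo C (cCmp C g f) (cCmp C g' f') = cCmp C (cTmo C g g') (cTmo C f f')"
    and tob_assoc_ax: "\<forall>A B D. cTob C (cTob C A B) D = cTob C A (cTob C B D)"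
    and tm_assoc_ax: "\<forall>f g h. cTmo C (cTmo C f g) h = cTmo C f (cTmo C g h)"
    and tob_unit: "\<forall>A. cTob C (cUn C) A = A \<and> cTob C A (cUn C) = A"
    and tm_unit: "\<forall>f. cTmo C (cId C (cUn C)) f = f \<and> cTmo C f (cId C (cUn C)) = f"
    and zr_closed: "\<forall>A B. cZer C A B \<in> hom C A B"
    and ad_closed: "\<forall>A B f g. f \<in> hom C A B \<and> g \<in> hom C A B \<longrightarrow> cAdd C f g \<in> hom C A B"
    and sm_closed: "\<forall>A B c f. f \<in> hom C A B \<longrightarrow> cSml C c f \<in> hom C A B"
    and ad_assoc_ax: "\<forall>A B f g h. f \<in> hom C A B \<and> g \<in> hom C A B \<and> h \<in> hom C A B \<longrightarrow>
        cAdd C (cAdd C f g) h = cAdd C f (cAdd C g h)"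
    and ad_comm_ax: "\<forall>A B f g. f \<in> hom C A B \<and> g \<in> hom C A B \<longrightarrow> cAdd C f g = cAdd C g f"
    and ad_zr_ax: "\<forall>A B f. f \<in> hom C A B \<longrightarrow> cAdd C f (cZer C A B) = f"
    and ad_neg_ax: "\<forall>A B f. f \<in> hom C A B \<longrightarrow> cAdd C f (cSml C (-1) f) = cZer C A B"
    and sm_ad_ax: "\<forall>A B c f g. f \<in> hom C A B \<and> g \<in> hom C A B \<longrightarrow>
        cSml C c (cAdd C f g) = cAdd C (cSml C c f) (cSml C c g)"
    and add_sm_ax: "\<forall>A B c d f. f \<in> hom C A B \<longrightarrow> cSml C (c + d) f = cAdd C (cSml C c f) (cSml C d f)"
    and mult_sm_ax: "\<forall>A B c d f. f \<in> hom C A B \<longrightarrow> cSml C (c * d) f = cSml C c (cSml C d f)"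
    and one_sm_ax: "\<forall>A B f. f \<in> hom C A B \<longrightarrow> cSml C 1 f = f"
    and comp_ad_l_ax: "\<forall>A B D f g g'. f \<in> hom C A B \<and> g \<in> hom C B D \<and> g' \<in> hom C B D \<longrightarrow>
        cCmp C (cAdd C g g') f = cAdd C (cCmp C g f) (cCmp C g' f)"
    and comp_ad_r_ax: "\<forall>A B D f f' g. f \<in> hom C A B \<and> f' \<in> hom C A B \<and> g \<in> hom C B D \<longrightarrow>
        cCmp C g (cAdd C f f') = cAdd C (cCmp C g f) (cCmp C g f')"
    and comp_sm_ax: "\<forall>c f g. cDom C g = cCod C f \<longrightarrow>
        cCmp C (cSml C c g) f = cSml C c (cCmp C g f) \<and> cCmp C g (cSml C c f) = cSml C c (cCmp C g f)"
    and tm_ad_l_ax: "\<forall>A B f f' g. f \<in> hom C A B \<and> f' \<in> hom C A B \<longrightarrow>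
        cTmo C (cAdd C f f') g = cAdd C (cTmo C f g) (cTmo C f' g)"
    and tm_ad_r_ax: "\<forall>A B f g g'. g \<in> hom C A B \<and> g' \<in> hom C A B \<longrightarrow>
        cTmo C f (cAdd C g g') = cAdd C (cTmo C f g) (cTmo C f g')"
    and tm_sm_ax: "\<forall>c f g. cTmo C (cSml C c f) g = cSml C c (cTmo C f g) \<and>
        cTmo C f (cSml C c g) = cSml C c (cTmo C f g)"
    and ground_field: "\<forall>c f. cSml C c f = cTmo C (cSml C c (cId C (cUn C))) f"
    and ground_field_bij: "bij_betw (\<lambda>c. cSml C c (cId C (cUn C))) UNIV (hom C (cUn C) (cUn C))"

lemma smab_cat_iff: "smab_cat C \<longleftrightarrow> strict_monoidal_abcat C"
  unfolding smab_cat_def strict_monoidal_abcat_def by argo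

context smab_cat
begin

abbreviation cp (infixl "\<odot>" 70) where "g \<odot> f \<equiv> cCmp C g f"
abbreviation tm (infixl "\<boxtimes>" 75) where "f \<boxtimes> g \<equiv> cTmo C f g"
abbreviation to (infixl "\<otimes>" 75) where "A \<otimes> B \<equiv> cTob C A B"
abbreviation Hm where "Hm A B \<equiv> hom C A B"
abbreviation idm where "idm A \<equiv> cId C A"
abbreviation ad where "ad f g \<equiv> cAdd C f g"
abbreviation sm where "sm c f \<equiv> cSml C c f"
abbreviation zr where "zr A B \<equiv> cZer C A B"

lemma hom_iff: "f \<in> Hm A B \<longleftrightarrow> cDom C f = A \<and> cCod C f = B"
  by (simp add: hom_def)

lemma id_hom[simp,intro]: "idm A \<in> Hm A A"
  using id_closed by blast

lemma comp_hom[intro]: "f \<in> Hm A B \<Longrightarrow> g \<in> Hm B D \<Longrightarrow> g \<odot> f \<in> Hm A D"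
  using comp_closed by (auto simp: hom_iff)

lemma id_l: "f \<in> Hm A B \<Longrightarrow> idm B \<odot> f = f"
  using id_neutral by (auto simp: hom_iff)

lemma id_r: "f \<in> Hm A B \<Longrightarrow> f \<odot> idm A = f"
  using id_neutral by (auto simp: hom_iff)

lemma assoc_s: "cDom C h = cCod C g \<Longrightarrow> cDom C g = cCod C f \<Longrightarrow> (h \<odot> g) \<odot> f = h \<odot> (g \<odot> f)"
  using comp_assoc by simp

lemma assoc: "f \<in> Hm A B \<Longrightarrow> g \<in> Hm B D \<Longrightarrow> h \<in> Hm D E \<Longrightarrow> h \<odot> (g \<odot> f) = (h \<odot> g) \<odot> f"
  using comp_assoc by (simp add: hom_iff)

lemma tm_hom[intro]: "f \<in> Hm A B \<Longrightarrow> g \<in> Hm A' B' \<Longrightarrow> f \<boxtimes> g \<in> Hm (A \<otimes> A') (B \<otimes> B')"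
  using tm_closed by (auto simp: hom_iff)

lemma tm_id[simp]: "idm A \<boxtimes> idm B = idm (A \<otimes> B)"
  using tm_id_id by blast

lemma interchange:
  "f \<in> Hm A B \<Longrightarrow> g \<in> Hm B D \<Longrightarrow> f' \<in> Hm A' B' \<Longrightarrow> g' \<in> Hm B' D' \<Longrightarrow>
   (g \<odot> f) \<boxtimes> (g' \<odot> f') = (g \<boxtimes> g') \<odot> (f \<boxtimes> f')"
  using tm_comp by (simp add: hom_iff)

lemma tob_assoc[simp]: "(A \<otimes> B) \<otimes> D = A \<otimes> (B \<otimes> D)"
  using tob_assoc_ax by blast

lemma tm_assoc[simp]: "(f \<boxtimes> g) \<boxtimes> h = f \<boxtimes> (g \<boxtimes> h)"
  using tm_assoc_ax by blast

lemma zr_hom[simp,intro]: "zr A B \<in> Hm A B"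
  using zr_closed by blast

lemma ad_hom[intro]: "f \<in> Hm A B \<Longrightarrow> g \<in> Hm A B \<Longrightarrow> ad f g \<in> Hm A B"
  using ad_closed by blast

lemma sm_hom[intro]: "f \<in> Hm A B \<Longrightarrow> sm c f \<in> Hm A B"
  using sm_closed by blast

lemma ad_assoc:
  "f \<in> Hm A B \<Longrightarrow> g \<in> Hm A B \<Longrightarrow> h \<in> Hm A B \<Longrightarrow> ad (ad f g) h = ad f (ad g h)"
  using ad_assoc_ax by blast

lemma ad_comm: "f \<in> Hm A B \<Longrightarrow> g \<in> Hm A B \<Longrightarrow> ad f g = ad g f"
  using ad_comm_ax by blast

lemma ad_zr: "f \<in> Hm A B \<Longrightarrow> ad f (zr A B) = f"
  using ad_zr_ax by blast

lemma ad_neg: "f \<in> Hm A B \<Longrightarrow> ad f (sm (-1) f) = zr A B"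
  using ad_neg_ax by blast

lemma add_sm: "f \<in> Hm A B \<Longrightarrow> sm (c + d) f = ad (sm c f) (sm d f)"
  using add_sm_ax by blast

lemma mult_sm: "f \<in> Hm A B \<Longrightarrow> sm (c * d) f = sm c (sm d f)"
  using mult_sm_ax by blast

lemma one_sm: "f \<in> Hm A B \<Longrightarrow> sm 1 f = f"
  using one_sm_ax by blast

lemma comp_ad_l:
  "f \<in> Hm A B \<Longrightarrow> g \<in> Hm B D \<Longrightarrow> g' \<in> Hm B D \<Longrightarrow> (ad g g') \<odot> f = ad (g \<odot> f) (g' \<odot> f)"
  using comp_ad_l_ax by blast

lemma comp_ad_r:
  "f \<in> Hm A B \<Longrightarrow> f' \<in> Hm A B \<Longrightarrow> g \<in> Hm B D \<Longrightarrow> g \<odot> (ad f f') = ad (g \<odot> f) (g \<odot> f')"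
  using comp_ad_r_ax by blast

lemma comp_sm_l: "f \<in> Hm A B \<Longrightarrow> g \<in> Hm B D \<Longrightarrow> (sm c g) \<odot> f = sm c (g \<odot> f)"
  using comp_sm_ax by (simp add: hom_iff)

lemma comp_sm_r: "f \<in> Hm A B \<Longrightarrow> g \<in> Hm B D \<Longrightarrow> g \<odot> (sm c f) = sm c (g \<odot> f)"
  using comp_sm_ax by (simp add: hom_iff)

lemma tm_ad_l: "f \<in> Hm A B \<Longrightarrow> f' \<in> Hm A B \<Longrightarrow> (ad f f') \<boxtimes> g = ad (f \<boxtimes> g) (f' \<boxtimes> g)"
  using tm_ad_l_ax by blast

lemma tm_ad_r: "g \<in> Hm A B \<Longrightarrow> g' \<in> Hm A B \<Longrightarrow> f \<boxtimes> (ad g g') = ad (f \<boxtimes> g) (f \<boxtimes> g')"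
  using tm_ad_r_ax by blast

lemma tm_sm_l: "(sm c f) \<boxtimes> g = sm c (f \<boxtimes> g)"
  using tm_sm_ax by blast

lemma tm_sm_r: "f \<boxtimes> (sm c g) = sm c (f \<boxtimes> g)"
  using tm_sm_ax by blast

lemma ad_zr_l: "f \<in> Hm A B \<Longrightarrow> ad (zr A B) f = f"
  by (metis ad_comm ad_zr zr_hom)

lemma ad_cancel:
  assumes f: "f \<in> Hm A B" and g: "g \<in> Hm A B" and h: "h \<in> Hm A B" and e: "ad f g = ad f h"
  shows "g = h"
proof -
  have nf: "sm (-1) f \<in> Hm A B" using f by blast
  have z: "ad (sm (-1) f) f = zr A B" using ad_comm[OF nf f] ad_neg[OF f] by simp
  have "g = ad (ad (sm (-1) f) f) g" using z ad_zr_l[OF g] by simp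
  also have "\<dots> = ad (sm (-1) f) (ad f h)" using ad_assoc[OF nf f g] e by simp
  also have "\<dots> = h" using ad_assoc[OF nf f h] z ad_zr_l[OF h] by simp
  finally show ?thesis .
qed

lemma sm_zero: "f \<in> Hm A B \<Longrightarrow> sm 0 f = zr A B"
  using ad_cancel[of "sm 0 f" A B "sm 0 f" "zr A B"] add_sm[of f A B 0 0] ad_zr[of "sm 0 f" A B]
  by auto

lemma sm_zr[simp]: "sm c (zr A B) = zr A B"
  using sm_zero[of "zr A B" A B] mult_sm[of "zr A B" A B c 0] by simp

lemma comp_zr_r: "g \<in> Hm B D \<Longrightarrow> g \<odot> zr A B = zr A D"
  using comp_sm_r[OF zr_hom, of g B D 0 A] sm_zero[OF zr_hom] sm_zero[OF comp_hom[OF zr_hom]] by simp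

lemma comp_zr_l: "f \<in> Hm A B \<Longrightarrow> zr B D \<odot> f = zr A D"
  using comp_sm_l[OF _ zr_hom, of f A B 0 D] sm_zero[OF zr_hom] sm_zero[OF comp_hom[OF _ zr_hom]] by simp

lemma tm_zr_l: "g \<in> Hm A' B' \<Longrightarrow> zr A B \<boxtimes> g = zr (A \<otimes> A') (B \<otimes> B')"
  using tm_sm_l[of 0 "zr A B" g] sm_zero[OF zr_hom] sm_zero[OF tm_hom[OF zr_hom]] by simp

lemma tm_zr_r: "f \<in> Hm A B \<Longrightarrow> f \<boxtimes> zr A' B' = zr (A \<otimes> A') (B \<otimes> B')"
  using tm_sm_r[of f 0 "zr A' B'"] sm_zero[OF zr_hom] sm_zero[OF tm_hom[OF _ zr_hom]] by simp

lemma dom_tm[simp]: "cDom C (f \<boxtimes> g) = cDom C f \<otimes> cDom C g"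
  using tm_hom[of f "cDom C f" "cCod C f" g "cDom C g" "cCod C g"] by (simp add: hom_iff)
lemma cod_tm[simp]: "cCod C (f \<boxtimes> g) = cCod C f \<otimes> cCod C g"
  using tm_hom[of f "cDom C f" "cCod C f" g "cDom C g" "cCod C g"] by (simp add: hom_iff)
lemma dom_comp[simp]: "cDom C g = cCod C f \<Longrightarrow> cDom C (g \<odot> f) = cDom C f"
  using comp_hom[of f "cDom C f" "cCod C f" g "cCod C g"] by (simp add: hom_iff)
lemma cod_comp[simp]: "cDom C g = cCod C f \<Longrightarrow> cCod C (g \<odot> f) = cCod C g"
  using comp_hom[of f "cDom C f" "cCod C f" g "cCod C g"] by (simp add: hom_iff)
lemma dom_id[simp]: "cDom C (idm A) = A" using id_hom[of A] by (simp add: hom_iff)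
lemma cod_id[simp]: "cCod C (idm A) = A" using id_hom[of A] by (simp add: hom_iff)

lemma id_l_s: "cCod C f = A \<Longrightarrow> idm A \<odot> f = f"
  using id_l[of f "cDom C f" A] by (simp add: hom_iff)
lemma id_r_s: "cDom C f = A \<Longrightarrow> f \<odot> idm A = f"
  using id_r[of f A "cCod C f"] by (simp add: hom_iff)

lemma tm_comp_idl: "e \<in> Hm X Y \<Longrightarrow> e' \<in> Hm Z X \<Longrightarrow> idm W \<boxtimes> (e \<odot> e') = (idm W \<boxtimes> e) \<odot> (idm W \<boxtimes> e')"
  using interchange[of "idm W" W W "idm W" W e' Z X e Y] id_l[of "idm W" W W] by simp
lemma tm_comp_idr: "e \<in> Hm X Y \<Longrightarrow> e' \<in> Hm Z X \<Longrightarrow> (e \<odot> e') \<boxtimes> idm W = (e \<boxtimes> idm W) \<odot> (e' \<boxtimes> idm W)"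
  using interchange[of e' Z X e Y "idm W" W W "idm W" W] id_l[of "idm W" W W] by simp

definition linfun :: "'o \<Rightarrow> 'o \<Rightarrow> ('m \<Rightarrow> 'k) \<Rightarrow> bool" where
  "linfun A B G \<longleftrightarrow> (\<forall>f\<in>Hm A B. \<forall>g\<in>Hm A B. G (ad f g) = G f + G g) \<and>
                     (\<forall>c. \<forall>f\<in>Hm A B. G (sm c f) = c * G f)"

definition linmap :: "'o \<Rightarrow> 'o \<Rightarrow> 'o \<Rightarrow> 'o \<Rightarrow> ('m \<Rightarrow> 'm) \<Rightarrow> bool" where
  "linmap A B A' B' L \<longleftrightarrow> (\<forall>f\<in>Hm A B. L f \<in> Hm A' B') \<and>
     (\<forall>f\<in>Hm A B. \<forall>g\<in>Hm A B. L (ad f g) = ad (L f) (L g)) \<and>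
     (\<forall>c. \<forall>f\<in>Hm A B. L (sm c f) = sm c (L f))"

lemma msum_hom: "set fs \<subseteq> Hm A B \<Longrightarrow> msum C A B fs \<in> Hm A B"
  by (induction fs) (auto simp: msum_def)

lemma lcomb_hom: "(\<forall>a<n. e a \<in> Hm A B) \<Longrightarrow> lcomb C A B n c e \<in> Hm A B"
  unfolding lcomb_def by (rule msum_hom) auto

lemma linfun_zr: "linfun A B G \<Longrightarrow> G (zr A B) = 0"
  unfolding linfun_def by (metis mult_zero_left sm_zr zr_hom)

lemma linfun_msum:
  "linfun A B G \<Longrightarrow> set fs \<subseteq> Hm A B \<Longrightarrow> G (msum C A B fs) = sum_list (map G fs)"
proof (induction fs)
  case Nil then show ?case by (simp add: msum_def linfun_zr)
next
  case (Cons f fs)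
  have "msum C A B (f # fs) = ad f (msum C A B fs)" by (simp add: msum_def)
  moreover have "msum C A B fs \<in> Hm A B" using Cons.prems msum_hom by auto
  ultimately show ?case using Cons unfolding linfun_def by auto
qed

lemma linfun_lcomb:
  "linfun A B G \<Longrightarrow> (\<forall>a<n. e a \<in> Hm A B) \<Longrightarrow>
   G (lcomb C A B n c e) = (\<Sum>a<n. c a * G (e a))"
  unfolding lcomb_def
  by (subst linfun_msum) (auto simp: linfun_def comp_def atLeast0LessThan[symmetric]
      sum_set_upt_conv_sum_list_nat[symmetric] intro!: sum.cong)

text \<open>Linear maps are closed under pre- and post-composition and whiskering; these rules
  let linearity of the functionals occurring below be checked mechanically.\<close>

lemma linmap_id: "linmap A B A B (\<lambda>x. x)" by (simp add: linmap_def)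

lemma linmap_post: "linmap A B A' B' L \<Longrightarrow> P \<in> Hm B' D \<Longrightarrow> linmap A B A' D (\<lambda>x. P \<odot> L x)"
  unfolding linmap_def by (auto simp: comp_ad_r[of _ A' B'] comp_sm_r[of _ A' B'])

lemma linmap_pre: "linmap A B A' B' L \<Longrightarrow> Q \<in> Hm A0 A' \<Longrightarrow> linmap A B A0 B' (\<lambda>x. L x \<odot> Q)"
  unfolding linmap_def by (auto simp: comp_ad_l[of Q A0 A' _ B'] comp_sm_l[of Q A0 A' _ B'])

lemma linmap_tmr: "linmap A B A' B' L \<Longrightarrow> g \<in> Hm X Y \<Longrightarrow> linmap A B (A' \<otimes> X) (B' \<otimes> Y) (\<lambda>x. L x \<boxtimes> g)"
  unfolding linmap_def by (auto simp: tm_ad_l[of _ A' B'] tm_sm_l)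

lemma linmap_tml: "linmap A B A' B' L \<Longrightarrow> g \<in> Hm X Y \<Longrightarrow> linmap A B (X \<otimes> A') (Y \<otimes> B') (\<lambda>x. g \<boxtimes> L x)"
  unfolding linmap_def by (auto simp: tm_ad_r[of _ A' B'] tm_sm_r)

lemma linfun_of: "linfun A' B' G \<Longrightarrow> linmap A B A' B' L \<Longrightarrow> linfun A B (\<lambda>x. G (L x))"
  unfolding linfun_def linmap_def by auto

text \<open>The same closure rules with the objects read off the fixed morphisms, so that they
  can be applied by resolution.\<close>

lemma lm_post: "linmap A B A' B' L \<Longrightarrow> cDom C P = B' \<Longrightarrow> linmap A B A' (cCod C P) (\<lambda>x. P \<odot> L x)"
  by (rule linmap_post) (auto simp: hom_iff)
lemma lm_pre: "linmap A B A' B' L \<Longrightarrow> cCod C Q = A' \<Longrightarrow> linmap A B (cDom C Q) B' (\<lambda>x. L x \<odot> Q)"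
  by (rule linmap_pre) (auto simp: hom_iff)
lemma lm_tmr: "linmap A B A' B' L \<Longrightarrow> linmap A B (A' \<otimes> cDom C g) (B' \<otimes> cCod C g) (\<lambda>x. L x \<boxtimes> g)"
  by (rule linmap_tmr) (auto simp: hom_iff)
lemma lm_tml: "linmap A B A' B' L \<Longrightarrow> linmap A B (cDom C g \<otimes> A') (cCod C g \<otimes> B') (\<lambda>x. g \<boxtimes> L x)"
  by (rule linmap_tml) (auto simp: hom_iff)

lemmas lm_rules = lm_post lm_pre lm_tmr lm_tml linmap_id

lemma sm_id_inj:
  assumes s: "simple_obj C W" and e: "sm c (idm W) = sm c' (idm W)"
  shows "c = c'"
proof (rule ccontr)
  assume ne: "c \<noteq> c'"
  have i: "idm W \<in> Hm W W" by simp
  have "sm (c - c') (idm W) = ad (sm c (idm W)) (sm (- c') (idm W))"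
    using add_sm[OF i, of c "- c'"] by simp
  also have "\<dots> = sm (c' + - c') (idm W)" using e add_sm[OF i, of c' "- c'"] by simp
  also have "\<dots> = zr W W" using sm_zero[OF i] by simp
  finally have z: "sm (c - c') (idm W) = zr W W" .
  have "idm W = sm (inverse (c - c') * (c - c')) (idm W)" using ne one_sm[OF i] by simp
  also have "\<dots> = zr W W" using mult_sm[OF i] z by simp
  finally show False using s unfolding simple_obj_def by simp
qed

lemma scal_sm_id: "simple_obj C W \<Longrightarrow> scal C W (sm c (idm W)) = c"
  unfolding scal_def by (rule the_equality) (auto dest: sm_id_inj)

lemma endo_scal: "simple_obj C W \<Longrightarrow> f \<in> Hm W W \<Longrightarrow> f = sm (scal C W f) (idm W)"
  unfolding simple_obj_def using scal_sm_id by (force simp: simple_obj_def)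

lemma scal_zr: "simple_obj C W \<Longrightarrow> scal C W (zr W W) = 0"
  using scal_sm_id[of W 0] sm_zero[of "idm W" W W] by simp

lemma linfun_scal: "simple_obj C W \<Longrightarrow> linfun W W (scal C W)"
  unfolding linfun_def
proof safe
  assume s: "simple_obj C W"
  fix f g assume f: "f \<in> Hm W W" and g: "g \<in> Hm W W"
  have "ad f g = sm (scal C W f + scal C W g) (idm W)"
    using endo_scal[OF s f] endo_scal[OF s g] add_sm[of "idm W" W W] by simp
  then show "scal C W (ad f g) = scal C W f + scal C W g" using scal_sm_id[OF s] by simp
next
  assume s: "simple_obj C W"
  fix c f assume f: "f \<in> Hm W W"
  have "sm c f = sm (c * scal C W f) (idm W)"
    using endo_scal[OF s f] mult_sm[of "idm W" W W c "scal C W f"] by simp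
  then show "scal C W (sm c f) = c * scal C W f" using scal_sm_id[OF s] by simp
qed

lemma scal_linfun:
  "simple_obj C W \<Longrightarrow> linmap A B W W L \<Longrightarrow> linfun A B (\<lambda>x. scal C W (L x))"
  using linfun_of[OF linfun_scal] by blast

end

section \<open>A \<Psi>-system with chosen dual bases\<close>

text \<open>A \<Psi>-system (with duality morphisms \<open>bm\<close>, \<open>dm\<close>, which the argument does not
  need) together with the chosen dual bases \<open>eb\<close> of \<open>H^{ij}_k\<close> and \<open>ed\<close> of
  \<open>H^k_{ij}\<close>.\<close>

locale psi_bases =
  fixes C :: "('o,'m,'k::field) mcat"
    and I :: "'i set" and V :: "'i \<Rightarrow> 'o" and st :: "'i \<Rightarrow> 'i"
    and bm dm :: "'i \<Rightarrow> 'm"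
    and N :: "'i \<Rightarrow> 'i \<Rightarrow> 'i \<Rightarrow> nat"
    and eb ed :: "'i \<Rightarrow> 'i \<Rightarrow> 'i \<Rightarrow> nat \<Rightarrow> 'm"
  assumes psi: "psi_system C I V st bm dm"
    and db: "dual_bases C I V N eb ed"

sublocale psi_bases \<subseteq> smab_cat C
  using psi unfolding psi_system_def smab_cat_iff by blast

context psi_bases
begin

lemma simple: "i \<in> I \<Longrightarrow> simple_obj C (V i)"
  using psi unfolding psi_system_def by blast

lemma hom_distinct: "i \<in> I \<Longrightarrow> j \<in> I \<Longrightarrow> i \<noteq> j \<Longrightarrow> Hm (V i) (V j) = {zr (V i) (V j)}"
  using psi unfolding psi_system_def by blast

lemma schur_zero: "i \<in> I \<Longrightarrow> j \<in> I \<Longrightarrow> i \<noteq> j \<Longrightarrow> f \<in> Hm (V i) (V j) \<Longrightarrow> f = zr (V i) (V j)"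
  using hom_distinct by blast

lemma scal_linfun_V:
  "linmap A B A' B' L \<Longrightarrow> m \<in> I \<Longrightarrow> A' = V m \<Longrightarrow> B' = V m \<Longrightarrow>
   linfun A B (\<lambda>x. scal C (V m) (L x))"
  using scal_linfun simple by blast

lemma dual_bases_at:
  "i \<in> I \<Longrightarrow> j \<in> I \<Longrightarrow> k \<in> I \<Longrightarrow>
   is_basis C (V k) (V i \<otimes> V j) (N i j k) (eb i j k) \<and>
   is_basis C (V i \<otimes> V j) (V k) (N i j k) (ed i j k) \<and>
   (\<forall>a<N i j k. \<forall>b<N i j k. scal C (V k) (ed i j k a \<odot> eb i j k b) = (if a = b then 1 else 0))"
  using db unfolding dual_bases_def by blast

lemma span_up: "i \<in> I \<Longrightarrow> j \<in> I \<Longrightarrow> k \<in> I \<Longrightarrow> Y \<in> Hm (V k) (V i \<otimes> V j) \<Longrightarrow>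
   \<exists>c. Y = lcomb C (V k) (V i \<otimes> V j) (N i j k) c (eb i j k)"
  using dual_bases_at unfolding is_basis_def by blast

lemma span_dn: "i \<in> I \<Longrightarrow> j \<in> I \<Longrightarrow> k \<in> I \<Longrightarrow> Y \<in> Hm (V i \<otimes> V j) (V k) \<Longrightarrow>
   \<exists>c. Y = lcomb C (V i \<otimes> V j) (V k) (N i j k) c (ed i j k)"
  using dual_bases_at unfolding is_basis_def by blast

lemma eb_hom[intro]:
  "i \<in> I \<Longrightarrow> j \<in> I \<Longrightarrow> k \<in> I \<Longrightarrow> a < N i j k \<Longrightarrow> eb i j k a \<in> Hm (V k) (V i \<otimes> V j)"
  using dual_bases_at unfolding is_basis_def by blast
lemma ed_hom[intro]:
  "i \<in> I \<Longrightarrow> j \<in> I \<Longrightarrow> k \<in> I \<Longrightarrow> a < N i j k \<Longrightarrow> ed i j k a \<in> Hm (V i \<otimes> V j) (V k)"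
  using dual_bases_at unfolding is_basis_def by blast

lemma dom_eb[simp]: "i \<in> I \<Longrightarrow> j \<in> I \<Longrightarrow> k \<in> I \<Longrightarrow> a < N i j k \<Longrightarrow> cDom C (eb i j k a) = V k"
  using eb_hom by (simp add: hom_iff)
lemma cod_eb[simp]: "i \<in> I \<Longrightarrow> j \<in> I \<Longrightarrow> k \<in> I \<Longrightarrow> a < N i j k \<Longrightarrow> cCod C (eb i j k a) = V i \<otimes> V j"
  using eb_hom by (simp add: hom_iff)
lemma dom_ed[simp]: "i \<in> I \<Longrightarrow> j \<in> I \<Longrightarrow> k \<in> I \<Longrightarrow> a < N i j k \<Longrightarrow> cDom C (ed i j k a) = V i \<otimes> V j"
  using ed_hom by (simp add: hom_iff)
lemma cod_ed[simp]: "i \<in> I \<Longrightarrow> j \<in> I \<Longrightarrow> k \<in> I \<Longrightarrow> a < N i j k \<Longrightarrow> cCod C (ed i j k a) = V k"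
  using ed_hom by (simp add: hom_iff)

lemma dual: "i \<in> I \<Longrightarrow> j \<in> I \<Longrightarrow> k \<in> I \<Longrightarrow> a < N i j k \<Longrightarrow> b < N i j k \<Longrightarrow>
   scal C (V k) (ed i j k a \<odot> eb i j k b) = (if a = b then 1 else 0)"
  using dual_bases_at by blast

lemma dual_comp:
  assumes ijk: "i \<in> I" "j \<in> I" "k \<in> I" "k' \<in> I" and a: "a < N i j k" and \<alpha>: "\<alpha> < N i j k'"
  shows "ed i j k a \<odot> eb i j k' \<alpha> = (if k' = k \<and> \<alpha> = a then idm (V k) else zr (V k') (V k))"
proof -
  have x: "ed i j k a \<odot> eb i j k' \<alpha> \<in> Hm (V k') (V k)" using ijk a \<alpha> by blast
  show ?thesis
  proof (cases "k' = k")
    case True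
    then have "ed i j k a \<odot> eb i j k' \<alpha> = sm (if \<alpha> = a then 1 else 0) (idm (V k))"
      using endo_scal[OF simple[OF ijk(3)]] x dual[OF ijk(1-3) a] \<alpha> by (auto simp: eq_commute)
    then show ?thesis using True one_sm[OF id_hom] sm_zero[OF id_hom] by simp
  qed (use x schur_zero ijk in auto)
qed

lemma coef_up:
  assumes ijk: "i \<in> I" "j \<in> I" "k \<in> I" and a: "a < N i j k"
  shows "scal C (V k) (ed i j k a \<odot> lcomb C (V k) (V i \<otimes> V j) (N i j k) c (eb i j k)) = c a"
proof -
  have lf: "linfun (V k) (V i \<otimes> V j) (\<lambda>x. scal C (V k) (ed i j k a \<odot> x))"
    by (rule scal_linfun_V[where m=k], (rule lm_rules)+) (use ijk a in auto)
  have "scal C (V k) (ed i j k a \<odot> lcomb C (V k) (V i \<otimes> V j) (N i j k) c (eb i j k))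
     = (\<Sum>b<N i j k. c b * scal C (V k) (ed i j k a \<odot> eb i j k b))"
    by (rule linfun_lcomb[OF lf]) (use ijk in auto)
  also have "\<dots> = (\<Sum>b<N i j k. if b = a then c a else 0)"
    by (rule sum.cong) (use ijk a dual in auto)
  also have "\<dots> = c a" using a by simp
  finally show ?thesis .
qed

lemma coef_dn:
  assumes ijk: "i \<in> I" "j \<in> I" "k \<in> I" and a: "a < N i j k"
  shows "scal C (V k) (lcomb C (V i \<otimes> V j) (V k) (N i j k) c (ed i j k) \<odot> eb i j k a) = c a"
proof -
  have lf: "linfun (V i \<otimes> V j) (V k) (\<lambda>x. scal C (V k) (x \<odot> eb i j k a))"
    by (rule scal_linfun_V[where m=k], (rule lm_rules)+) (use ijk a in auto)
  have "scal C (V k) (lcomb C (V i \<otimes> V j) (V k) (N i j k) c (ed i j k) \<odot> eb i j k a)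
     = (\<Sum>b<N i j k. c b * scal C (V k) (ed i j k b \<odot> eb i j k a))"
    by (rule linfun_lcomb[OF lf]) (use ijk in auto)
  also have "\<dots> = (\<Sum>b<N i j k. if b = a then c a else 0)"
    by (rule sum.cong) (use ijk a dual in auto)
  also have "\<dots> = c a" using a by simp
  finally show ?thesis .
qed

lemma exp_up:
  assumes ijk: "i \<in> I" "j \<in> I" "k \<in> I" and Y: "Y \<in> Hm (V k) (V i \<otimes> V j)"
    and G: "linfun (V k) (V i \<otimes> V j) G"
  shows "(\<Sum>a<N i j k. scal C (V k) (ed i j k a \<odot> Y) * G (eb i j k a)) = G Y"
proof -
  obtain c where c: "Y = lcomb C (V k) (V i \<otimes> V j) (N i j k) c (eb i j k)"
    using span_up[OF ijk Y] by blast
  have "G Y = (\<Sum>a<N i j k. c a * G (eb i j k a))"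
    unfolding c by (rule linfun_lcomb[OF G]) (use ijk in auto)
  then show ?thesis by (simp add: c coef_up ijk)
qed

lemma exp_dn:
  assumes ijk: "i \<in> I" "j \<in> I" "k \<in> I" and X: "X \<in> Hm (V i \<otimes> V j) (V k)"
    and G: "linfun (V i \<otimes> V j) (V k) G"
  shows "(\<Sum>a<N i j k. scal C (V k) (X \<odot> eb i j k a) * G (ed i j k a)) = G X"
proof -
  obtain c where c: "X = lcomb C (V i \<otimes> V j) (V k) (N i j k) c (ed i j k)"
    using span_dn[OF ijk X] by blast
  have "G X = (\<Sum>a<N i j k. c a * G (ed i j k a))"
    unfolding c by (rule linfun_lcomb[OF G]) (use ijk in auto)
  then show ?thesis by (simp add: c coef_dn ijk)
qed

definition chan :: "'i \<Rightarrow> 'i \<Rightarrow> 'i set" where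
  "chan i j = {k \<in> I. 0 < N i j k}"

lemma chan_I: "k \<in> chan i j \<Longrightarrow> k \<in> I"
  by (simp add: chan_def)

lemma chan_gg: "i \<in> I \<Longrightarrow> j \<in> I \<Longrightarrow> k \<in> chan i j \<Longrightarrow> gg C I V i j"
proof -
  assume ij: "i \<in> I" "j \<in> I" and k: "k \<in> chan i j"
  then have kI: "k \<in> I" and n: "0 < N i j k" by (auto simp: chan_def)
  have "scal C (V k) (ed i j k 0 \<odot> eb i j k 0) = 1" using dual[OF ij kI n n] by simp
  then have "eb i j k 0 \<noteq> zr (V k) (V i \<otimes> V j)"
    using comp_zr_r[OF ed_hom[OF ij kI n]] scal_zr[OF simple[OF kI]] by auto
  then show "gg C I V i j" unfolding gg_def Hup_def using kI eb_hom[OF ij kI n] by blast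
qed

lemma hom_zero_off_chan: "i \<in> I \<Longrightarrow> j \<in> I \<Longrightarrow> k \<in> I \<Longrightarrow> k \<notin> chan i j \<Longrightarrow> x \<in> Hm (V k) (V i \<otimes> V j) \<Longrightarrow>
   x = zr (V k) (V i \<otimes> V j)"
  using span_up[of i j k x] by (auto simp: chan_def lcomb_def msum_def)

lemma V_inj: "inj_on V I"
proof (rule inj_onI, rule ccontr)
  fix i j assume i: "i \<in> I" and j: "j \<in> I" and e: "V i = V j" and ne: "i \<noteq> j"
  have "idm (V i) = zr (V i) (V i)" using schur_zero[OF i j ne] e by (metis id_hom)
  then show False using simple[OF i] unfolding simple_obj_def by simp
qed

definition id_decomp :: "'i \<Rightarrow> 'i \<Rightarrow> ('m \<times> 'm) list \<Rightarrow> bool" where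
  "id_decomp i j xs \<longleftrightarrow>
     set xs \<subseteq> {(x, y). \<exists>k\<in>I. x \<in> Hm (V k) (V i \<otimes> V j) \<and> y \<in> Hm (V i \<otimes> V j) (V k)} \<and>
     idm (V i \<otimes> V j) = msum C (V i \<otimes> V j) (V i \<otimes> V j) (map (\<lambda>(x, y). x \<odot> y) xs)"

lemma id_decomp_exists: "i \<in> I \<Longrightarrow> j \<in> I \<Longrightarrow> gg C I V i j \<Longrightarrow> \<exists>xs. id_decomp i j xs"
  using psi unfolding psi_system_def gg_def Hup_def Hdn_def id_decomp_def by blast

lemma id_decomp_apply:
  assumes xs: "id_decomp i j xs" and G: "linfun (V i \<otimes> V j) (V i \<otimes> V j) G"
  shows "G (idm (V i \<otimes> V j)) = (\<Sum>p\<leftarrow>xs. G (case p of (x, y) \<Rightarrow> x \<odot> y))"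
proof -
  have "set (map (\<lambda>(x, y). x \<odot> y) xs) \<subseteq> Hm (V i \<otimes> V j) (V i \<otimes> V j)"
    using xs unfolding id_decomp_def by auto
  then show ?thesis using xs linfun_msum[OF G] unfolding id_decomp_def by (simp add: comp_def)
qed

text \<open>Every channel occurs in any decomposition of the identity: the functional
  \<open>w \<mapsto> \<langle>e^{k0}_{ij} w e^{ij}_{k0}\<rangle>\<close> is 1 on the identity and vanishes on summands
  that factor through \<open>V_{k'}\<close>, \<open>k' \<noteq> k\<close>.\<close>

lemma chan_in_decomp:
  assumes ij: "i \<in> I" "j \<in> I" and xs: "id_decomp i j xs" and k: "k \<in> chan i j"
  shows "\<exists>(x, y)\<in>set xs. cCod C y = V k"
proof (rule ccontr)
  assume none: "\<not> ?thesis"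
  have kI: "k \<in> I" and n: "0 < N i j k" using k by (auto simp: chan_def)
  define G where "G = (\<lambda>w. scal C (V k) ((ed i j k 0 \<odot> w) \<odot> eb i j k 0))"
  have lf: "linfun (V i \<otimes> V j) (V i \<otimes> V j) G"
    unfolding G_def by (rule scal_linfun_V[where m=k], (rule lm_rules)+) (use ij kI n in auto)
  have "G (idm (V i \<otimes> V j)) = 1"
    unfolding G_def using id_r[OF ed_hom[OF ij kI n]] dual[OF ij kI n n] by simp
  moreover have "G (case p of (x, y) \<Rightarrow> x \<odot> y) = 0" if p: "p \<in> set xs" for p
  proof -
    obtain x y k' where pxy: "p = (x, y)" and k': "k' \<in> I" and x: "x \<in> Hm (V k') (V i \<otimes> V j)"
      and y: "y \<in> Hm (V i \<otimes> V j) (V k')" using p xs unfolding id_decomp_def by blast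
    have "k' \<noteq> k" using none p pxy y by (auto simp: hom_iff)
    then have "y \<odot> eb i j k 0 = zr (V k) (V k')"
      using schur_zero[OF kI k'] y eb_hom[OF ij kI n] by blast
    moreover have "(ed i j k 0 \<odot> (x \<odot> y)) \<odot> eb i j k 0 = (ed i j k 0 \<odot> x) \<odot> (y \<odot> eb i j k 0)"
      using x y ij kI n by (simp add: assoc_s hom_iff)
    moreover have "ed i j k 0 \<odot> x \<in> Hm (V k') (V k)" using x ij kI n by blast
    ultimately show ?thesis
      unfolding pxy G_def using comp_zr_r scal_zr[OF simple[OF kI]] by auto
  qed
  then have "(\<Sum>p\<leftarrow>xs. G (case p of (x, y) \<Rightarrow> x \<odot> y)) = (\<Sum>p\<leftarrow>xs. 0)"
    by (intro arg_cong[where f = sum_list] map_cong) auto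
  ultimately show False using id_decomp_apply[OF xs lf] by simp
qed

text \<open>By the previous lemma, \<open>V_i \<otimes> V_j\<close> has only finitely many channels.\<close>

lemma chan_finite:
  assumes i: "i \<in> I" and j: "j \<in> I"
  shows "finite (chan i j)"
proof (cases "gg C I V i j")
  case False
  then show ?thesis using chan_gg[OF i j] by (metis finite.emptyI subsetI subset_empty)
next
  case True
  then obtain xs where xs: "id_decomp i j xs" using id_decomp_exists[OF i j] by blast
  have "V ` chan i j \<subseteq> (\<lambda>p. cCod C (snd p)) ` set xs"
    using chan_in_decomp[OF i j xs] by force
  then have "finite (V ` chan i j)" using finite_subset by blast
  then show ?thesis using finite_imageD inj_on_subset[OF V_inj] chan_I by (metis subsetI)
qed

text \<open>Inserting the basis resolution \<open>e^{ij}_{k a} e^{k a}_{ij}\<close> in front of a morphism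
  \<open>x \<circ> y\<close> that factors through \<open>V_{k0}\<close>: by Schur's lemma only the channel \<open>k0\<close>
  survives, where \<open>e^{k0 a}_{ij} x\<close> is a scalar.\<close>

lemma resolution_summand:
  assumes i: "i \<in> I" and j: "j \<in> I" and k: "k \<in> I" and k0: "k0 \<in> I" and a: "a < N i j k"
    and x: "x \<in> Hm (V k0) (V i \<otimes> V j)" and y: "y \<in> Hm (V i \<otimes> V j) (V k0)"
  shows "(eb i j k a \<odot> ed i j k a) \<odot> (x \<odot> y) =
    (if k = k0 then sm (scal C (V k) (ed i j k a \<odot> x)) (eb i j k a \<odot> y) else zr (V i \<otimes> V j) (V i \<otimes> V j))"
proof -
  have split: "(eb i j k a \<odot> ed i j k a) \<odot> (x \<odot> y) = eb i j k a \<odot> ((ed i j k a \<odot> x) \<odot> y)"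
    using i j k a x y by (simp add: assoc_s hom_iff)
  show ?thesis
  proof (cases "k = k0")
    case True
    have ex: "ed i j k a \<odot> x \<in> Hm (V k) (V k)" and yk: "y \<in> Hm (V i \<otimes> V j) (V k)"
      using comp_hom[OF x ed_hom[OF i j k a]] y True by simp_all
    have "(ed i j k a \<odot> x) \<odot> y = sm (scal C (V k) (ed i j k a \<odot> x)) (idm (V k)) \<odot> y"
      using endo_scal[OF simple[OF k] ex] by simp
    also have "\<dots> = sm (scal C (V k) (ed i j k a \<odot> x)) y"
      by (simp add: comp_sm_l[OF yk id_hom] id_l[OF yk])
    finally show ?thesis using split True comp_sm_r[OF yk eb_hom[OF i j k a]] by simp
  next
    case False
    then have "ed i j k a \<odot> x = zr (V k0) (V k)" using schur_zero[OF k0 k] x i j k a by blast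
    then show ?thesis using split False comp_zr_l[OF y] comp_zr_r[OF eb_hom[OF i j k a]] by simp
  qed
qed

lemma completeness_summand:
  assumes i: "i \<in> I" and j: "j \<in> I" and k0: "k0 \<in> I"
    and x: "x \<in> Hm (V k0) (V i \<otimes> V j)" and y: "y \<in> Hm (V i \<otimes> V j) (V k0)"
    and G: "linfun (V i \<otimes> V j) (V i \<otimes> V j) G"
  shows "(\<Sum>k\<in>chan i j. \<Sum>a<N i j k. G ((eb i j k a \<odot> ed i j k a) \<odot> (x \<odot> y))) = G (x \<odot> y)"
proof -
  let ?c = "\<lambda>a. scal C (V k0) (ed i j k0 a \<odot> x) * G (eb i j k0 a \<odot> y)"
  have summand: "G ((eb i j k a \<odot> ed i j k a) \<odot> (x \<odot> y)) = (if k = k0 then ?c a else 0)"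
    if k: "k \<in> I" and a: "a < N i j k" for k a
  proof (cases "k = k0")
    case True
    then have "eb i j k0 a \<odot> y \<in> Hm (V i \<otimes> V j) (V i \<otimes> V j)"
      using comp_hom[OF y eb_hom[OF i j k0]] a by blast
    then show ?thesis using resolution_summand[OF i j k k0 a x y] True G unfolding linfun_def by simp
  next
    case False
    then show ?thesis using resolution_summand[OF i j k k0 a x y] linfun_zr[OF G] by simp
  qed
  have "(\<Sum>k\<in>chan i j. \<Sum>a<N i j k. G ((eb i j k a \<odot> ed i j k a) \<odot> (x \<odot> y)))
      = (\<Sum>k\<in>chan i j. if k = k0 then (\<Sum>a<N i j k0. ?c a) else 0)"
    by (intro sum.cong refl) (auto simp: summand chan_I)
  also have "\<dots> = (if k0 \<in> chan i j then (\<Sum>a<N i j k0. ?c a) else 0)"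
    by (simp add: sum.delta chan_finite[OF i j])
  also have "\<dots> = G (x \<odot> y)"
  proof (cases "k0 \<in> chan i j")
    case True
    have "linfun (V k0) (V i \<otimes> V j) (\<lambda>w. G (w \<odot> y))"
      by (rule linfun_of[OF G], rule linmap_pre[OF linmap_id y])
    then show ?thesis using exp_up[OF i j k0 x] True by simp
  next
    case False
    then have "x \<odot> y = zr (V i \<otimes> V j) (V i \<otimes> V j)" using hom_zero_off_chan[OF i j k0 _ x] comp_zr_l[OF y] by simp
    then show ?thesis using False linfun_zr[OF G] by simp
  qed
  finally show ?thesis .
qed

lemma completeness:
  assumes i: "i \<in> I" and j: "j \<in> I" and G: "linfun (V i \<otimes> V j) (V i \<otimes> V j) G"
  shows "(\<Sum>k\<in>chan i j. \<Sum>a<N i j k. G (eb i j k a \<odot> ed i j k a))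
       = (if gg C I V i j then G (idm (V i \<otimes> V j)) else 0)"
proof (cases "gg C I V i j")
  case False
  then have "chan i j = {}" using chan_gg[OF i j] by blast
  then show ?thesis using False by simp
next
  case True
  then obtain xs where xs: "id_decomp i j xs" using id_decomp_exists[OF i j] by blast
  let ?E = "\<lambda>k a. eb i j k a \<odot> ed i j k a"
  have "(\<Sum>k\<in>chan i j. \<Sum>a<N i j k. G (?E k a))
      = (\<Sum>k\<in>chan i j. \<Sum>a<N i j k. \<Sum>p\<leftarrow>xs. G (?E k a \<odot> (case p of (x, y) \<Rightarrow> x \<odot> y)))"
  proof (intro sum.cong refl)
    fix k a assume k: "k \<in> chan i j" and a: "a \<in> {..<N i j k}"
    have E: "?E k a \<in> Hm (V i \<otimes> V j) (V i \<otimes> V j)" using i j k a chan_I by blast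
    have "G (?E k a) = G (?E k a \<odot> idm (V i \<otimes> V j))" using id_r[OF E] by simp
    also have "\<dots> = (\<Sum>p\<leftarrow>xs. G (?E k a \<odot> (case p of (x, y) \<Rightarrow> x \<odot> y)))"
      by (rule id_decomp_apply[OF xs linfun_of[OF G linmap_post[OF linmap_id E]]])
    finally show "G (?E k a) = (\<Sum>p\<leftarrow>xs. G (?E k a \<odot> (case p of (x, y) \<Rightarrow> x \<odot> y)))" .
  qed
  also have "\<dots> = (\<Sum>p\<leftarrow>xs. \<Sum>k\<in>chan i j. \<Sum>a<N i j k. G (?E k a \<odot> (case p of (x, y) \<Rightarrow> x \<odot> y)))"
    by (induction xs) (simp_all add: sum.distrib)
  also have "\<dots> = (\<Sum>p\<leftarrow>xs. G (case p of (x, y) \<Rightarrow> x \<odot> y))"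
  proof (rule arg_cong[where f = sum_list], rule map_cong[OF refl])
    fix p assume "p \<in> set xs"
    then obtain x y k0 where "p = (x, y)" "k0 \<in> I" "x \<in> Hm (V k0) (V i \<otimes> V j)"
      "y \<in> Hm (V i \<otimes> V j) (V k0)" using xs unfolding id_decomp_def by blast
    then show "(\<Sum>k\<in>chan i j. \<Sum>a<N i j k. G (?E k a \<odot> (case p of (x, y) \<Rightarrow> x \<odot> y))) =
          G (case p of (x, y) \<Rightarrow> x \<odot> y)"
      using completeness_summand[OF i j _ _ _ G] by simp
  qed
  also have "\<dots> = G (idm (V i \<otimes> V j))" using id_decomp_apply[OF xs G] by simp
  finally show ?thesis using True by simp
qed

section \<open>Matrix entries of \<open>\<tau>\<close> and \<open>\<bar>\<tau>\<close>\<close>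

lemma proj_hom[intro]: "j \<in> I \<Longrightarrow> l \<in> I \<Longrightarrow> n \<in> I \<Longrightarrow> proj C V N eb x j l n \<in> Hm (V n) (V j \<otimes> V l)"
  unfolding proj_def by (rule lcomb_hom) auto

lemma dom_proj[simp]: "j \<in> I \<Longrightarrow> l \<in> I \<Longrightarrow> n \<in> I \<Longrightarrow> cDom C (proj C V N eb x j l n) = V n"
  using proj_hom by (simp add: hom_iff)
lemma cod_proj[simp]: "j \<in> I \<Longrightarrow> l \<in> I \<Longrightarrow> n \<in> I \<Longrightarrow> cCod C (proj C V N eb x j l n) = V j \<otimes> V l"
  using proj_hom by (simp add: hom_iff)

lemma proj_lin:
  assumes jln: "j \<in> I" "l \<in> I" "n \<in> I" and G: "linfun (V n) (V j \<otimes> V l) G"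
  shows "G (proj C V N eb (ev (j', l', n', \<beta>)) j l n) =
         (if j' = j \<and> l' = l \<and> n' = n \<and> \<beta> < N j l n then G (eb j l n \<beta>) else 0)"
proof -
  have "G (proj C V N eb (ev (j', l', n', \<beta>)) j l n) =
     (\<Sum>a<N j l n. ev (j', l', n', \<beta>) (j, l, n, a) * G (eb j l n a))"
    unfolding proj_def by (rule linfun_lcomb[OF G]) (use jln in auto)
  also have "\<dots> = (\<Sum>a<N j l n. if a = \<beta> then (if j' = j \<and> l' = l \<and> n' = n then G (eb j l n a) else 0) else 0)"
    by (rule sum.cong) (auto simp: ev_def)
  also have "\<dots> = (if j' = j \<and> l' = l \<and> n' = n \<and> \<beta> < N j l n then G (eb j l n \<beta>) else 0)"
    by (simp add: sum.delta)
  finally show ?thesis .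
qed

lemma hc_eq: "hc C V N ed a b c f (a', b', c', d) =
   (if a' = a \<and> b' = b \<and> c' = c \<and> d < N a b c then scal C (V c) (ed a b c d \<odot> f) else 0)"
  by (simp add: hc_def)

text \<open>\<open>\<langle>e^{m a}_{kl} (e^{k \<alpha>}_{ij} \<boxtimes> Id) (Id \<boxtimes> e^{jl}_{n \<beta>}) e^{in}_{m \<gamma>}\<rangle>\<close>: the coefficient
  of \<open>e^{kl}_{m a} \<otimes> e^{ij}_{k \<alpha>}\<close> in \<open>\<tau>(e^{jl}_{n \<beta>} \<otimes> e^{in}_{m \<gamma>})\<close>.\<close>

definition tau_coef where
  "tau_coef i j k l m n a \<alpha> \<beta> \<gamma> = scal C (V m) (ed k l m a \<odot>
     (((ed i j k \<alpha> \<boxtimes> idm (V l)) \<odot> (idm (V i) \<boxtimes> eb j l n \<beta>)) \<odot> eb i n m \<gamma>))"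

text \<open>A summand of \<open>\<tau>\<close> on basis vectors: both projections are linear in the vector.\<close>

lemma tau_summand_basis:
  assumes I: "i \<in> I" "j \<in> I" "k \<in> I" "l \<in> I" "m \<in> I" "n \<in> I" and \<alpha>: "\<alpha> < N i j k" and a: "a < N k l m"
  shows "scal C (V m) (ed k l m a \<odot> (((ed i j k \<alpha> \<boxtimes> idm (V l)) \<odot> (idm (V i) \<boxtimes> proj C V N eb (ev (j', l', n', \<beta>)) j l n))
            \<odot> proj C V N eb (ev (i', n'', m', \<gamma>)) i n m))
       = (if j' = j \<and> l' = l \<and> n' = n \<and> \<beta> < N j l n \<and> i' = i \<and> n'' = n \<and> m' = m \<and> \<gamma> < N i n m
          then tau_coef i j k l m n a \<alpha> \<beta> \<gamma> else 0)"
proof -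
  let ?Px = "proj C V N eb (ev (j', l', n', \<beta>)) j l n"
  have G1: "linfun (V m) (V i \<otimes> V n)
      (\<lambda>w. scal C (V m) (ed k l m a \<odot> (((ed i j k \<alpha> \<boxtimes> idm (V l)) \<odot> (idm (V i) \<boxtimes> ?Px)) \<odot> w)))"
    by (rule scal_linfun_V[where m=m], (rule lm_rules)+) (use I \<alpha> a in auto)
  have G2: "linfun (V n) (V j \<otimes> V l)
      (\<lambda>w. scal C (V m) (ed k l m a \<odot> (((ed i j k \<alpha> \<boxtimes> idm (V l)) \<odot> (idm (V i) \<boxtimes> w)) \<odot> eb i n m \<gamma>)))"
    if "\<gamma> < N i n m"
    by (rule scal_linfun_V[where m=m], (rule lm_rules)+) (use I \<alpha> a that in auto)
  show ?thesis
    unfolding proj_lin[OF I(1) I(6) I(5) G1] using proj_lin[OF I(2) I(4) I(6) G2]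
    by (simp add: tau_coef_def)
qed

lemma tau_pure_basis:
  "tau_pure C I V N eb ed (ev (j', l', n, \<beta>)) (ev (i', n', m', \<gamma>)) (k, l, m, a) (i, j, k', \<alpha>) =
   (if k' = k \<and> j' = j \<and> l' = l \<and> i' = i \<and> n' = n \<and> m' = m \<and> i \<in> I \<and> j \<in> I \<and> k \<in> I \<and> l \<in> I \<and> m \<in> I \<and> n \<in> I
       \<and> \<alpha> < N i j k \<and> a < N k l m \<and> \<beta> < N j l n \<and> \<gamma> < N i n m
    then tau_coef i j k l m n a \<alpha> \<beta> \<gamma> else 0)" (is "_ = ?R")
proof -
  let ?S = "idx7 I (\<lambda>i j k l m n. N i j k)"
  let ?f = "\<lambda>(i2, j2, k2, l2, m2, n2, a2).
      tens (hc C V N ed k2 l2 m2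
              (cCmp C (cCmp C (cTmo C (ed i2 j2 k2 a2) (cId C (V l2)))
                               (cTmo C (cId C (V i2)) (proj C V N eb (ev (j', l', n, \<beta>)) j2 l2 n2)))
                      (proj C V N eb (ev (i', n', m', \<gamma>)) i2 n2 m2)))
           (hc C V N ed i2 j2 k2 (eb i2 j2 k2 a2)) (k, l, m, a) (i, j, k', \<alpha>)"
  let ?t0 = "(i, j, k, l, m, n, \<alpha>)"
  have eq: "?f s = (if s = ?t0 then ?R else 0)" if sS: "s \<in> ?S" for s
  proof -
    obtain i2 j2 k2 l2 m2 n2 a2 where s: "s = (i2, j2, k2, l2, m2, n2, a2)" by (cases s) auto
    have I2: "i2 \<in> I" "j2 \<in> I" "k2 \<in> I" "l2 \<in> I" "m2 \<in> I" "n2 \<in> I" and a2: "a2 < N i2 j2 k2"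
      using sS s by (auto simp: idx7_def)
    show ?thesis
    proof (cases "i = i2 \<and> j = j2 \<and> k' = k2 \<and> \<alpha> = a2 \<and> k = k2 \<and> l = l2 \<and> m = m2 \<and> a < N k l m")
      case False
      then have "?f s = 0" using I2 a2 dual[OF I2(1-3) _ a2] by (auto simp: s tens_def hc_eq)
      then show ?thesis using False s by auto
    next
      case True
      then show ?thesis
        using I2 a2 dual[OF I2(1-3) a2 a2] tau_summand_basis[of i j k l m n2 \<alpha> a j' l' n \<beta> i' n' m' \<gamma>]
        by (auto simp: s tens_def hc_eq)
    qed
  qed
  have "fsum ?f ?S = fsum (\<lambda>s. if s = ?t0 then ?R else 0) ?S" by (rule fsum_cong) (rule eq)
  also have "\<dots> = ?R" by (subst fsum_single) (auto simp: idx7_def)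
  finally show ?thesis unfolding tau_pure_def by simp
qed

definition tau_entry_sum where
  "tau_entry_sum v i j k l m a \<alpha> = (\<Sum>n\<in>chan j l. \<Sum>\<beta><N j l n. \<Sum>\<gamma><N i n m.
      v (j, l, n, \<beta>) (i, n, m, \<gamma>) * tau_coef i j k l m n a \<alpha> \<beta> \<gamma>)"

lemma tau_entry:
  "tau C I V N eb ed v (k, l, m, a) (i, j, k', \<alpha>) =
   (if k' = k \<and> i \<in> I \<and> j \<in> I \<and> k \<in> I \<and> l \<in> I \<and> m \<in> I \<and> \<alpha> < N i j k \<and> a < N k l m
    then tau_entry_sum v i j k l m a \<alpha> else 0)" (is "_ = (if ?c then _ else 0)")
proof -
  let ?F = "tau_pure C I V N eb ed"
  let ?g = "\<lambda>(n, \<beta>, \<gamma>). ((j, l, n, \<beta>), (i, n, m, \<gamma>))"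
  let ?D = "if ?c then SIGMA n:chan j l. {..<N j l n} \<times> {..<N i n m} else {}"
  have fin: "finite (chan j l)" if ?c using chan_finite that by blast
  have "tau C I V N eb ed v (k, l, m, a) (i, j, k', \<alpha>) =
      (\<Sum>x\<in>?D. case ?g x of (b, c) \<Rightarrow> v b c * ?F (ev b) (ev c) (k, l, m, a) (i, j, k', \<alpha>))"
    unfolding tau_def
  proof (rule linext_entry)
    show "finite ?D" using fin by auto
    show "inj_on ?g ?D" by (auto simp: inj_on_def)
    fix b c assume nz: "?F (ev b) (ev c) (k, l, m, a) (i, j, k', \<alpha>) \<noteq> 0"
    obtain j' l' n \<beta> i' n' m' \<gamma> where "b = (j', l', n, \<beta>)" "c = (i', n', m', \<gamma>)" by (cases b, cases c) auto
    with nz show "(b, c) \<in> ?g ` ?D"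
      by (force simp: tau_pure_basis chan_def split: if_splits)
  qed
  also have "\<dots> = (if ?c then tau_entry_sum v i j k l m a \<alpha> else 0)"
  proof (cases ?c)
    case True
    have "(\<Sum>x\<in>(SIGMA n:chan j l. {..<N j l n} \<times> {..<N i n m}).
            case ?g x of (b, c) \<Rightarrow> v b c * ?F (ev b) (ev c) (k, l, m, a) (i, j, k', \<alpha>))
        = (\<Sum>(n, \<beta>, \<gamma>)\<in>(SIGMA n:chan j l. {..<N j l n} \<times> {..<N i n m}).
            v (j, l, n, \<beta>) (i, n, m, \<gamma>) * tau_coef i j k l m n a \<alpha> \<beta> \<gamma>)"
      by (rule sum.cong) (use True in \<open>auto simp: tau_pure_basis chan_def\<close>)
    then show ?thesis using True fin unfolding tau_entry_sum_def by (simp add: sum3_Sigma)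
  next
    case False
    then show ?thesis by (simp only: if_False sum.empty)
  qed
  finally show ?thesis .
qed

text \<open>\<open>\<langle>e^{m a'}_{in} (Id \<boxtimes> e^{n a}_{jl}) (e^{ij}_{k \<alpha>'} \<boxtimes> Id) e^{kl}_{m a''}\<rangle>\<close>: the
  coefficient of \<open>e^{in}_{m a'} \<otimes> e^{jl}_{n a}\<close> in \<open>\<bar>\<tau>(e^{ij}_{k \<alpha>'} \<otimes> e^{kl}_{m a''})\<close>.\<close>

definition taubar_coef where
  "taubar_coef i j k l m n a' a \<alpha>' a'' = scal C (V m) (ed i n m a' \<odot>
     (((idm (V i) \<boxtimes> ed j l n a) \<odot> (eb i j k \<alpha>' \<boxtimes> idm (V l))) \<odot> eb k l m a''))"

lemma taubar_summand_basis:
  assumes I: "i \<in> I" "j \<in> I" "k \<in> I" "l \<in> I" "m \<in> I" "n \<in> I" and a: "a < N j l n" and a': "a' < N i n m"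
  shows "scal C (V m) (ed i n m a' \<odot> (((idm (V i) \<boxtimes> ed j l n a) \<odot> (proj C V N eb (ev (i', j', k', \<alpha>')) i j k \<boxtimes> idm (V l)))
            \<odot> proj C V N eb (ev (k'', l', m', a'')) k l m))
       = (if i' = i \<and> j' = j \<and> k' = k \<and> \<alpha>' < N i j k \<and> k'' = k \<and> l' = l \<and> m' = m \<and> a'' < N k l m
          then taubar_coef i j k l m n a' a \<alpha>' a'' else 0)"
proof -
  let ?Px = "proj C V N eb (ev (i', j', k', \<alpha>')) i j k"
  have G1: "linfun (V m) (V k \<otimes> V l)
      (\<lambda>w. scal C (V m) (ed i n m a' \<odot> (((idm (V i) \<boxtimes> ed j l n a) \<odot> (?Px \<boxtimes> idm (V l))) \<odot> w)))"
    by (rule scal_linfun_V[where m=m], (rule lm_rules)+) (use I a a' in auto)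
  have G2: "linfun (V k) (V i \<otimes> V j)
      (\<lambda>w. scal C (V m) (ed i n m a' \<odot> (((idm (V i) \<boxtimes> ed j l n a) \<odot> (w \<boxtimes> idm (V l))) \<odot> eb k l m a'')))"
    if "a'' < N k l m"
    by (rule scal_linfun_V[where m=m], (rule lm_rules)+) (use I a a' that in auto)
  show ?thesis
    unfolding proj_lin[OF I(3) I(4) I(5) G1] using proj_lin[OF I(1) I(2) I(3) G2]
    by (simp add: taubar_coef_def)
qed

lemma taubar_pure_basis:
  "taubar_pure C I V N eb ed (ev (i', j', k, \<alpha>')) (ev (k', l', m', a'')) (i, n, m, a') (j, l, n', a) =
   (if n' = n \<and> i' = i \<and> j' = j \<and> k' = k \<and> l' = l \<and> m' = m \<and> i \<in> I \<and> j \<in> I \<and> k \<in> I \<and> l \<in> I \<and> m \<in> I \<and> n \<in> I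
       \<and> a < N j l n \<and> a' < N i n m \<and> \<alpha>' < N i j k \<and> a'' < N k l m
    then taubar_coef i j k l m n a' a \<alpha>' a'' else 0)" (is "_ = ?R")
proof -
  let ?S = "idx7 I (\<lambda>i j k l m n. N j l n)"
  let ?f = "\<lambda>(i2, j2, k2, l2, m2, n2, a2).
      tens (hc C V N ed i2 n2 m2
              (cCmp C (cCmp C (cTmo C (cId C (V i2)) (ed j2 l2 n2 a2))
                               (cTmo C (proj C V N eb (ev (i', j', k, \<alpha>')) i2 j2 k2) (cId C (V l2))))
                      (proj C V N eb (ev (k', l', m', a'')) k2 l2 m2)))
           (hc C V N ed j2 l2 n2 (eb j2 l2 n2 a2)) (i, n, m, a') (j, l, n', a)"
  let ?t0 = "(i, j, k, l, m, n, a)"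
  have eq: "?f s = (if s = ?t0 then ?R else 0)" if sS: "s \<in> ?S" for s
  proof -
    obtain i2 j2 k2 l2 m2 n2 a2 where s: "s = (i2, j2, k2, l2, m2, n2, a2)" by (cases s) auto
    have I2: "i2 \<in> I" "j2 \<in> I" "k2 \<in> I" "l2 \<in> I" "m2 \<in> I" "n2 \<in> I" and a2: "a2 < N j2 l2 n2"
      using sS s by (auto simp: idx7_def)
    show ?thesis
    proof (cases "j = j2 \<and> l = l2 \<and> n' = n2 \<and> a = a2 \<and> i = i2 \<and> n = n2 \<and> m = m2 \<and> a' < N i n m")
      case False
      then have "?f s = 0" using I2 a2 dual[OF I2(2) I2(4) I2(6) _ a2] by (auto simp: s tens_def hc_eq)
      then show ?thesis using False s by auto
    next
      case True
      then show ?thesis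
        using I2 a2 dual[OF I2(2) I2(4) I2(6) a2 a2]
          taubar_summand_basis[of i j k2 l m n a a' i' j' k \<alpha>' k' l' m' a'']
        by (auto simp: s tens_def hc_eq)
    qed
  qed
  have "fsum ?f ?S = fsum (\<lambda>s. if s = ?t0 then ?R else 0) ?S" by (rule fsum_cong) (rule eq)
  also have "\<dots> = ?R" by (subst fsum_single) (auto simp: idx7_def)
  finally show ?thesis unfolding taubar_pure_def by simp
qed

definition taubar_entry_sum where
  "taubar_entry_sum v i j l m n a' a = (\<Sum>k\<in>chan i j. \<Sum>\<alpha>'<N i j k. \<Sum>a''<N k l m.
      v (i, j, k, \<alpha>') (k, l, m, a'') * taubar_coef i j k l m n a' a \<alpha>' a'')"

lemma taubar_entry:
  "taubar C I V N eb ed v (i, n, m, a') (j, l, n', a) =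
   (if n' = n \<and> i \<in> I \<and> j \<in> I \<and> l \<in> I \<and> m \<in> I \<and> n \<in> I \<and> a < N j l n \<and> a' < N i n m
    then taubar_entry_sum v i j l m n a' a else 0)" (is "_ = (if ?c then _ else 0)")
proof -
  let ?F = "taubar_pure C I V N eb ed"
  let ?g = "\<lambda>(k, \<alpha>', a''). ((i, j, k, \<alpha>'), (k, l, m, a''))"
  let ?D = "if ?c then SIGMA k:chan i j. {..<N i j k} \<times> {..<N k l m} else {}"
  have fin: "finite (chan i j)" if ?c using chan_finite that by blast
  have "taubar C I V N eb ed v (i, n, m, a') (j, l, n', a) =
      (\<Sum>x\<in>?D. case ?g x of (b, c) \<Rightarrow> v b c * ?F (ev b) (ev c) (i, n, m, a') (j, l, n', a))"
    unfolding taubar_def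
  proof (rule linext_entry)
    show "finite ?D" using fin by auto
    show "inj_on ?g ?D" by (auto simp: inj_on_def)
    fix b c assume nz: "?F (ev b) (ev c) (i, n, m, a') (j, l, n', a) \<noteq> 0"
    obtain i' j' k \<alpha>' k' l' m' a'' where "b = (i', j', k, \<alpha>')" "c = (k', l', m', a'')" by (cases b, cases c) auto
    with nz show "(b, c) \<in> ?g ` ?D"
      by (force simp: taubar_pure_basis chan_def split: if_splits)
  qed
  also have "\<dots> = (if ?c then taubar_entry_sum v i j l m n a' a else 0)"
  proof (cases ?c)
    case True
    have "(\<Sum>x\<in>(SIGMA k:chan i j. {..<N i j k} \<times> {..<N k l m}).
            case ?g x of (b, c) \<Rightarrow> v b c * ?F (ev b) (ev c) (i, n, m, a') (j, l, n', a))
        = (\<Sum>(k, \<alpha>', a'')\<in>(SIGMA k:chan i j. {..<N i j k} \<times> {..<N k l m}).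
            v (i, j, k, \<alpha>') (k, l, m, a'') * taubar_coef i j k l m n a' a \<alpha>' a'')"
      by (rule sum.cong) (use True in \<open>auto simp: taubar_pure_basis chan_def\<close>)
    then show ?thesis using True fin unfolding taubar_entry_sum_def by (simp add: sum3_Sigma)
  next
    case False
    then show ?thesis by (simp only: if_False sum.empty)
  qed
  finally show ?thesis .
qed

section \<open>The inversion relations\<close>

lemma comp_regroup:
  "g \<in> Hm X0 X1 \<Longrightarrow> F \<in> Hm X1 X2 \<Longrightarrow> p \<in> Hm X2 X3 \<Longrightarrow> q \<in> Hm X3 X2' \<Longrightarrow> A \<in> Hm X2' X4 \<Longrightarrow>
   (A \<odot> q) \<odot> ((p \<odot> F) \<odot> g) = (A \<odot> (q \<odot> p)) \<odot> (F \<odot> g)"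
  by (simp add: hom_iff assoc_s)

text \<open>Duality whiskered by an identity, on the right and on the left: the scalars that
  remain after the completeness relation has been applied are Kronecker deltas.\<close>

lemma dual_whisker_r:
  assumes I: "i \<in> I" "j \<in> I" "k \<in> I" "k' \<in> I" "l \<in> I" "m \<in> I"
    and a: "a < N i j k" and b: "b < N k l m" and \<alpha>': "\<alpha>' < N i j k'" and a'': "a'' < N k' l m"
  shows "scal C (V m) (ed k l m b \<odot> ((ed i j k a \<boxtimes> idm (V l)) \<odot>
           ((eb i j k' \<alpha>' \<boxtimes> idm (V l)) \<odot> eb k' l m a'')))
       = (if k' = k \<and> \<alpha>' = a \<and> a'' = b then 1 else 0)"
proof -
  have he: "ed i j k a \<in> Hm (V i \<otimes> V j) (V k)" and hf: "eb i j k' \<alpha>' \<in> Hm (V k') (V i \<otimes> V j)"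
    and hg: "eb k' l m a'' \<in> Hm (V m) (V k' \<otimes> V l)" and hE: "ed k l m b \<in> Hm (V k \<otimes> V l) (V m)"
    using I a b \<alpha>' a'' by blast+
  have regroup: "(ed i j k a \<boxtimes> idm (V l)) \<odot> ((eb i j k' \<alpha>' \<boxtimes> idm (V l)) \<odot> eb k' l m a'')
      = ((ed i j k a \<odot> eb i j k' \<alpha>') \<boxtimes> idm (V l)) \<odot> eb k' l m a''"
    using assoc[OF hg tm_hom[OF hf id_hom] tm_hom[OF he id_hom]] tm_comp_idr[OF he hf] by simp
  show ?thesis
  proof (cases "k' = k \<and> \<alpha>' = a")
    case True
    then have "(ed i j k a \<odot> eb i j k' \<alpha>') \<boxtimes> idm (V l) = idm (V k' \<otimes> V l)"
      using dual_comp[OF I(1-4) a \<alpha>'] by simp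
    then show ?thesis
      using True regroup id_l[OF hg] dual[OF I(3,5,6) b] a'' by (auto simp: eq_commute)
  next
    case False
    then have "((ed i j k a \<odot> eb i j k' \<alpha>') \<boxtimes> idm (V l)) \<odot> eb k' l m a'' = zr (V m) (V k \<otimes> V l)"
      using dual_comp[OF I(1-4) a \<alpha>'] tm_zr_l[of "idm (V l)" "V l" "V l" "V k'" "V k"] comp_zr_l[OF hg]
      by (simp add: if_not_P[OF False])
    then show ?thesis
      using False regroup comp_zr_r[OF hE] scal_zr[OF simple[OF I(6)]] by auto
  qed
qed

lemma dual_whisker_l:
  assumes I: "i \<in> I" "j \<in> I" "l \<in> I" "m \<in> I" "n \<in> I" "n2 \<in> I"
    and a: "a < N j l n" and a': "a' < N i n m" and \<beta>: "\<beta> < N j l n2" and \<gamma>: "\<gamma> < N i n2 m"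
  shows "scal C (V m) (ed i n m a' \<odot> ((idm (V i) \<boxtimes> ed j l n a) \<odot>
           ((idm (V i) \<boxtimes> eb j l n2 \<beta>) \<odot> eb i n2 m \<gamma>)))
       = (if n2 = n \<and> \<beta> = a \<and> \<gamma> = a' then 1 else 0)"
proof -
  have he: "ed j l n a \<in> Hm (V j \<otimes> V l) (V n)" and hf: "eb j l n2 \<beta> \<in> Hm (V n2) (V j \<otimes> V l)"
    and hg: "eb i n2 m \<gamma> \<in> Hm (V m) (V i \<otimes> V n2)" and hE: "ed i n m a' \<in> Hm (V i \<otimes> V n) (V m)"
    using I a a' \<beta> \<gamma> by blast+
  have regroup: "(idm (V i) \<boxtimes> ed j l n a) \<odot> ((idm (V i) \<boxtimes> eb j l n2 \<beta>) \<odot> eb i n2 m \<gamma>)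
      = (idm (V i) \<boxtimes> (ed j l n a \<odot> eb j l n2 \<beta>)) \<odot> eb i n2 m \<gamma>"
    using assoc[OF hg tm_hom[OF id_hom hf] tm_hom[OF id_hom he]] tm_comp_idl[OF he hf] by simp
  show ?thesis
  proof (cases "n2 = n \<and> \<beta> = a")
    case True
    then have "idm (V i) \<boxtimes> (ed j l n a \<odot> eb j l n2 \<beta>) = idm (V i \<otimes> V n2)"
      using dual_comp[OF I(2,3,5,6) a \<beta>] by simp
    then show ?thesis
      using True regroup id_l[OF hg] dual[OF I(1,5,4) a'] \<gamma> by (auto simp: eq_commute)
  next
    case False
    then have "(idm (V i) \<boxtimes> (ed j l n a \<odot> eb j l n2 \<beta>)) \<odot> eb i n2 m \<gamma> = zr (V m) (V i \<otimes> V n)"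
      using dual_comp[OF I(2,3,5,6) a \<beta>] tm_zr_r[of "idm (V i)" "V i" "V i" "V n2" "V n"] comp_zr_l[OF hg]
      by (simp add: if_not_P[OF False])
    then show ?thesis
      using False regroup comp_zr_r[OF hE] scal_zr[OF simple[OF I(4)]] by auto
  qed
qed

text \<open>The innermost sum of \<open>\<tau>_{21} \<bar>\<tau>\<close>, over the basis of \<open>H^{in}_m\<close>, is collapsed by
  fact (a); what remains is a functional of the resolution \<open>e^{jl}_{n \<beta>} e^{n \<beta>}_{jl}\<close>.\<close>

lemma tau_taubar_inner:
  assumes I: "i \<in> I" "j \<in> I" "k \<in> I" "k' \<in> I" "l \<in> I" "m \<in> I" "n \<in> I"
    and a: "a < N i j k" and b: "b < N k l m" and \<alpha>': "\<alpha>' < N i j k'" and a'': "a'' < N k' l m"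
    and \<beta>: "\<beta> < N j l n"
  shows "(\<Sum>\<gamma><N i n m. taubar_coef i j k' l m n \<gamma> \<beta> \<alpha>' a'' * tau_coef i j k l m n b a \<beta> \<gamma>)
       = scal C (V m) (ed k l m b \<odot> (((ed i j k a \<boxtimes> idm (V l)) \<odot> (idm (V i) \<boxtimes> (eb j l n \<beta> \<odot> ed j l n \<beta>)))
           \<odot> ((eb i j k' \<alpha>' \<boxtimes> idm (V l)) \<odot> eb k' l m a'')))"
proof -
  define E where "E = ed k l m b"
  define A where "A = ed i j k a \<boxtimes> idm (V l)"
  define F where "F = eb i j k' \<alpha>' \<boxtimes> idm (V l)"
  define g where "g = eb k' l m a''"
  have hE: "E \<in> Hm (V k \<otimes> V l) (V m)" unfolding E_def using I b by blast
  have hA: "A \<in> Hm (V i \<otimes> V j \<otimes> V l) (V k \<otimes> V l)" unfolding A_def using I a tm_hom[OF ed_hom id_hom] by simp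
  have hF: "F \<in> Hm (V k' \<otimes> V l) (V i \<otimes> V j \<otimes> V l)" unfolding F_def using I \<alpha>' tm_hom[OF eb_hom id_hom] by simp
  have hg: "g \<in> Hm (V m) (V k' \<otimes> V l)" unfolding g_def using I a'' by blast
  have he: "eb j l n \<beta> \<in> Hm (V n) (V j \<otimes> V l)" and he': "ed j l n \<beta> \<in> Hm (V j \<otimes> V l) (V n)"
    using I \<beta> by blast+
  have hp: "idm (V i) \<boxtimes> ed j l n \<beta> \<in> Hm (V i \<otimes> V j \<otimes> V l) (V i \<otimes> V n)"
    and hq: "idm (V i) \<boxtimes> eb j l n \<beta> \<in> Hm (V i \<otimes> V n) (V i \<otimes> V j \<otimes> V l)"
    using tm_hom[OF id_hom he'] tm_hom[OF id_hom he] by simp_all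
  define Y where "Y = ((idm (V i) \<boxtimes> ed j l n \<beta>) \<odot> F) \<odot> g"
  define G where "G = (\<lambda>w. scal C (V m) (E \<odot> ((A \<odot> (idm (V i) \<boxtimes> eb j l n \<beta>)) \<odot> w)))"
  have hY: "Y \<in> Hm (V m) (V i \<otimes> V n)" unfolding Y_def using hp hF hg by blast
  have lG: "linfun (V m) (V i \<otimes> V n) G"
    unfolding G_def by (rule scal_linfun_V[where m=m], (rule lm_rules)+)
      (use I \<beta> a b hE hA hq in \<open>auto simp: hom_iff\<close>)
  have "(\<Sum>\<gamma><N i n m. taubar_coef i j k' l m n \<gamma> \<beta> \<alpha>' a'' * tau_coef i j k l m n b a \<beta> \<gamma>)
      = (\<Sum>\<gamma><N i n m. scal C (V m) (ed i n m \<gamma> \<odot> Y) * G (eb i n m \<gamma>))"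
    by (rule sum.cong) (simp_all add: taubar_coef_def tau_coef_def Y_def G_def E_def A_def F_def g_def)
  also have "\<dots> = G Y" by (rule exp_up[OF I(1) I(7) I(6) hY lG])
  also have "\<dots> = scal C (V m) (E \<odot> ((A \<odot> (idm (V i) \<boxtimes> (eb j l n \<beta> \<odot> ed j l n \<beta>))) \<odot> (F \<odot> g)))"
    unfolding G_def Y_def tm_comp_idl[OF he he'] using comp_regroup[OF hg hF hp hq hA] by simp
  finally show ?thesis unfolding E_def A_def F_def g_def .
qed

text \<open>The contraction underlying \<open>\<tau>_{21} \<bar>\<tau> = \<pi>^\<bullet>\<close>: after the inner sum, the channel
  sum over \<open>V_j \<otimes> V_l\<close> is collapsed by fact (b).\<close>

lemma tau_taubar_contract:
  assumes I: "i \<in> I" "j \<in> I" "k \<in> I" "k' \<in> I" "l \<in> I" "m \<in> I"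
    and a: "a < N i j k" and b: "b < N k l m" and \<alpha>': "\<alpha>' < N i j k'" and a'': "a'' < N k' l m"
  shows "(\<Sum>n\<in>chan j l. \<Sum>\<beta><N j l n. \<Sum>\<gamma><N i n m.
            taubar_coef i j k' l m n \<gamma> \<beta> \<alpha>' a'' * tau_coef i j k l m n b a \<beta> \<gamma>)
       = (if gg C I V j l \<and> k' = k \<and> \<alpha>' = a \<and> a'' = b then 1 else 0)"
proof -
  define H where "H = (\<lambda>w. scal C (V m) (ed k l m b \<odot> (((ed i j k a \<boxtimes> idm (V l)) \<odot> (idm (V i) \<boxtimes> w))
           \<odot> ((eb i j k' \<alpha>' \<boxtimes> idm (V l)) \<odot> eb k' l m a''))))"
  have hA: "ed i j k a \<boxtimes> idm (V l) \<in> Hm (V i \<otimes> V j \<otimes> V l) (V k \<otimes> V l)"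
    using I a tm_hom[OF ed_hom id_hom] by simp
  have lH: "linfun (V j \<otimes> V l) (V j \<otimes> V l) H"
    unfolding H_def by (rule scal_linfun_V[where m=m], (rule lm_rules)+)
      (use I a b \<alpha>' a'' in \<open>auto simp: hom_iff\<close>)
  have Hid: "H (idm (V j \<otimes> V l)) = (if k' = k \<and> \<alpha>' = a \<and> a'' = b then 1 else 0)"
    unfolding H_def using id_r[OF hA] tm_id[of "V i" "V j \<otimes> V l"] dual_whisker_r[OF I a b \<alpha>' a''] by simp
  have "(\<Sum>n\<in>chan j l. \<Sum>\<beta><N j l n. \<Sum>\<gamma><N i n m.
            taubar_coef i j k' l m n \<gamma> \<beta> \<alpha>' a'' * tau_coef i j k l m n b a \<beta> \<gamma>)
      = (\<Sum>n\<in>chan j l. \<Sum>\<beta><N j l n. H (eb j l n \<beta> \<odot> ed j l n \<beta>))"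
    unfolding H_def by (intro sum.cong refl) (simp add: tau_taubar_inner I a b \<alpha>' a'' chan_I)
  also have "\<dots> = (if gg C I V j l then H (idm (V j \<otimes> V l)) else 0)"
    by (rule completeness[OF I(2) I(5) lH])
  finally show ?thesis using Hid by auto
qed

text \<open>The innermost sum of \<open>\<bar>\<tau> \<tau>_{21}\<close>, over the basis of \<open>H^{kl}_m\<close>, collapsed by
  fact (a).\<close>

lemma taubar_tau_inner:
  assumes I: "i \<in> I" "j \<in> I" "l \<in> I" "m \<in> I" "n \<in> I" "n2 \<in> I" "k \<in> I"
    and a: "a < N j l n" and a': "a' < N i n m" and \<beta>: "\<beta> < N j l n2" and \<gamma>: "\<gamma> < N i n2 m"
    and \<alpha>': "\<alpha>' < N i j k"
  shows "(\<Sum>a''<N k l m. tau_coef i j k l m n2 a'' \<alpha>' \<beta> \<gamma> * taubar_coef i j k l m n a' a \<alpha>' a'')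
       = scal C (V m) (ed i n m a' \<odot> (((idm (V i) \<boxtimes> ed j l n a) \<odot> ((eb i j k \<alpha>' \<odot> ed i j k \<alpha>') \<boxtimes> idm (V l)))
           \<odot> ((idm (V i) \<boxtimes> eb j l n2 \<beta>) \<odot> eb i n2 m \<gamma>)))"
proof -
  define E where "E = ed i n m a'"
  define P where "P = idm (V i) \<boxtimes> ed j l n a"
  define Q where "Q = idm (V i) \<boxtimes> eb j l n2 \<beta>"
  define R where "R = eb i n2 m \<gamma>"
  have hE: "E \<in> Hm (V i \<otimes> V n) (V m)" unfolding E_def using I a' by blast
  have hP: "P \<in> Hm (V i \<otimes> V j \<otimes> V l) (V i \<otimes> V n)" unfolding P_def using I a tm_hom[OF id_hom ed_hom] by simp
  have hQ: "Q \<in> Hm (V i \<otimes> V n2) (V i \<otimes> V j \<otimes> V l)" unfolding Q_def using I \<beta> tm_hom[OF id_hom eb_hom] by simp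
  have hR: "R \<in> Hm (V m) (V i \<otimes> V n2)" unfolding R_def using I \<gamma> by blast
  have he: "eb i j k \<alpha>' \<in> Hm (V k) (V i \<otimes> V j)" and he': "ed i j k \<alpha>' \<in> Hm (V i \<otimes> V j) (V k)"
    using I \<alpha>' by blast+
  have hp: "ed i j k \<alpha>' \<boxtimes> idm (V l) \<in> Hm (V i \<otimes> V j \<otimes> V l) (V k \<otimes> V l)"
    and hq: "eb i j k \<alpha>' \<boxtimes> idm (V l) \<in> Hm (V k \<otimes> V l) (V i \<otimes> V j \<otimes> V l)"
    using tm_hom[OF he' id_hom] tm_hom[OF he id_hom] by simp_all
  define Z where "Z = ((ed i j k \<alpha>' \<boxtimes> idm (V l)) \<odot> Q) \<odot> R"
  define G where "G = (\<lambda>w. scal C (V m) (E \<odot> ((P \<odot> (eb i j k \<alpha>' \<boxtimes> idm (V l))) \<odot> w)))"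
  have hZ: "Z \<in> Hm (V m) (V k \<otimes> V l)" unfolding Z_def using hp hQ hR by blast
  have lG: "linfun (V m) (V k \<otimes> V l) G"
    unfolding G_def by (rule scal_linfun_V[where m=m], (rule lm_rules)+)
      (use I \<alpha>' hE hP hq in \<open>auto simp: hom_iff\<close>)
  have "(\<Sum>a''<N k l m. tau_coef i j k l m n2 a'' \<alpha>' \<beta> \<gamma> * taubar_coef i j k l m n a' a \<alpha>' a'')
      = (\<Sum>a''<N k l m. scal C (V m) (ed k l m a'' \<odot> Z) * G (eb k l m a''))"
    by (rule sum.cong) (simp_all add: taubar_coef_def tau_coef_def Z_def G_def E_def P_def Q_def R_def)
  also have "\<dots> = G Z" by (rule exp_up[OF I(7) I(3) I(4) hZ lG])
  also have "\<dots> = scal C (V m) (E \<odot> ((P \<odot> ((eb i j k \<alpha>' \<odot> ed i j k \<alpha>') \<boxtimes> idm (V l))) \<odot> (Q \<odot> R)))"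
    unfolding G_def Z_def tm_comp_idr[OF he he'] using comp_regroup[OF hR hQ hp hq hP] by simp
  finally show ?thesis unfolding E_def P_def Q_def R_def .
qed

text \<open>The contraction underlying \<open>\<bar>\<tau> \<tau>_{21} = {}^\<bullet>\<pi>\<close>.\<close>

lemma taubar_tau_contract:
  assumes I: "i \<in> I" "j \<in> I" "l \<in> I" "m \<in> I" "n \<in> I" "n2 \<in> I"
    and a: "a < N j l n" and a': "a' < N i n m" and \<beta>: "\<beta> < N j l n2" and \<gamma>: "\<gamma> < N i n2 m"
  shows "(\<Sum>k\<in>chan i j. \<Sum>\<alpha>'<N i j k. \<Sum>a''<N k l m.
            tau_coef i j k l m n2 a'' \<alpha>' \<beta> \<gamma> * taubar_coef i j k l m n a' a \<alpha>' a'')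
       = (if gg C I V i j \<and> n2 = n \<and> \<beta> = a \<and> \<gamma> = a' then 1 else 0)"
proof -
  define H where "H = (\<lambda>w. scal C (V m) (ed i n m a' \<odot> (((idm (V i) \<boxtimes> ed j l n a) \<odot> (w \<boxtimes> idm (V l)))
           \<odot> ((idm (V i) \<boxtimes> eb j l n2 \<beta>) \<odot> eb i n2 m \<gamma>))))"
  have hP: "idm (V i) \<boxtimes> ed j l n a \<in> Hm (V i \<otimes> V j \<otimes> V l) (V i \<otimes> V n)"
    using I a tm_hom[OF id_hom ed_hom] by simp
  have lH: "linfun (V i \<otimes> V j) (V i \<otimes> V j) H"
    unfolding H_def by (rule scal_linfun_V[where m=m], (rule lm_rules)+)
      (use I a a' \<beta> \<gamma> in \<open>auto simp: hom_iff\<close>)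
  have Hid: "H (idm (V i \<otimes> V j)) = (if n2 = n \<and> \<beta> = a \<and> \<gamma> = a' then 1 else 0)"
    unfolding H_def using id_r[OF hP] tm_id[of "V i \<otimes> V j" "V l"] dual_whisker_l[OF I a a' \<beta> \<gamma>] by simp
  have "(\<Sum>k\<in>chan i j. \<Sum>\<alpha>'<N i j k. \<Sum>a''<N k l m.
            tau_coef i j k l m n2 a'' \<alpha>' \<beta> \<gamma> * taubar_coef i j k l m n a' a \<alpha>' a'')
      = (\<Sum>k\<in>chan i j. \<Sum>\<alpha>'<N i j k. H (eb i j k \<alpha>' \<odot> ed i j k \<alpha>'))"
    unfolding H_def by (intro sum.cong refl) (simp add: taubar_tau_inner I a a' \<beta> \<gamma> chan_I)
  also have "\<dots> = (if gg C I V i j then H (idm (V i \<otimes> V j)) else 0)"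
    by (rule completeness[OF I(1) I(2) lH])
  finally show ?thesis using Hid by auto
qed

lemma tau_entry_of_taubar:
  assumes I: "i \<in> I" "j \<in> I" "k \<in> I" "l \<in> I" "m \<in> I" and a: "a < N i j k" and b: "b < N k l m"
  shows "tau_entry_sum (\<lambda>x y. taubar C I V N eb ed v y x) i j k l m b a
       = (if gg C I V j l then v (i, j, k, a) (k, l, m, b) else 0)"
proof -
  have fin: "finite (chan j l)" "finite (chan i j)" using chan_finite I by auto
  let ?w = "\<lambda>k' \<alpha>' a''. v (i, j, k', \<alpha>') (k', l, m, a'')"
  have "tau_entry_sum (\<lambda>x y. taubar C I V N eb ed v y x) i j k l m b a
      = (\<Sum>n\<in>chan j l. \<Sum>\<beta><N j l n. \<Sum>\<gamma><N i n m.
          taubar_entry_sum v i j l m n \<gamma> \<beta> * tau_coef i j k l m n b a \<beta> \<gamma>)"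
    unfolding tau_entry_sum_def by (intro sum.cong refl) (simp add: taubar_entry I chan_I)
  also have "\<dots> = (\<Sum>n\<in>chan j l. \<Sum>\<beta><N j l n. \<Sum>\<gamma><N i n m. \<Sum>k'\<in>chan i j. \<Sum>\<alpha>'<N i j k'. \<Sum>a''<N k' l m.
          ?w k' \<alpha>' a'' * (taubar_coef i j k' l m n \<gamma> \<beta> \<alpha>' a'' * tau_coef i j k l m n b a \<beta> \<gamma>))"
    unfolding taubar_entry_sum_def by (simp add: sum_distrib_right mult.assoc)
  also have "\<dots> = (\<Sum>k'\<in>chan i j. \<Sum>\<alpha>'<N i j k'. \<Sum>a''<N k' l m. \<Sum>n\<in>chan j l. \<Sum>\<beta><N j l n. \<Sum>\<gamma><N i n m.
          ?w k' \<alpha>' a'' * (taubar_coef i j k' l m n \<gamma> \<beta> \<alpha>' a'' * tau_coef i j k l m n b a \<beta> \<gamma>))"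
    by (rule sum3_swap) (use fin in auto)
  also have "\<dots> = (\<Sum>k'\<in>chan i j. \<Sum>\<alpha>'<N i j k'. \<Sum>a''<N k' l m.
          ?w k' \<alpha>' a'' * (if gg C I V j l \<and> k' = k \<and> \<alpha>' = a \<and> a'' = b then 1 else 0))"
    by (intro sum.cong refl) (simp add: sum_distrib_left[symmetric] tau_taubar_contract I a b chan_I)
  also have "\<dots> = (\<Sum>k'\<in>chan i j. \<Sum>\<alpha>'<N i j k'. \<Sum>a''<N k' l m.
          if k' = k \<and> \<alpha>' = a \<and> a'' = b then (if gg C I V j l then ?w k' \<alpha>' a'' else 0) else 0)"
    by (intro sum.cong refl) auto
  also have "\<dots> = (if gg C I V j l then v (i, j, k, a) (k, l, m, b) else 0)"
    by (subst sum3_delta) (use fin I a b in \<open>auto simp: chan_def\<close>)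
  finally show ?thesis .
qed

lemma taubar_entry_of_tau:
  assumes I: "i \<in> I" "j \<in> I" "l \<in> I" "m \<in> I" "n \<in> I" and a: "a < N j l n" and a': "a' < N i n m"
  shows "taubar_entry_sum (op21 (tau C I V N eb ed) v) i j l m n a' a
       = (if gg C I V i j then v (i, n, m, a') (j, l, n, a) else 0)"
proof -
  have fin: "finite (chan j l)" "finite (chan i j)" using chan_finite I by auto
  let ?w = "\<lambda>n2 \<beta> \<gamma>. v (i, n2, m, \<gamma>) (j, l, n2, \<beta>)"
  have "taubar_entry_sum (op21 (tau C I V N eb ed) v) i j l m n a' a
      = (\<Sum>k\<in>chan i j. \<Sum>\<alpha>'<N i j k. \<Sum>a''<N k l m.
          tau_entry_sum (\<lambda>b c. v c b) i j k l m a'' \<alpha>' * taubar_coef i j k l m n a' a \<alpha>' a'')"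
    unfolding taubar_entry_sum_def by (intro sum.cong refl) (simp add: op21_def tau_entry I chan_I)
  also have "\<dots> = (\<Sum>k\<in>chan i j. \<Sum>\<alpha>'<N i j k. \<Sum>a''<N k l m. \<Sum>n2\<in>chan j l. \<Sum>\<beta><N j l n2. \<Sum>\<gamma><N i n2 m.
          ?w n2 \<beta> \<gamma> * (tau_coef i j k l m n2 a'' \<alpha>' \<beta> \<gamma> * taubar_coef i j k l m n a' a \<alpha>' a''))"
    unfolding tau_entry_sum_def by (simp add: sum_distrib_right mult.assoc)
  also have "\<dots> = (\<Sum>n2\<in>chan j l. \<Sum>\<beta><N j l n2. \<Sum>\<gamma><N i n2 m. \<Sum>k\<in>chan i j. \<Sum>\<alpha>'<N i j k. \<Sum>a''<N k l m.
          ?w n2 \<beta> \<gamma> * (tau_coef i j k l m n2 a'' \<alpha>' \<beta> \<gamma> * taubar_coef i j k l m n a' a \<alpha>' a''))"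
    by (rule sum3_swap) (use fin in auto)
  also have "\<dots> = (\<Sum>n2\<in>chan j l. \<Sum>\<beta><N j l n2. \<Sum>\<gamma><N i n2 m.
          ?w n2 \<beta> \<gamma> * (if gg C I V i j \<and> n2 = n \<and> \<beta> = a \<and> \<gamma> = a' then 1 else 0))"
    by (intro sum.cong refl) (simp add: sum_distrib_left[symmetric] taubar_tau_contract I a a' chan_I)
  also have "\<dots> = (\<Sum>n2\<in>chan j l. \<Sum>\<beta><N j l n2. \<Sum>\<gamma><N i n2 m.
          if n2 = n \<and> \<beta> = a \<and> \<gamma> = a' then (if gg C I V i j then ?w n2 \<beta> \<gamma> else 0) else 0)"
    by (intro sum.cong refl) auto
  also have "\<dots> = (if gg C I V i j then v (i, n, m, a') (j, l, n, a) else 0)"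
    by (subst sum3_delta) (use fin I a a' in \<open>auto simp: chan_def\<close>)
  finally show ?thesis .
qed

theorem inversion_right:
  "op21 (tau C I V N eb ed) (taubar C I V N eb ed v) = rpi C I V N v"
proof (intro ext)
  fix p q :: "'i \<times> 'i \<times> 'i \<times> nat"
  obtain i j k a where p: "p = (i, j, k, a)" by (cases p) auto
  obtain k' l m b where q: "q = (k', l, m, b)" by (cases q) auto
  show "op21 (tau C I V N eb ed) (taubar C I V N eb ed v) p q = rpi C I V N v p q"
  proof (cases "k' = k \<and> i \<in> I \<and> j \<in> I \<and> k \<in> I \<and> l \<in> I \<and> m \<in> I \<and> a < N i j k \<and> b < N k l m")
    case True
    then show ?thesis
      unfolding p q op21_def tau_entry rpi_def using tau_entry_of_taubar[of i j k l m a b v]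
      by (auto simp: bidx_def)
  next
    case False
    then show ?thesis unfolding p q op21_def tau_entry rpi_def by (auto simp: bidx_def)
  qed
qed

theorem inversion_left:
  "taubar C I V N eb ed (op21 (tau C I V N eb ed) v) = lpi C I V N v"
proof (intro ext)
  fix p q :: "'i \<times> 'i \<times> 'i \<times> nat"
  obtain i n m a' where p: "p = (i, n, m, a')" by (cases p) auto
  obtain j l n' a where q: "q = (j, l, n', a)" by (cases q) auto
  show "taubar C I V N eb ed (op21 (tau C I V N eb ed) v) p q = lpi C I V N v p q"
  proof (cases "n' = n \<and> i \<in> I \<and> j \<in> I \<and> l \<in> I \<and> m \<in> I \<and> n \<in> I \<and> a < N j l n \<and> a' < N i n m")
    case True
    then show ?thesis
      unfolding p q taubar_entry lpi_def using taubar_entry_of_tau[of i j l m n a a' v]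
      by (auto simp: bidx_def)
  next
    case False
    then show ?thesis unfolding p q taubar_entry lpi_def by (auto simp: bidx_def)
  qed
qed

end

section \<open>The pentagon identity\<close>

context smab_cat
begin

text \<open>The first isolates
  the composite \<open>e \<circ> e'\<close> in the middle of a long composite, so that completeness can be
  applied to it; the second rearranges the result once \<open>e \<circ> e'\<close> has become an identity.\<close>

lemma isolate_middle:
  assumes hu: "u \<in> Hm (P \<otimes> A) H" and ht: "t \<in> Hm (F \<otimes> D) P"
    and he: "e \<in> Hm M (D \<otimes> A)" and he': "e' \<in> Hm (D \<otimes> A) M"
    and hs: "s \<in> Hm Y (A \<otimes> B)" and hr: "r \<in> Hm W (D \<otimes> Y)" and hq: "q \<in> Hm G (F \<otimes> W)"
  shows "(((u \<odot> ((t \<boxtimes> idm A) \<odot> (idm F \<boxtimes> e))) \<boxtimes> idm B) \<odot> (idm F \<boxtimes> (((e' \<boxtimes> idm B) \<odot> (idm D \<boxtimes> s)) \<odot> r))) \<odot> q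
       = (((u \<odot> (t \<boxtimes> idm A)) \<boxtimes> idm B) \<odot> (idm F \<boxtimes> ((e \<odot> e') \<boxtimes> idm B))) \<odot> ((idm F \<boxtimes> ((idm D \<boxtimes> s) \<odot> r)) \<odot> q)"
proof -
  have d: "cDom C u = P \<otimes> A" "cCod C u = H" "cDom C t = F \<otimes> D" "cCod C t = P"
    "cDom C e = M" "cCod C e = D \<otimes> A" "cDom C e' = D \<otimes> A" "cCod C e' = M"
    "cDom C s = Y" "cCod C s = A \<otimes> B" "cDom C r = W" "cCod C r = D \<otimes> Y"
    "cDom C q = G" "cCod C q = F \<otimes> W"
    using assms by (auto simp: hom_iff)
  let ?K = "u \<odot> (t \<boxtimes> idm A)"
  let ?Z = "(idm D \<boxtimes> s) \<odot> r"
  have x3: "u \<odot> ((t \<boxtimes> idm A) \<odot> (idm F \<boxtimes> e)) = ?K \<odot> (idm F \<boxtimes> e)"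
    using assoc_s[symmetric] d by simp
  have kA: "?K \<in> Hm (F \<otimes> D \<otimes> A) H" using d by (simp add: hom_iff)
  have eA: "idm F \<boxtimes> e \<in> Hm (F \<otimes> M) (F \<otimes> D \<otimes> A)" using d by (simp add: hom_iff)
  have q1: "(?K \<odot> (idm F \<boxtimes> e)) \<boxtimes> idm B = (?K \<boxtimes> idm B) \<odot> (idm F \<boxtimes> (e \<boxtimes> idm B))"
    using tm_comp_idr[OF kA eA, of B] by simp
  have y1: "((e' \<boxtimes> idm B) \<odot> (idm D \<boxtimes> s)) \<odot> r = (e' \<boxtimes> idm B) \<odot> ?Z"
    using assoc_s d by simp
  have zA: "?Z \<in> Hm W (D \<otimes> A \<otimes> B)" using d by (simp add: hom_iff)
  have e'A: "e' \<boxtimes> idm B \<in> Hm (D \<otimes> A \<otimes> B) (M \<otimes> B)" using d by (simp add: hom_iff)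
  have q2: "idm F \<boxtimes> ((e' \<boxtimes> idm B) \<odot> ?Z) = (idm F \<boxtimes> (e' \<boxtimes> idm B)) \<odot> (idm F \<boxtimes> ?Z)"
    using tm_comp_idl[OF e'A zA] .
  have eBA: "e \<boxtimes> idm B \<in> Hm (M \<otimes> B) (D \<otimes> A \<otimes> B)" using d by (simp add: hom_iff)
  have q3: "(idm F \<boxtimes> (e \<boxtimes> idm B)) \<odot> (idm F \<boxtimes> (e' \<boxtimes> idm B)) = idm F \<boxtimes> ((e \<odot> e') \<boxtimes> idm B)"
    using tm_comp_idl[OF eBA e'A, of F] tm_comp_idr[OF he he', of B] by simp
  show ?thesis
    unfolding x3 q1 y1 q2 q3[symmetric]
    using d by (simp add: assoc_s)
qed

lemma merge_middle:
  assumes hu: "u \<in> Hm (P \<otimes> A) H" and ht: "t \<in> Hm (F \<otimes> D) P"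
    and hs: "s \<in> Hm Y (A \<otimes> B)" and hr: "r \<in> Hm W (D \<otimes> Y)" and hq: "q \<in> Hm G (F \<otimes> W)"
  shows "(((u \<odot> (t \<boxtimes> idm A)) \<boxtimes> idm B) \<odot> (idm F \<boxtimes> (idm (D \<otimes> A) \<boxtimes> idm B))) \<odot> ((idm F \<boxtimes> ((idm D \<boxtimes> s) \<odot> r)) \<odot> q)
       = ((u \<boxtimes> idm B) \<odot> (idm P \<boxtimes> s)) \<odot> (((t \<boxtimes> idm Y) \<odot> (idm F \<boxtimes> r)) \<odot> q)"
proof -
  have d: "cDom C u = P \<otimes> A" "cCod C u = H" "cDom C t = F \<otimes> D" "cCod C t = P"
    "cDom C s = Y" "cCod C s = A \<otimes> B" "cDom C r = W" "cCod C r = D \<otimes> Y"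
    "cDom C q = G" "cCod C q = F \<otimes> W"
    using assms by (auto simp: hom_iff)
  have i1: "idm F \<boxtimes> (idm (D \<otimes> A) \<boxtimes> idm B) = idm (F \<otimes> D \<otimes> A \<otimes> B)" by simp
  have kA: "(u \<odot> (t \<boxtimes> idm A)) \<boxtimes> idm B \<in> Hm (F \<otimes> D \<otimes> A \<otimes> B) (H \<otimes> B)"
    using d by (simp add: hom_iff)
  have k1: "(u \<odot> (t \<boxtimes> idm A)) \<boxtimes> idm B = (u \<boxtimes> idm B) \<odot> (t \<boxtimes> idm (A \<otimes> B))"
    using tm_comp_idr[OF hu tm_hom[OF ht id_hom[of A]], of B] by simp
  have ii: "idm (F \<otimes> D) \<boxtimes> s = idm F \<boxtimes> (idm D \<boxtimes> s)"
    using tm_assoc[of "idm F" "idm D" s] tm_id[of F D] by simp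
  have z1: "idm F \<boxtimes> ((idm D \<boxtimes> s) \<odot> r) = (idm (F \<otimes> D) \<boxtimes> s) \<odot> (idm F \<boxtimes> r)"
    using tm_comp_idl[OF tm_hom[OF id_hom[of D] hs] hr, of F] ii by simp
  have x: "(t \<boxtimes> idm (A \<otimes> B)) \<odot> (idm (F \<otimes> D) \<boxtimes> s) = (idm P \<boxtimes> s) \<odot> (t \<boxtimes> idm Y)"
  proof -
    have "(t \<boxtimes> idm (A \<otimes> B)) \<odot> (idm (F \<otimes> D) \<boxtimes> s) = (t \<odot> idm (F \<otimes> D)) \<boxtimes> (idm (A \<otimes> B) \<odot> s)"
      using interchange[OF id_hom ht hs id_hom] by simp
    also have "\<dots> = (idm P \<odot> t) \<boxtimes> (s \<odot> idm Y)" using id_l[OF ht] id_r[OF ht] id_l[OF hs] id_r[OF hs] by simp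
    also have "\<dots> = (idm P \<boxtimes> s) \<odot> (t \<boxtimes> idm Y)"
      using interchange[OF ht id_hom id_hom hs] by simp
    finally show ?thesis .
  qed
  have x': "(t \<boxtimes> idm (A \<otimes> B)) \<odot> ((idm (F \<otimes> D) \<boxtimes> s) \<odot> X) = (idm P \<boxtimes> s) \<odot> ((t \<boxtimes> idm Y) \<odot> X)"
    if "cCod C X = F \<otimes> D \<otimes> Y" for X
    using that x d by (metis (no_types, lifting) assoc_s cod_tm cod_id dom_tm dom_id tob_assoc)
  show ?thesis
    unfolding i1 k1 z1
    using d by (simp add: assoc_s x' id_l_s id_r_s)
qed

end

context psi_bases
begin

lemma op12_tau:
  "i \<in> I \<Longrightarrow> j \<in> I \<Longrightarrow> k \<in> I \<Longrightarrow> l \<in> I \<Longrightarrow> m \<in> I \<Longrightarrow> \<alpha> < N i j k \<Longrightarrow> a < N k l m \<Longrightarrow>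
   op12 (tau C I V N eb ed) w (k, l, m, a) (i, j, k, \<alpha>) r = tau_entry_sum (\<lambda>x y. w x y r) i j k l m a \<alpha>"
  by (simp add: op12_def tau_entry)

lemma op13_tau:
  "i \<in> I \<Longrightarrow> j \<in> I \<Longrightarrow> k \<in> I \<Longrightarrow> l \<in> I \<Longrightarrow> m \<in> I \<Longrightarrow> \<alpha> < N i j k \<Longrightarrow> a < N k l m \<Longrightarrow>
   op13 (tau C I V N eb ed) w (k, l, m, a) q (i, j, k, \<alpha>) = tau_entry_sum (\<lambda>x y. w x q y) i j k l m a \<alpha>"
  by (simp add: op13_def tau_entry)

lemma op23_tau:
  "i \<in> I \<Longrightarrow> j \<in> I \<Longrightarrow> k \<in> I \<Longrightarrow> l \<in> I \<Longrightarrow> m \<in> I \<Longrightarrow> \<alpha> < N i j k \<Longrightarrow> a < N k l m \<Longrightarrow>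
   op23 (tau C I V N eb ed) w r (k, l, m, a) (i, j, k, \<alpha>) = tau_entry_sum (\<lambda>x y. w r x y) i j k l m a \<alpha>"
  by (simp add: op23_def tau_entry)

text \<open>The entry \<open>((h,b,g,\<delta>1),(p,a,h,\<delta>2),(f,d,p,\<delta>3))\<close> of the two sides of the pentagon,
  written out in structure scalars.\<close>

definition pent_lhs where
  "pent_lhs v f d p a h b g \<delta>1 \<delta>2 \<delta>3 = (\<Sum>n\<in>chan d a. \<Sum>\<beta><N d a n. \<Sum>\<gamma><N f n h.
     (\<Sum>n1\<in>chan n b. \<Sum>\<beta>1<N n b n1. \<Sum>\<gamma>1<N f n1 g.
       (\<Sum>n2\<in>chan a b. \<Sum>\<beta>2<N a b n2. \<Sum>\<gamma>2<N d n2 n1.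
          v (a, b, n2, \<beta>2) (d, n2, n1, \<gamma>2) (f, n1, g, \<gamma>1) * tau_coef d a n b n1 n2 \<beta>1 \<beta> \<beta>2 \<gamma>2)
       * tau_coef f n h b g n1 \<delta>1 \<gamma> \<beta>1 \<gamma>1) * tau_coef f d p a h n \<delta>2 \<delta>3 \<beta> \<gamma>)"

definition pent_rhs where
  "pent_rhs v f d p a h b g \<delta>1 \<delta>2 \<delta>3 = (\<Sum>n2\<in>chan a b. \<Sum>\<beta>2<N a b n2. \<Sum>\<gamma><N p n2 g.
     (\<Sum>n1\<in>chan d n2. \<Sum>\<gamma>2<N d n2 n1. \<Sum>\<gamma>1<N f n1 g.
        (if gg C I V d a then v (a, b, n2, \<beta>2) (d, n2, n1, \<gamma>2) (f, n1, g, \<gamma>1) else 0)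
        * tau_coef f d p n2 g n1 \<gamma> \<delta>3 \<gamma>2 \<gamma>1) * tau_coef p a h b g n2 \<delta>1 \<delta>2 \<beta>2 \<gamma>)"

context
  fixes f d p a h b g :: 'i and \<delta>1 \<delta>2 \<delta>3 :: nat
    and v :: "'i \<times> 'i \<times> 'i \<times> nat \<Rightarrow> 'i \<times> 'i \<times> 'i \<times> nat \<Rightarrow> 'i \<times> 'i \<times> 'i \<times> nat \<Rightarrow> 'k"
  assumes Ig: "f \<in> I" "d \<in> I" "p \<in> I" "a \<in> I" "h \<in> I" "b \<in> I" "g \<in> I"
    and \<delta>: "\<delta>1 < N h b g" "\<delta>2 < N p a h" "\<delta>3 < N f d p"
begin

abbreviation vt where "vt n2 \<beta>2 n1 \<gamma>2 \<gamma>1 \<equiv> v (a, b, n2, \<beta>2) (d, n2, n1, \<gamma>2) (f, n1, g, \<gamma>1)"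

text \<open>The morphisms and scalars met while collapsing the left side; pent_common is the
  value that both sides reach.\<close>

definition pent_X where
  "pent_X n \<beta> = ed p a h \<delta>2 \<odot> ((ed f d p \<delta>3 \<boxtimes> idm (V a)) \<odot> (idm (V f) \<boxtimes> eb d a n \<beta>))"

definition pent_Y where
  "pent_Y n \<beta> n1 n2 \<beta>2 \<gamma>2 =
     ((ed d a n \<beta> \<boxtimes> idm (V b)) \<odot> (idm (V d) \<boxtimes> eb a b n2 \<beta>2)) \<odot> eb d n2 n1 \<gamma>2"

definition pent_c2 where
  "pent_c2 n \<beta> n1 \<beta>1 \<gamma>1 = scal C (V g) (ed h b g \<delta>1 \<odot>
     (((pent_X n \<beta> \<boxtimes> idm (V b)) \<odot> (idm (V f) \<boxtimes> eb n b n1 \<beta>1)) \<odot> eb f n1 g \<gamma>1))"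

definition pent_c3 where
  "pent_c3 n \<beta> n1 \<gamma>1 n2 \<beta>2 \<gamma>2 = scal C (V g) (ed h b g \<delta>1 \<odot>
     (((pent_X n \<beta> \<boxtimes> idm (V b)) \<odot> (idm (V f) \<boxtimes> pent_Y n \<beta> n1 n2 \<beta>2 \<gamma>2)) \<odot> eb f n1 g \<gamma>1))"

definition pent_common where
  "pent_common n2 \<beta>2 n1 \<gamma>2 \<gamma>1 = scal C (V g) (ed h b g \<delta>1 \<odot>
     (((ed p a h \<delta>2 \<boxtimes> idm (V b)) \<odot> (idm (V p) \<boxtimes> eb a b n2 \<beta>2))
      \<odot> (((ed f d p \<delta>3 \<boxtimes> idm (V n2)) \<odot> (idm (V f) \<boxtimes> eb d n2 n1 \<gamma>2)) \<odot> eb f n1 g \<gamma>1)))"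

lemma pent_X_hom: "n \<in> I \<Longrightarrow> \<beta> < N d a n \<Longrightarrow> pent_X n \<beta> \<in> Hm (V f \<otimes> V n) (V h)"
  unfolding pent_X_def using Ig \<delta> by (simp add: hom_iff)

lemma pent_Y_hom: "n \<in> I \<Longrightarrow> \<beta> < N d a n \<Longrightarrow> n1 \<in> I \<Longrightarrow> n2 \<in> I \<Longrightarrow> \<beta>2 < N a b n2 \<Longrightarrow> \<gamma>2 < N d n2 n1 \<Longrightarrow>
   pent_Y n \<beta> n1 n2 \<beta>2 \<gamma>2 \<in> Hm (V n1) (V n \<otimes> V b)"
  unfolding pent_Y_def using Ig \<delta> by (simp add: hom_iff)

text \<open>The sum over \<open>\<gamma>\<close> on the left side: expansion (a) in the dual basis of
  \<open>H^h_{fn}\<close> composes the two structure scalars into one.\<close>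

lemma pent_sum_gamma:
  assumes n: "n \<in> I" "n1 \<in> I" and \<beta>: "\<beta> < N d a n" "\<beta>1 < N n b n1" "\<gamma>1 < N f n1 g"
  shows "(\<Sum>\<gamma><N f n h. tau_coef f d p a h n \<delta>2 \<delta>3 \<beta> \<gamma> * tau_coef f n h b g n1 \<delta>1 \<gamma> \<beta>1 \<gamma>1) = pent_c2 n \<beta> n1 \<beta>1 \<gamma>1"
proof -
  define G where "G = (\<lambda>y. scal C (V g) (ed h b g \<delta>1 \<odot> (((y \<boxtimes> idm (V b)) \<odot> (idm (V f) \<boxtimes> eb n b n1 \<beta>1)) \<odot> eb f n1 g \<gamma>1)))"
  have lG: "linfun (V f \<otimes> V n) (V h) G"
    unfolding G_def by (rule scal_linfun_V[where m=g], (rule lm_rules)+) (use Ig \<delta> n \<beta> in \<open>auto simp: hom_iff\<close>)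
  have "(\<Sum>\<gamma><N f n h. tau_coef f d p a h n \<delta>2 \<delta>3 \<beta> \<gamma> * tau_coef f n h b g n1 \<delta>1 \<gamma> \<beta>1 \<gamma>1)
      = (\<Sum>\<gamma><N f n h. scal C (V h) (pent_X n \<beta> \<odot> eb f n h \<gamma>) * G (ed f n h \<gamma>))"
  proof (rule sum.cong, simp)
    fix \<gamma> assume "\<gamma> \<in> {..<N f n h}"
    then have \<gamma>: "\<gamma> < N f n h" by simp
    have "ed p a h \<delta>2 \<odot> (((ed f d p \<delta>3 \<boxtimes> idm (V a)) \<odot> (idm (V f) \<boxtimes> eb d a n \<beta>)) \<odot> eb f n h \<gamma>)
        = pent_X n \<beta> \<odot> eb f n h \<gamma>"
      unfolding pent_X_def using Ig \<delta> n \<beta> \<gamma> by (simp add: assoc_s)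
    then show "tau_coef f d p a h n \<delta>2 \<delta>3 \<beta> \<gamma> * tau_coef f n h b g n1 \<delta>1 \<gamma> \<beta>1 \<gamma>1 =
          scal C (V h) (pent_X n \<beta> \<odot> eb f n h \<gamma>) * G (ed f n h \<gamma>)"
      unfolding tau_coef_def G_def by simp
  qed
  also have "\<dots> = G (pent_X n \<beta>)" by (rule exp_dn[OF Ig(1) n(1) Ig(5) pent_X_hom[OF n(1) \<beta>(1)] lG])
  finally show ?thesis unfolding G_def pent_c2_def .
qed

text \<open>The sum over \<open>\<beta>1\<close> on the left side: expansion (a) in the basis of \<open>H^{nb}_{n1}\<close>.\<close>

lemma pent_sum_beta1:
  assumes n: "n \<in> I" "n1 \<in> I" "n2 \<in> I" and \<beta>: "\<beta> < N d a n" "\<gamma>1 < N f n1 g" "\<beta>2 < N a b n2" "\<gamma>2 < N d n2 n1"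
  shows "(\<Sum>\<beta>1<N n b n1. tau_coef d a n b n1 n2 \<beta>1 \<beta> \<beta>2 \<gamma>2 * pent_c2 n \<beta> n1 \<beta>1 \<gamma>1) = pent_c3 n \<beta> n1 \<gamma>1 n2 \<beta>2 \<gamma>2"
proof -
  define G where "G = (\<lambda>x. scal C (V g) (ed h b g \<delta>1 \<odot> (((pent_X n \<beta> \<boxtimes> idm (V b)) \<odot> (idm (V f) \<boxtimes> x)) \<odot> eb f n1 g \<gamma>1)))"
  have hx: "pent_X n \<beta> \<in> Hm (V f \<otimes> V n) (V h)" by (rule pent_X_hom[OF n(1) \<beta>(1)])
  have lG: "linfun (V n1) (V n \<otimes> V b) G"
    unfolding G_def by (rule scal_linfun_V[where m=g], (rule lm_rules)+) (use Ig \<delta> n \<beta> hx in \<open>auto simp: hom_iff\<close>)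
  have "(\<Sum>\<beta>1<N n b n1. tau_coef d a n b n1 n2 \<beta>1 \<beta> \<beta>2 \<gamma>2 * pent_c2 n \<beta> n1 \<beta>1 \<gamma>1)
     = (\<Sum>\<beta>1<N n b n1. scal C (V n1) (ed n b n1 \<beta>1 \<odot> pent_Y n \<beta> n1 n2 \<beta>2 \<gamma>2) * G (eb n b n1 \<beta>1))"
    by (rule sum.cong) (simp_all add: tau_coef_def pent_c2_def G_def pent_Y_def)
  also have "\<dots> = G (pent_Y n \<beta> n1 n2 \<beta>2 \<gamma>2)" by (rule exp_up[OF n(1) Ig(6) n(2) pent_Y_hom[OF n(1) \<beta>(1) n(2) n(3) \<beta>(3) \<beta>(4)] lG])
  finally show ?thesis unfolding G_def pent_c3_def .
qed

text \<open>The channel sum over \<open>(n, \<beta>)\<close> on the left side: completeness (b) for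
  \<open>V_d \<otimes> V_a\<close>, after isolating \<open>e^{da}_{n \<beta>} e^{n \<beta>}_{da}\<close>.\<close>

lemma pent_sum_channel:
  assumes n: "n1 \<in> I" "n2 \<in> I" and \<beta>: "\<gamma>1 < N f n1 g" "\<beta>2 < N a b n2" "\<gamma>2 < N d n2 n1"
  shows "(\<Sum>n\<in>chan d a. \<Sum>\<beta><N d a n. pent_c3 n \<beta> n1 \<gamma>1 n2 \<beta>2 \<gamma>2)
       = (if gg C I V d a then pent_common n2 \<beta>2 n1 \<gamma>2 \<gamma>1 else 0)"
proof -
  define K where "K = ed p a h \<delta>2 \<odot> (ed f d p \<delta>3 \<boxtimes> idm (V a))"
  define Z where "Z = (idm (V d) \<boxtimes> eb a b n2 \<beta>2) \<odot> eb d n2 n1 \<gamma>2"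
  define H where "H = (\<lambda>w. scal C (V g) (ed h b g \<delta>1 \<odot> (((K \<boxtimes> idm (V b)) \<odot> (idm (V f) \<boxtimes> (w \<boxtimes> idm (V b))))
                        \<odot> ((idm (V f) \<boxtimes> Z) \<odot> eb f n1 g \<gamma>1))))"
  have hK: "K \<in> Hm (V f \<otimes> V d \<otimes> V a) (V h)" unfolding K_def using Ig \<delta> by (simp add: hom_iff)
  have hZ: "Z \<in> Hm (V n1) (V d \<otimes> V a \<otimes> V b)" unfolding Z_def using Ig \<delta> n \<beta> by (simp add: hom_iff)
  have lH: "linfun (V d \<otimes> V a) (V d \<otimes> V a) H"
    unfolding H_def by (rule scal_linfun_V[where m=g], (rule lm_rules)+) (use Ig \<delta> n \<beta> hK hZ in \<open>auto simp: hom_iff\<close>)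
  have "(\<Sum>n\<in>chan d a. \<Sum>\<beta><N d a n. pent_c3 n \<beta> n1 \<gamma>1 n2 \<beta>2 \<gamma>2)
      = (\<Sum>n\<in>chan d a. \<Sum>\<beta><N d a n. H (eb d a n \<beta> \<odot> ed d a n \<beta>))"
  proof (intro sum.cong refl)
    fix n \<beta> assume nK: "n \<in> chan d a" and "\<beta> \<in> {..<N d a n}"
    then have nI: "n \<in> I" and \<beta>': "\<beta> < N d a n" by (auto simp: chan_def)
    show "pent_c3 n \<beta> n1 \<gamma>1 n2 \<beta>2 \<gamma>2 = H (eb d a n \<beta> \<odot> ed d a n \<beta>)"
      unfolding pent_c3_def H_def pent_X_def pent_Y_def K_def Z_def
      by (subst isolate_middle[where P="V p" and A="V a" and H="V h" and F="V f" and D="V d" and M="V n"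
            and B="V b" and Y="V n2" and W="V n1" and G="V g"]) (use Ig \<delta> n \<beta> nI \<beta>' in auto)
  qed
  also have "\<dots> = (if gg C I V d a then H (idm (V d \<otimes> V a)) else 0)"
    by (rule completeness[OF Ig(2) Ig(4) lH])
  also have "H (idm (V d \<otimes> V a)) = pent_common n2 \<beta>2 n1 \<gamma>2 \<gamma>1"
    unfolding H_def pent_common_def K_def Z_def
    by (subst merge_middle[where P="V p" and A="V a" and H="V h" and F="V f" and D="V d"
            and B="V b" and Y="V n2" and W="V n1" and G="V g"]) (use Ig \<delta> n \<beta> in auto)
  finally show ?thesis by simp
qed

text \<open>The sum over \<open>\<gamma>\<close> on the right side: expansion (a) in the basis of \<open>H^{p n2}_g\<close>.\<close>

lemma pent_rhs_sum_gamma: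
  assumes n: "n1 \<in> I" "n2 \<in> I" and \<beta>: "\<gamma>1 < N f n1 g" "\<beta>2 < N a b n2" "\<gamma>2 < N d n2 n1"
  shows "(\<Sum>\<gamma><N p n2 g. tau_coef f d p n2 g n1 \<gamma> \<delta>3 \<gamma>2 \<gamma>1 * tau_coef p a h b g n2 \<delta>1 \<delta>2 \<beta>2 \<gamma>) = pent_common n2 \<beta>2 n1 \<gamma>2 \<gamma>1"
proof -
  define Yr where "Yr = ((ed f d p \<delta>3 \<boxtimes> idm (V n2)) \<odot> (idm (V f) \<boxtimes> eb d n2 n1 \<gamma>2)) \<odot> eb f n1 g \<gamma>1"
  define G where "G = (\<lambda>x. scal C (V g) (ed h b g \<delta>1 \<odot> (((ed p a h \<delta>2 \<boxtimes> idm (V b)) \<odot> (idm (V p) \<boxtimes> eb a b n2 \<beta>2)) \<odot> x)))"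
  have hY: "Yr \<in> Hm (V g) (V p \<otimes> V n2)" unfolding Yr_def using Ig \<delta> n \<beta> by (simp add: hom_iff)
  have lG: "linfun (V g) (V p \<otimes> V n2) G"
    unfolding G_def by (rule scal_linfun_V[where m=g], (rule lm_rules)+) (use Ig \<delta> n \<beta> in \<open>auto simp: hom_iff\<close>)
  have "(\<Sum>\<gamma><N p n2 g. tau_coef f d p n2 g n1 \<gamma> \<delta>3 \<gamma>2 \<gamma>1 * tau_coef p a h b g n2 \<delta>1 \<delta>2 \<beta>2 \<gamma>)
      = (\<Sum>\<gamma><N p n2 g. scal C (V g) (ed p n2 g \<gamma> \<odot> Yr) * G (eb p n2 g \<gamma>))"
    by (rule sum.cong) (simp_all add: tau_coef_def G_def Yr_def)
  also have "\<dots> = G Yr" by (rule exp_up[OF Ig(3) n(2) Ig(7) hY lG])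
  finally show ?thesis unfolding G_def pent_common_def Yr_def .
qed

text \<open>A common finite range for the index \<open>n1\<close>, independent of the outer indices.\<close>

definition pent_range where "pent_range = (\<Union>x\<in>chan d a. chan x b) \<union> (\<Union>y\<in>chan a b. chan d y)"

lemma pent_range_finite: "finite pent_range"
  unfolding pent_range_def using chan_finite chan_I Ig by auto
lemma pent_range_I: "pent_range \<subseteq> I" unfolding pent_range_def using chan_I by auto

text \<open>The innermost sum of the left side: an entry of \<open>\<tau>_{12}(v)\<close>.\<close>

definition lhs_inner where
  "lhs_inner n \<beta> n1 \<beta>1 \<gamma>1 = (\<Sum>n2\<in>chan a b. \<Sum>\<beta>2<N a b n2. \<Sum>\<gamma>2<N d n2 n1.
     vt n2 \<beta>2 n1 \<gamma>2 \<gamma>1 * tau_coef d a n b n1 n2 \<beta>1 \<beta> \<beta>2 \<gamma>2)"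

text \<open>Left side, first step: the sum over \<open>\<gamma>\<close> is done by an expansion (pent_sum_gamma); the
  range of \<open>n1\<close> is enlarged to pent_range so that it no longer depends on \<open>n\<close>.\<close>

lemma pent_lhs_step1:
  "pent_lhs v f d p a h b g \<delta>1 \<delta>2 \<delta>3
   = (\<Sum>n\<in>chan d a. \<Sum>\<beta><N d a n. \<Sum>n1\<in>pent_range. \<Sum>\<beta>1<N n b n1. \<Sum>\<gamma>1<N f n1 g.
               lhs_inner n \<beta> n1 \<beta>1 \<gamma>1 * pent_c2 n \<beta> n1 \<beta>1 \<gamma>1)"
  unfolding pent_lhs_def lhs_inner_def[symmetric]
proof (intro sum.cong refl)
  fix n \<beta> assume nK: "n \<in> chan d a" and \<beta>: "\<beta> \<in> {..<N d a n}"
  have nI: "n \<in> I" and \<beta>': "\<beta> < N d a n" using nK \<beta> by (auto simp: chan_def)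
  have "(\<Sum>\<gamma><N f n h. (\<Sum>n1\<in>chan n b. \<Sum>\<beta>1<N n b n1. \<Sum>\<gamma>1<N f n1 g. lhs_inner n \<beta> n1 \<beta>1 \<gamma>1
           * tau_coef f n h b g n1 \<delta>1 \<gamma> \<beta>1 \<gamma>1) * tau_coef f d p a h n \<delta>2 \<delta>3 \<beta> \<gamma>)
      = (\<Sum>\<gamma><N f n h. \<Sum>n1\<in>pent_range. \<Sum>\<beta>1<N n b n1. \<Sum>\<gamma>1<N f n1 g.
           lhs_inner n \<beta> n1 \<beta>1 \<gamma>1 * (tau_coef f n h b g n1 \<delta>1 \<gamma> \<beta>1 \<gamma>1 * tau_coef f d p a h n \<delta>2 \<delta>3 \<beta> \<gamma>))"
  proof (rule sum.cong[OF refl])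
    fix \<gamma>
    have "(\<Sum>n1\<in>chan n b. \<Sum>\<beta>1<N n b n1. \<Sum>\<gamma>1<N f n1 g. lhs_inner n \<beta> n1 \<beta>1 \<gamma>1 * tau_coef f n h b g n1 \<delta>1 \<gamma> \<beta>1 \<gamma>1)
        = (\<Sum>n1\<in>pent_range. \<Sum>\<beta>1<N n b n1. \<Sum>\<gamma>1<N f n1 g. lhs_inner n \<beta> n1 \<beta>1 \<gamma>1 * tau_coef f n h b g n1 \<delta>1 \<gamma> \<beta>1 \<gamma>1)"
      by (rule sum_extend[OF pent_range_finite]) (use nK pent_range_I in \<open>auto simp: pent_range_def chan_def\<close>)
    then show "(\<Sum>n1\<in>chan n b. \<Sum>\<beta>1<N n b n1. \<Sum>\<gamma>1<N f n1 g. lhs_inner n \<beta> n1 \<beta>1 \<gamma>1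
           * tau_coef f n h b g n1 \<delta>1 \<gamma> \<beta>1 \<gamma>1) * tau_coef f d p a h n \<delta>2 \<delta>3 \<beta> \<gamma>
        = (\<Sum>n1\<in>pent_range. \<Sum>\<beta>1<N n b n1. \<Sum>\<gamma>1<N f n1 g.
           lhs_inner n \<beta> n1 \<beta>1 \<gamma>1 * (tau_coef f n h b g n1 \<delta>1 \<gamma> \<beta>1 \<gamma>1 * tau_coef f d p a h n \<delta>2 \<delta>3 \<beta> \<gamma>))"
      by (simp add: sum_distrib_right mult.assoc)
  qed
  also have "\<dots> = (\<Sum>n1\<in>pent_range. \<Sum>\<beta>1<N n b n1. \<Sum>\<gamma>1<N f n1 g. \<Sum>\<gamma><N f n h.
           lhs_inner n \<beta> n1 \<beta>1 \<gamma>1 * (tau_coef f n h b g n1 \<delta>1 \<gamma> \<beta>1 \<gamma>1 * tau_coef f d p a h n \<delta>2 \<delta>3 \<beta> \<gamma>))"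
    by (rule sum_move_inside3)
  also have "\<dots> = (\<Sum>n1\<in>pent_range. \<Sum>\<beta>1<N n b n1. \<Sum>\<gamma>1<N f n1 g.
           lhs_inner n \<beta> n1 \<beta>1 \<gamma>1 * pent_c2 n \<beta> n1 \<beta>1 \<gamma>1)"
  proof (intro sum.cong refl)
    fix n1 \<beta>1 \<gamma>1 assume n1: "n1 \<in> pent_range" and \<beta>1: "\<beta>1 \<in> {..<N n b n1}" and \<gamma>1: "\<gamma>1 \<in> {..<N f n1 g}"
    show "(\<Sum>\<gamma><N f n h. lhs_inner n \<beta> n1 \<beta>1 \<gamma>1 * (tau_coef f n h b g n1 \<delta>1 \<gamma> \<beta>1 \<gamma>1 * tau_coef f d p a h n \<delta>2 \<delta>3 \<beta> \<gamma>))
        = lhs_inner n \<beta> n1 \<beta>1 \<gamma>1 * pent_c2 n \<beta> n1 \<beta>1 \<gamma>1"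
    proof -
      have "(\<Sum>\<gamma><N f n h. tau_coef f n h b g n1 \<delta>1 \<gamma> \<beta>1 \<gamma>1 * tau_coef f d p a h n \<delta>2 \<delta>3 \<beta> \<gamma>) = pent_c2 n \<beta> n1 \<beta>1 \<gamma>1"
        using pent_sum_gamma[OF nI _ \<beta>'] n1 \<beta>1 \<gamma>1 pent_range_I by (auto simp: mult.commute)
      then show ?thesis by (simp add: sum_distrib_left[symmetric])
    qed
  qed
  finally show "(\<Sum>\<gamma><N f n h. (\<Sum>n1\<in>chan n b. \<Sum>\<beta>1<N n b n1. \<Sum>\<gamma>1<N f n1 g. lhs_inner n \<beta> n1 \<beta>1 \<gamma>1
           * tau_coef f n h b g n1 \<delta>1 \<gamma> \<beta>1 \<gamma>1) * tau_coef f d p a h n \<delta>2 \<delta>3 \<beta> \<gamma>)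
      = (\<Sum>n1\<in>pent_range. \<Sum>\<beta>1<N n b n1. \<Sum>\<gamma>1<N f n1 g.
           lhs_inner n \<beta> n1 \<beta>1 \<gamma>1 * pent_c2 n \<beta> n1 \<beta>1 \<gamma>1)" .
qed

lemma pent_lhs_step2:
  "(\<Sum>n\<in>chan d a. \<Sum>\<beta><N d a n. \<Sum>n1\<in>pent_range. \<Sum>\<beta>1<N n b n1. \<Sum>\<gamma>1<N f n1 g.
               lhs_inner n \<beta> n1 \<beta>1 \<gamma>1 * pent_c2 n \<beta> n1 \<beta>1 \<gamma>1)
   = (\<Sum>n\<in>chan d a. \<Sum>\<beta><N d a n. \<Sum>n1\<in>pent_range. \<Sum>\<gamma>1<N f n1 g. \<Sum>n2\<in>chan a b. \<Sum>\<beta>2<N a b n2. \<Sum>\<gamma>2<N d n2 n1.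
               vt n2 \<beta>2 n1 \<gamma>2 \<gamma>1 * pent_c3 n \<beta> n1 \<gamma>1 n2 \<beta>2 \<gamma>2)"
proof (rule sum.cong[OF refl], rule sum.cong[OF refl], rule sum.cong[OF refl])
  fix n \<beta> n1 assume nK: "n \<in> chan d a" and \<beta>: "\<beta> \<in> {..<N d a n}" and n1: "n1 \<in> pent_range"
  have nI: "n \<in> I" and \<beta>': "\<beta> < N d a n" and n1I: "n1 \<in> I" using nK \<beta> n1 pent_range_I by (auto simp: chan_def)
  have "(\<Sum>\<beta>1<N n b n1. \<Sum>\<gamma>1<N f n1 g. lhs_inner n \<beta> n1 \<beta>1 \<gamma>1 * pent_c2 n \<beta> n1 \<beta>1 \<gamma>1)
      = (\<Sum>\<beta>1<N n b n1. \<Sum>\<gamma>1<N f n1 g. \<Sum>n2\<in>chan a b. \<Sum>\<beta>2<N a b n2. \<Sum>\<gamma>2<N d n2 n1.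
          vt n2 \<beta>2 n1 \<gamma>2 \<gamma>1 * (tau_coef d a n b n1 n2 \<beta>1 \<beta> \<beta>2 \<gamma>2 * pent_c2 n \<beta> n1 \<beta>1 \<gamma>1))"
    by (simp add: lhs_inner_def sum_distrib_right mult.assoc)
  also have "\<dots> = (\<Sum>\<gamma>1<N f n1 g. \<Sum>n2\<in>chan a b. \<Sum>\<beta>2<N a b n2. \<Sum>\<gamma>2<N d n2 n1. \<Sum>\<beta>1<N n b n1.
          vt n2 \<beta>2 n1 \<gamma>2 \<gamma>1 * (tau_coef d a n b n1 n2 \<beta>1 \<beta> \<beta>2 \<gamma>2 * pent_c2 n \<beta> n1 \<beta>1 \<gamma>1))"
    by (rule sum_move_inside4)
  also have "\<dots> = (\<Sum>\<gamma>1<N f n1 g. \<Sum>n2\<in>chan a b. \<Sum>\<beta>2<N a b n2. \<Sum>\<gamma>2<N d n2 n1.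
          vt n2 \<beta>2 n1 \<gamma>2 \<gamma>1 * pent_c3 n \<beta> n1 \<gamma>1 n2 \<beta>2 \<gamma>2)"
  proof (intro sum.cong refl)
    fix \<gamma>1 n2 \<beta>2 \<gamma>2 assume \<gamma>1: "\<gamma>1 \<in> {..<N f n1 g}" and n2: "n2 \<in> chan a b"
      and \<beta>2: "\<beta>2 \<in> {..<N a b n2}" and \<gamma>2: "\<gamma>2 \<in> {..<N d n2 n1}"
    have n2I: "n2 \<in> I" using n2 chan_I by blast
    have "(\<Sum>\<beta>1<N n b n1. tau_coef d a n b n1 n2 \<beta>1 \<beta> \<beta>2 \<gamma>2 * pent_c2 n \<beta> n1 \<beta>1 \<gamma>1) = pent_c3 n \<beta> n1 \<gamma>1 n2 \<beta>2 \<gamma>2"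
      by (rule pent_sum_beta1) (use nI n1I n2I \<beta>' \<gamma>1 \<beta>2 \<gamma>2 in auto)
    then show "(\<Sum>\<beta>1<N n b n1. vt n2 \<beta>2 n1 \<gamma>2 \<gamma>1 * (tau_coef d a n b n1 n2 \<beta>1 \<beta> \<beta>2 \<gamma>2 * pent_c2 n \<beta> n1 \<beta>1 \<gamma>1))
        = vt n2 \<beta>2 n1 \<gamma>2 \<gamma>1 * pent_c3 n \<beta> n1 \<gamma>1 n2 \<beta>2 \<gamma>2"
      by (simp add: sum_distrib_left[symmetric])
  qed
  finally show "(\<Sum>\<beta>1<N n b n1. \<Sum>\<gamma>1<N f n1 g. lhs_inner n \<beta> n1 \<beta>1 \<gamma>1 * pent_c2 n \<beta> n1 \<beta>1 \<gamma>1)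
      = (\<Sum>\<gamma>1<N f n1 g. \<Sum>n2\<in>chan a b. \<Sum>\<beta>2<N a b n2. \<Sum>\<gamma>2<N d n2 n1.
          vt n2 \<beta>2 n1 \<gamma>2 \<gamma>1 * pent_c3 n \<beta> n1 \<gamma>1 n2 \<beta>2 \<gamma>2)" .
qed

lemma pent_lhs_step3:
  "(\<Sum>n\<in>chan d a. \<Sum>\<beta><N d a n. \<Sum>n1\<in>pent_range. \<Sum>\<gamma>1<N f n1 g. \<Sum>n2\<in>chan a b. \<Sum>\<beta>2<N a b n2. \<Sum>\<gamma>2<N d n2 n1.
               vt n2 \<beta>2 n1 \<gamma>2 \<gamma>1 * pent_c3 n \<beta> n1 \<gamma>1 n2 \<beta>2 \<gamma>2)
   = (\<Sum>n1\<in>pent_range. \<Sum>\<gamma>1<N f n1 g. \<Sum>n2\<in>chan a b. \<Sum>\<beta>2<N a b n2. \<Sum>\<gamma>2<N d n2 n1.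
               vt n2 \<beta>2 n1 \<gamma>2 \<gamma>1 * (if gg C I V d a then pent_common n2 \<beta>2 n1 \<gamma>2 \<gamma>1 else 0))"
proof -
  have "(\<Sum>n\<in>chan d a. \<Sum>\<beta><N d a n. \<Sum>n1\<in>pent_range. \<Sum>\<gamma>1<N f n1 g. \<Sum>n2\<in>chan a b. \<Sum>\<beta>2<N a b n2. \<Sum>\<gamma>2<N d n2 n1.
               vt n2 \<beta>2 n1 \<gamma>2 \<gamma>1 * pent_c3 n \<beta> n1 \<gamma>1 n2 \<beta>2 \<gamma>2)
     = (\<Sum>n\<in>chan d a. \<Sum>n1\<in>pent_range. \<Sum>\<gamma>1<N f n1 g. \<Sum>n2\<in>chan a b. \<Sum>\<beta>2<N a b n2. \<Sum>\<gamma>2<N d n2 n1. \<Sum>\<beta><N d a n.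
               vt n2 \<beta>2 n1 \<gamma>2 \<gamma>1 * pent_c3 n \<beta> n1 \<gamma>1 n2 \<beta>2 \<gamma>2)"
    by (rule sum.cong[OF refl], rule sum_move_inside5)
  also have "\<dots> = (\<Sum>n1\<in>pent_range. \<Sum>\<gamma>1<N f n1 g. \<Sum>n2\<in>chan a b. \<Sum>\<beta>2<N a b n2. \<Sum>\<gamma>2<N d n2 n1. \<Sum>n\<in>chan d a. \<Sum>\<beta><N d a n.
               vt n2 \<beta>2 n1 \<gamma>2 \<gamma>1 * pent_c3 n \<beta> n1 \<gamma>1 n2 \<beta>2 \<gamma>2)"
    by (rule sum_move_inside5)
  also have "\<dots> = (\<Sum>n1\<in>pent_range. \<Sum>\<gamma>1<N f n1 g. \<Sum>n2\<in>chan a b. \<Sum>\<beta>2<N a b n2. \<Sum>\<gamma>2<N d n2 n1.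
               vt n2 \<beta>2 n1 \<gamma>2 \<gamma>1 * (if gg C I V d a then pent_common n2 \<beta>2 n1 \<gamma>2 \<gamma>1 else 0))"
  proof (intro sum.cong refl)
    fix n1 \<gamma>1 n2 \<beta>2 \<gamma>2 assume n1: "n1 \<in> pent_range" and \<gamma>1: "\<gamma>1 \<in> {..<N f n1 g}" and n2: "n2 \<in> chan a b"
      and \<beta>2: "\<beta>2 \<in> {..<N a b n2}" and \<gamma>2: "\<gamma>2 \<in> {..<N d n2 n1}"
    have n2I: "n2 \<in> I" and n1I: "n1 \<in> I" using n2 n1 chan_I pent_range_I by auto
    have "(\<Sum>n\<in>chan d a. \<Sum>\<beta><N d a n. pent_c3 n \<beta> n1 \<gamma>1 n2 \<beta>2 \<gamma>2) = (if gg C I V d a then pent_common n2 \<beta>2 n1 \<gamma>2 \<gamma>1 else 0)"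
      by (rule pent_sum_channel) (use n1I n2I \<gamma>1 \<beta>2 \<gamma>2 in auto)
    then show "(\<Sum>n\<in>chan d a. \<Sum>\<beta><N d a n. vt n2 \<beta>2 n1 \<gamma>2 \<gamma>1 * pent_c3 n \<beta> n1 \<gamma>1 n2 \<beta>2 \<gamma>2)
        = vt n2 \<beta>2 n1 \<gamma>2 \<gamma>1 * (if gg C I V d a then pent_common n2 \<beta>2 n1 \<gamma>2 \<gamma>1 else 0)"
      by (simp add: sum_distrib_left[symmetric])
  qed
  finally show ?thesis .
qed

lemma pent_rhs_step1:
  "pent_rhs v f d p a h b g \<delta>1 \<delta>2 \<delta>3
   = (\<Sum>n2\<in>chan a b. \<Sum>\<beta>2<N a b n2. \<Sum>n1\<in>chan d n2. \<Sum>\<gamma>2<N d n2 n1. \<Sum>\<gamma>1<N f n1 g.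
               (if gg C I V d a then vt n2 \<beta>2 n1 \<gamma>2 \<gamma>1 else 0) * pent_common n2 \<beta>2 n1 \<gamma>2 \<gamma>1)"
  unfolding pent_rhs_def
proof (intro sum.cong refl)
  fix n2 \<beta>2 assume n2: "n2 \<in> chan a b" and \<beta>2: "\<beta>2 \<in> {..<N a b n2}"
  have n2I: "n2 \<in> I" using n2 chan_I by blast
  have "(\<Sum>\<gamma><N p n2 g. (\<Sum>n1\<in>chan d n2. \<Sum>\<gamma>2<N d n2 n1. \<Sum>\<gamma>1<N f n1 g.
      (if gg C I V d a then vt n2 \<beta>2 n1 \<gamma>2 \<gamma>1 else 0) * tau_coef f d p n2 g n1 \<gamma> \<delta>3 \<gamma>2 \<gamma>1) * tau_coef p a h b g n2 \<delta>1 \<delta>2 \<beta>2 \<gamma>)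
    = (\<Sum>\<gamma><N p n2 g. \<Sum>n1\<in>chan d n2. \<Sum>\<gamma>2<N d n2 n1. \<Sum>\<gamma>1<N f n1 g.
      (if gg C I V d a then vt n2 \<beta>2 n1 \<gamma>2 \<gamma>1 else 0) * (tau_coef f d p n2 g n1 \<gamma> \<delta>3 \<gamma>2 \<gamma>1 * tau_coef p a h b g n2 \<delta>1 \<delta>2 \<beta>2 \<gamma>))"
    by (simp add: sum_distrib_right mult.assoc)
  also have "\<dots> = (\<Sum>n1\<in>chan d n2. \<Sum>\<gamma>2<N d n2 n1. \<Sum>\<gamma>1<N f n1 g. \<Sum>\<gamma><N p n2 g.
      (if gg C I V d a then vt n2 \<beta>2 n1 \<gamma>2 \<gamma>1 else 0) * (tau_coef f d p n2 g n1 \<gamma> \<delta>3 \<gamma>2 \<gamma>1 * tau_coef p a h b g n2 \<delta>1 \<delta>2 \<beta>2 \<gamma>))"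
    by (rule sum_move_inside3)
  also have "\<dots> = (\<Sum>n1\<in>chan d n2. \<Sum>\<gamma>2<N d n2 n1. \<Sum>\<gamma>1<N f n1 g.
               (if gg C I V d a then vt n2 \<beta>2 n1 \<gamma>2 \<gamma>1 else 0) * pent_common n2 \<beta>2 n1 \<gamma>2 \<gamma>1)"
  proof (intro sum.cong refl)
    fix n1 \<gamma>2 \<gamma>1 assume n1: "n1 \<in> chan d n2" and \<gamma>2: "\<gamma>2 \<in> {..<N d n2 n1}" and \<gamma>1: "\<gamma>1 \<in> {..<N f n1 g}"
    have n1I: "n1 \<in> I" using n1 chan_I by blast
    have "(\<Sum>\<gamma><N p n2 g. tau_coef f d p n2 g n1 \<gamma> \<delta>3 \<gamma>2 \<gamma>1 * tau_coef p a h b g n2 \<delta>1 \<delta>2 \<beta>2 \<gamma>) = pent_common n2 \<beta>2 n1 \<gamma>2 \<gamma>1"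
      by (rule pent_rhs_sum_gamma) (use n1I n2I \<gamma>1 \<beta>2 \<gamma>2 in auto)
    then show "(\<Sum>\<gamma><N p n2 g. (if gg C I V d a then vt n2 \<beta>2 n1 \<gamma>2 \<gamma>1 else 0) *
          (tau_coef f d p n2 g n1 \<gamma> \<delta>3 \<gamma>2 \<gamma>1 * tau_coef p a h b g n2 \<delta>1 \<delta>2 \<beta>2 \<gamma>))
        = (if gg C I V d a then vt n2 \<beta>2 n1 \<gamma>2 \<gamma>1 else 0) * pent_common n2 \<beta>2 n1 \<gamma>2 \<gamma>1"
      by (simp add: sum_distrib_left[symmetric])
  qed
  finally show "(\<Sum>\<gamma><N p n2 g. (\<Sum>n1\<in>chan d n2. \<Sum>\<gamma>2<N d n2 n1. \<Sum>\<gamma>1<N f n1 g.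
      (if gg C I V d a then vt n2 \<beta>2 n1 \<gamma>2 \<gamma>1 else 0) * tau_coef f d p n2 g n1 \<gamma> \<delta>3 \<gamma>2 \<gamma>1) * tau_coef p a h b g n2 \<delta>1 \<delta>2 \<beta>2 \<gamma>)
    = (\<Sum>n1\<in>chan d n2. \<Sum>\<gamma>2<N d n2 n1. \<Sum>\<gamma>1<N f n1 g.
               (if gg C I V d a then vt n2 \<beta>2 n1 \<gamma>2 \<gamma>1 else 0) * pent_common n2 \<beta>2 n1 \<gamma>2 \<gamma>1)" .
qed

lemma pent_rhs_step2:
  "(\<Sum>n2\<in>chan a b. \<Sum>\<beta>2<N a b n2. \<Sum>n1\<in>chan d n2. \<Sum>\<gamma>2<N d n2 n1. \<Sum>\<gamma>1<N f n1 g.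
               (if gg C I V d a then vt n2 \<beta>2 n1 \<gamma>2 \<gamma>1 else 0) * pent_common n2 \<beta>2 n1 \<gamma>2 \<gamma>1)
    = (\<Sum>n1\<in>pent_range. \<Sum>\<gamma>1<N f n1 g. \<Sum>n2\<in>chan a b. \<Sum>\<beta>2<N a b n2. \<Sum>\<gamma>2<N d n2 n1.
               (if gg C I V d a then vt n2 \<beta>2 n1 \<gamma>2 \<gamma>1 else 0) * pent_common n2 \<beta>2 n1 \<gamma>2 \<gamma>1)"
proof -
  have "(\<Sum>n2\<in>chan a b. \<Sum>\<beta>2<N a b n2. \<Sum>n1\<in>chan d n2. \<Sum>\<gamma>2<N d n2 n1. \<Sum>\<gamma>1<N f n1 g.
               (if gg C I V d a then vt n2 \<beta>2 n1 \<gamma>2 \<gamma>1 else 0) * pent_common n2 \<beta>2 n1 \<gamma>2 \<gamma>1)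
      = (\<Sum>n2\<in>chan a b. \<Sum>\<beta>2<N a b n2. \<Sum>n1\<in>pent_range. \<Sum>\<gamma>1<N f n1 g. \<Sum>\<gamma>2<N d n2 n1.
               (if gg C I V d a then vt n2 \<beta>2 n1 \<gamma>2 \<gamma>1 else 0) * pent_common n2 \<beta>2 n1 \<gamma>2 \<gamma>1)"
  proof (rule sum.cong[OF refl], rule sum.cong[OF refl])
    fix n2 \<beta>2 assume n2: "n2 \<in> chan a b" and "\<beta>2 \<in> {..<N a b n2}"
    have "(\<Sum>n1\<in>chan d n2. \<Sum>\<gamma>2<N d n2 n1. \<Sum>\<gamma>1<N f n1 g.
               (if gg C I V d a then vt n2 \<beta>2 n1 \<gamma>2 \<gamma>1 else 0) * pent_common n2 \<beta>2 n1 \<gamma>2 \<gamma>1)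
        = (\<Sum>n1\<in>pent_range. \<Sum>\<gamma>2<N d n2 n1. \<Sum>\<gamma>1<N f n1 g.
               (if gg C I V d a then vt n2 \<beta>2 n1 \<gamma>2 \<gamma>1 else 0) * pent_common n2 \<beta>2 n1 \<gamma>2 \<gamma>1)"
      by (rule sum_extend[OF pent_range_finite]) (use n2 pent_range_I in \<open>auto simp: pent_range_def chan_def\<close>)
    also have "\<dots> = (\<Sum>n1\<in>pent_range. \<Sum>\<gamma>1<N f n1 g. \<Sum>\<gamma>2<N d n2 n1.
               (if gg C I V d a then vt n2 \<beta>2 n1 \<gamma>2 \<gamma>1 else 0) * pent_common n2 \<beta>2 n1 \<gamma>2 \<gamma>1)"
      by (rule sum.cong[OF refl], rule sum.swap)
    finally show "(\<Sum>n1\<in>chan d n2. \<Sum>\<gamma>2<N d n2 n1. \<Sum>\<gamma>1<N f n1 g.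
               (if gg C I V d a then vt n2 \<beta>2 n1 \<gamma>2 \<gamma>1 else 0) * pent_common n2 \<beta>2 n1 \<gamma>2 \<gamma>1)
        = (\<Sum>n1\<in>pent_range. \<Sum>\<gamma>1<N f n1 g. \<Sum>\<gamma>2<N d n2 n1.
               (if gg C I V d a then vt n2 \<beta>2 n1 \<gamma>2 \<gamma>1 else 0) * pent_common n2 \<beta>2 n1 \<gamma>2 \<gamma>1)" .
  qed
  also have "\<dots> = (\<Sum>n2\<in>chan a b. \<Sum>n1\<in>pent_range. \<Sum>\<gamma>1<N f n1 g. \<Sum>\<beta>2<N a b n2. \<Sum>\<gamma>2<N d n2 n1.
               (if gg C I V d a then vt n2 \<beta>2 n1 \<gamma>2 \<gamma>1 else 0) * pent_common n2 \<beta>2 n1 \<gamma>2 \<gamma>1)"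
    by (rule sum.cong[OF refl], rule sum_move_inside2)
  also have "\<dots> = (\<Sum>n1\<in>pent_range. \<Sum>\<gamma>1<N f n1 g. \<Sum>n2\<in>chan a b. \<Sum>\<beta>2<N a b n2. \<Sum>\<gamma>2<N d n2 n1.
               (if gg C I V d a then vt n2 \<beta>2 n1 \<gamma>2 \<gamma>1 else 0) * pent_common n2 \<beta>2 n1 \<gamma>2 \<gamma>1)"
    by (rule sum_move_inside2)
  finally show ?thesis .
qed

lemma pent_core: "pent_lhs v f d p a h b g \<delta>1 \<delta>2 \<delta>3 = pent_rhs v f d p a h b g \<delta>1 \<delta>2 \<delta>3"
  unfolding pent_lhs_step1 pent_lhs_step2 pent_lhs_step3 pent_rhs_step1 pent_rhs_step2
  by (intro sum.cong refl) simp

end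

lemma pent_lhs_entry:
  assumes I: "f \<in> I" "d \<in> I" "p \<in> I" "a \<in> I" "h \<in> I" "b \<in> I" "g \<in> I"
    and \<delta>: "\<delta>1 < N h b g" "\<delta>2 < N p a h" "\<delta>3 < N f d p"
  shows "op23 (tau C I V N eb ed) (op13 (tau C I V N eb ed) (op12 (tau C I V N eb ed) v))
           (h, b, g, \<delta>1) (p, a, h, \<delta>2) (f, d, p, \<delta>3) = pent_lhs v f d p a h b g \<delta>1 \<delta>2 \<delta>3"
proof -
  let ?T = "tau C I V N eb ed"
  have "op23 ?T (op13 ?T (op12 ?T v)) (h, b, g, \<delta>1) (p, a, h, \<delta>2) (f, d, p, \<delta>3)
     = tau_entry_sum (\<lambda>x y. op13 ?T (op12 ?T v) (h, b, g, \<delta>1) x y) f d p a h \<delta>2 \<delta>3"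
    by (rule op23_tau) (use I \<delta> in auto)
  also have "\<dots> = pent_lhs v f d p a h b g \<delta>1 \<delta>2 \<delta>3"
    unfolding tau_entry_sum_def pent_lhs_def
  proof (intro sum.cong refl)
    fix n \<beta> \<gamma> assume n: "n \<in> chan d a" and \<beta>: "\<beta> \<in> {..<N d a n}" and \<gamma>: "\<gamma> \<in> {..<N f n h}"
    have nI: "n \<in> I" using n chan_I by blast
    have "op13 ?T (op12 ?T v) (h, b, g, \<delta>1) (d, a, n, \<beta>) (f, n, h, \<gamma>)
       = tau_entry_sum (\<lambda>x y. op12 ?T v x (d, a, n, \<beta>) y) f n h b g \<delta>1 \<gamma>"
      by (rule op13_tau) (use I \<delta> nI \<gamma> in auto)
    also have "\<dots> = (\<Sum>n1\<in>chan n b. \<Sum>\<beta>1<N n b n1. \<Sum>\<gamma>1<N f n1 g.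
       (\<Sum>n2\<in>chan a b. \<Sum>\<beta>2<N a b n2. \<Sum>\<gamma>2<N d n2 n1.
          v (a, b, n2, \<beta>2) (d, n2, n1, \<gamma>2) (f, n1, g, \<gamma>1) * tau_coef d a n b n1 n2 \<beta>1 \<beta> \<beta>2 \<gamma>2)
       * tau_coef f n h b g n1 \<delta>1 \<gamma> \<beta>1 \<gamma>1)"
      unfolding tau_entry_sum_def
      by (intro sum.cong refl) (use I nI \<beta> chan_I in \<open>simp add: op12_tau tau_entry_sum_def\<close>)
    finally show "op13 ?T (op12 ?T v) (h, b, g, \<delta>1) (d, a, n, \<beta>) (f, n, h, \<gamma>) * tau_coef f d p a h n \<delta>2 \<delta>3 \<beta> \<gamma> =
      (\<Sum>n1\<in>chan n b. \<Sum>\<beta>1<N n b n1. \<Sum>\<gamma>1<N f n1 g.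
       (\<Sum>n2\<in>chan a b. \<Sum>\<beta>2<N a b n2. \<Sum>\<gamma>2<N d n2 n1.
          v (a, b, n2, \<beta>2) (d, n2, n1, \<gamma>2) (f, n1, g, \<gamma>1) * tau_coef d a n b n1 n2 \<beta>1 \<beta> \<beta>2 \<gamma>2)
       * tau_coef f n h b g n1 \<delta>1 \<gamma> \<beta>1 \<gamma>1) * tau_coef f d p a h n \<delta>2 \<delta>3 \<beta> \<gamma>" by simp
  qed
  finally show ?thesis .
qed

lemma pent_rhs_entry:
  assumes I: "f \<in> I" "d \<in> I" "p \<in> I" "a \<in> I" "h \<in> I" "b \<in> I" "g \<in> I"
    and \<delta>: "\<delta>1 < N h b g" "\<delta>2 < N p a h" "\<delta>3 < N f d p"
  shows "op12 (tau C I V N eb ed) (op23 (tau C I V N eb ed) (op21_3 (lpi C I V N) v))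
           (h, b, g, \<delta>1) (p, a, h, \<delta>2) (f, d, p, \<delta>3) = pent_rhs v f d p a h b g \<delta>1 \<delta>2 \<delta>3"
proof -
  let ?T = "tau C I V N eb ed"
  let ?lv = "op21_3 (lpi C I V N) v"
  have "op12 ?T (op23 ?T ?lv) (h, b, g, \<delta>1) (p, a, h, \<delta>2) (f, d, p, \<delta>3)
     = tau_entry_sum (\<lambda>x y. op23 ?T ?lv x y (f, d, p, \<delta>3)) p a h b g \<delta>1 \<delta>2"
    by (rule op12_tau) (use I \<delta> in auto)
  also have "\<dots> = pent_rhs v f d p a h b g \<delta>1 \<delta>2 \<delta>3"
    unfolding tau_entry_sum_def pent_rhs_def
  proof (intro sum.cong refl)
    fix n2 \<beta>2 \<gamma> assume n2: "n2 \<in> chan a b" and \<beta>2: "\<beta>2 \<in> {..<N a b n2}" and \<gamma>: "\<gamma> \<in> {..<N p n2 g}"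
    have n2I: "n2 \<in> I" using n2 chan_I by blast
    have lv: "?lv (a, b, n2, \<beta>2) (d, n2, n1, \<gamma>2) (f, n1, g, \<gamma>1) =
        (if gg C I V d a then v (a, b, n2, \<beta>2) (d, n2, n1, \<gamma>2) (f, n1, g, \<gamma>1) else 0)"
      if "n1 \<in> chan d n2" "\<gamma>2 < N d n2 n1" for n1 \<gamma>2 \<gamma>1
      using that I n2I \<beta>2 chan_I by (simp add: op21_3_def lpi_def bidx_def)
    have "op23 ?T ?lv (a, b, n2, \<beta>2) (p, n2, g, \<gamma>) (f, d, p, \<delta>3)
       = tau_entry_sum (\<lambda>x y. ?lv (a, b, n2, \<beta>2) x y) f d p n2 g \<gamma> \<delta>3"
      by (rule op23_tau) (use I \<delta> n2I \<gamma> in auto)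
    also have "\<dots> = (\<Sum>n1\<in>chan d n2. \<Sum>\<gamma>2<N d n2 n1. \<Sum>\<gamma>1<N f n1 g.
        (if gg C I V d a then v (a, b, n2, \<beta>2) (d, n2, n1, \<gamma>2) (f, n1, g, \<gamma>1) else 0)
        * tau_coef f d p n2 g n1 \<gamma> \<delta>3 \<gamma>2 \<gamma>1)"
      unfolding tau_entry_sum_def by (intro sum.cong refl) (simp add: lv)
    finally show "op23 ?T ?lv (a, b, n2, \<beta>2) (p, n2, g, \<gamma>) (f, d, p, \<delta>3) * tau_coef p a h b g n2 \<delta>1 \<delta>2 \<beta>2 \<gamma> =
      (\<Sum>n1\<in>chan d n2. \<Sum>\<gamma>2<N d n2 n1. \<Sum>\<gamma>1<N f n1 g.
        (if gg C I V d a then v (a, b, n2, \<beta>2) (d, n2, n1, \<gamma>2) (f, n1, g, \<gamma>1) else 0)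
        * tau_coef f d p n2 g n1 \<gamma> \<delta>3 \<gamma>2 \<gamma>1) * tau_coef p a h b g n2 \<delta>1 \<delta>2 \<beta>2 \<gamma>" by simp
  qed
  finally show ?thesis .
qed

text \<open>Outside the admissible entries both sides vanish, because \<open>\<tau>\<close> does.\<close>

lemma pent_lhs_vanish:
  assumes "\<not> (p' = p \<and> h' = h \<and> f \<in> I \<and> d \<in> I \<and> p \<in> I \<and> a \<in> I \<and> h \<in> I \<and> b \<in> I \<and> g \<in> I \<and>
              \<delta>1 < N h b g \<and> \<delta>2 < N p a h \<and> \<delta>3 < N f d p)"
  shows "op23 (tau C I V N eb ed) (op13 (tau C I V N eb ed) (op12 (tau C I V N eb ed) v))
           (h, b, g, \<delta>1) (p, a, h', \<delta>2) (f, d, p', \<delta>3) = 0"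
proof (cases "p' = p \<and> f \<in> I \<and> d \<in> I \<and> p \<in> I \<and> a \<in> I \<and> h' \<in> I \<and> \<delta>3 < N f d p \<and> \<delta>2 < N p a h'")
  case True
  with assms have "\<not> (h' = h \<and> b \<in> I \<and> g \<in> I \<and> \<delta>1 < N h b g)" by auto
  with True show ?thesis by (auto simp: op23_def op13_def tau_entry tau_entry_sum_def intro!: sum.neutral)
qed (auto simp: op23_def tau_entry)

lemma pent_rhs_vanish:
  assumes "\<not> (p' = p \<and> h' = h \<and> f \<in> I \<and> d \<in> I \<and> p \<in> I \<and> a \<in> I \<and> h \<in> I \<and> b \<in> I \<and> g \<in> I \<and>
              \<delta>1 < N h b g \<and> \<delta>2 < N p a h \<and> \<delta>3 < N f d p)"
  shows "op12 (tau C I V N eb ed) (op23 (tau C I V N eb ed) (op21_3 (lpi C I V N) v))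
           (h, b, g, \<delta>1) (p, a, h', \<delta>2) (f, d, p', \<delta>3) = 0"
proof (cases "h' = h \<and> p \<in> I \<and> a \<in> I \<and> h \<in> I \<and> b \<in> I \<and> g \<in> I \<and> \<delta>2 < N p a h \<and> \<delta>1 < N h b g")
  case True
  with assms have "\<not> (p' = p \<and> f \<in> I \<and> d \<in> I \<and> \<delta>3 < N f d p)" by auto
  with True show ?thesis by (auto simp: op12_def op23_def tau_entry tau_entry_sum_def intro!: sum.neutral)
qed (auto simp: op12_def tau_entry)

theorem pentagon:
  "op23 (tau C I V N eb ed) (op13 (tau C I V N eb ed) (op12 (tau C I V N eb ed) v))
   = op12 (tau C I V N eb ed) (op23 (tau C I V N eb ed) (op21_3 (lpi C I V N) v))"
proof (intro ext)
  fix P1 P2 P3 :: "'i \<times> 'i \<times> 'i \<times> nat"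
  obtain h b g \<delta>1 where p1: "P1 = (h, b, g, \<delta>1)" by (cases P1) auto
  obtain p a h' \<delta>2 where p2: "P2 = (p, a, h', \<delta>2)" by (cases P2) auto
  obtain f d p' \<delta>3 where p3: "P3 = (f, d, p', \<delta>3)" by (cases P3) auto
  show "op23 (tau C I V N eb ed) (op13 (tau C I V N eb ed) (op12 (tau C I V N eb ed) v)) P1 P2 P3
      = op12 (tau C I V N eb ed) (op23 (tau C I V N eb ed) (op21_3 (lpi C I V N) v)) P1 P2 P3"
  proof (cases "p' = p \<and> h' = h \<and> f \<in> I \<and> d \<in> I \<and> p \<in> I \<and> a \<in> I \<and> h \<in> I \<and> b \<in> I \<and> g \<in> I \<and>
                \<delta>1 < N h b g \<and> \<delta>2 < N p a h \<and> \<delta>3 < N f d p")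
    case True
    then show ?thesis unfolding p1 p2 p3 using pent_lhs_entry pent_rhs_entry pent_core by auto
  next
    case False
    then show ?thesis unfolding p1 p2 p3 using pent_lhs_vanish pent_rhs_vanish by metis
  qed
qed

end

theorem lemma3:
  fixes C :: "('o, 'm, 'k::field) mcat"
    and I :: "'i set" and V :: "'i \<Rightarrow> 'o" and st :: "'i \<Rightarrow> 'i"
    and b d :: "'i \<Rightarrow> 'm"
    and N :: "'i \<Rightarrow> 'i \<Rightarrow> 'i \<Rightarrow> nat"
    and eb ed :: "'i \<Rightarrow> 'i \<Rightarrow> 'i \<Rightarrow> nat \<Rightarrow> 'm"
  assumes "psi_system C I V st b d"
    and "dual_bases C I V N eb ed"
  shows "(\<forall>v. inT3 I N v \<longrightarrow>
           op23 (tau C I V N eb ed) (op13 (tau C I V N eb ed) (op12 (tau C I V N eb ed) v))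
         = op12 (tau C I V N eb ed) (op23 (tau C I V N eb ed) (op21_3 (lpi C I V N) v))) \<and>
         (\<forall>v. inT2 I N v \<longrightarrow> op21 (tau C I V N eb ed) (taubar C I V N eb ed v) = rpi C I V N v) \<and>
         (\<forall>v. inT2 I N v \<longrightarrow> taubar C I V N eb ed (op21 (tau C I V N eb ed) v) = lpi C I V N v)"
proof -
  interpret psi_bases C I V st b d N eb ed
    using assms by unfold_locales
  show ?thesis using pentagon inversion_right inversion_left by blast
qed

end
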